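(* Let $R$ be a ring with a separated filtration $u:R\to\mathbb{Z}\cup\{\infty\}$ with respect to which $R$ is complete, and let $(\sigma,\delta)$ be a skew derivation on $R$ compatible with $u$. (i) The left $R$-module $R^b[[x;\sigma,\delta]]=\{\sum_{n\ge0}r_nx^n: r_n\in R,\ u(r_n)+\tfrac12n\to\infty\text{ as }n\to\infty\}$ is a ring, with multiplication given by extending the rule $xa=\sigma(a)x+\delta(a)$ ($a\in R$) to a continuous $R$-linear multiplication in a unique way. (ii) Define $f_u:R^b[[x;\sigma,\delta]]\to\tfrac12\mathbb{Z}\cup\{\infty\}$ by $f_u(\sum_{i\ge0}r_ix^i)=\inf_{i\ge0}\{u(r_i)+\tfrac12 i\}$, and identify $R$ with the subring of constant series. Then $f_u$ is a ring filtration with $f_u|_R=u$, $R^b[[x;\sigma,\delta]]$ is complete with respect to $f_u$, and the identity on $\mathrm{gr}_u(R)$ extends to an isomorphism of graded rings $\mathrm{gr}_{f_u}(R^b[[x;\sigma,\delta]])\to(\mathrm{gr}_u(R))[Z]$ mapping (the principal symbol of) $x$ to $Z$.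
   Context: A filtration satisfies $u(0)=\infty$, $u(x+y)\ge\min\{u(x),u(y)\}$, $u(xy)\ge u(x)+u(y)$; separated means $u(x)=\infty\iff x=0$; $\mathrm{gr}_u(R)=\bigoplus_\lambda F_\lambda R/F_{\lambda^+}R$ with $F_\lambda R=\{u\ge\lambda\}$, $F_{\lambda^+}R=\{u>\lambda\}$. A skew derivation is $(\sigma,\delta)$ with $\sigma$ an automorphism and $\delta$ additive with $\delta(ab)=\delta(a)b+\sigma(a)\delta(b)$; it is compatible with $u$ if $\deg_u(\sigma-\mathrm{id})>0$ and $\deg_u(\delta)>0$, where $\deg_u(d)=\inf_{x\ne0}\{u(d(x))-u(x)\}$. *)

theory Defs
  imports Complex_Main "HOL-Algebra.QuotRing" "HOL-Algebra.UnivPoly" "HOL-Library.Extended_Real"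
begin

text \<open>Ring filtration: v(0) = infinity, v(x+y) >= min, v(xy) >= v x + v y; we also
  require v(-x) = v x, so that the sets F_lambda are additive subgroups.\<close>
definition is_filtration :: "('a, 'm) ring_scheme \<Rightarrow> ('a \<Rightarrow> ereal) \<Rightarrow> bool" where
  "is_filtration A v \<longleftrightarrow>
     v \<zero>\<^bsub>A\<^esub> = \<infinity> \<and>
     (\<forall>x\<in>carrier A. \<forall>y\<in>carrier A. min (v x) (v y) \<le> v (x \<oplus>\<^bsub>A\<^esub> y)) \<and>
     (\<forall>x\<in>carrier A. \<forall>y\<in>carrier A. v x + v y \<le> v (x \<otimes>\<^bsub>A\<^esub> y)) \<and>
     (\<forall>x\<in>carrier A. v (\<ominus>\<^bsub>A\<^esub> x) = v x)"

definition separated :: "('a, 'm) ring_scheme \<Rightarrow> ('a \<Rightarrow> ereal) \<Rightarrow> bool" where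
  "separated A v \<longleftrightarrow> (\<forall>x\<in>carrier A. v x = \<infinity> \<longleftrightarrow> x = \<zero>\<^bsub>A\<^esub>)"

definition filt_converges :: "('a, 'm) ring_scheme \<Rightarrow> ('a \<Rightarrow> ereal) \<Rightarrow> (nat \<Rightarrow> 'a) \<Rightarrow> 'a \<Rightarrow> bool" where
  "filt_converges A v s l \<longleftrightarrow> ((\<lambda>n. v (s n \<ominus>\<^bsub>A\<^esub> l)) \<longlonglongrightarrow> \<infinity>)"

definition filt_cauchy :: "('a, 'm) ring_scheme \<Rightarrow> ('a \<Rightarrow> ereal) \<Rightarrow> (nat \<Rightarrow> 'a) \<Rightarrow> bool" where
  "filt_cauchy A v s \<longleftrightarrow>
     (\<forall>M::real. \<exists>N. \<forall>m\<ge>N. \<forall>n\<ge>N. ereal M \<le> v (s m \<ominus>\<^bsub>A\<^esub> s n))"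

definition filt_complete :: "('a, 'm) ring_scheme \<Rightarrow> ('a \<Rightarrow> ereal) \<Rightarrow> bool" where
  "filt_complete A v \<longleftrightarrow>
     (\<forall>s. range s \<subseteq> carrier A \<longrightarrow> filt_cauchy A v s \<longrightarrow>
          (\<exists>l\<in>carrier A. filt_converges A v s l))"

definition Fil :: "('a, 'm) ring_scheme \<Rightarrow> ('a \<Rightarrow> ereal) \<Rightarrow> real \<Rightarrow> 'a set" where
  "Fil A v lam = {x\<in>carrier A. ereal lam \<le> v x}"

definition Fil_plus :: "('a, 'm) ring_scheme \<Rightarrow> ('a \<Rightarrow> ereal) \<Rightarrow> real \<Rightarrow> 'a set" where
  "Fil_plus A v lam = {x\<in>carrier A. ereal lam < v x}"

definition gr_cls :: "('a, 'm) ring_scheme \<Rightarrow> ('a \<Rightarrow> ereal) \<Rightarrow> real \<Rightarrow> 'a \<Rightarrow> 'a set" where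
  "gr_cls A v lam r = (\<lambda>y. r \<oplus>\<^bsub>A\<^esub> y) ` Fil_plus A v lam"

definition gr_rep :: "'a set \<Rightarrow> 'a" where
  "gr_rep S = (SOME r. r \<in> S)"

text \<open>Elements of gr: families (g lambda)_lambda of classes, finitely many nonzero.\<close>
definition gr_supp :: "('a, 'm) ring_scheme \<Rightarrow> ('a \<Rightarrow> ereal) \<Rightarrow> (real \<Rightarrow> 'a set) \<Rightarrow> real set" where
  "gr_supp A v g = {lam. g lam \<noteq> Fil_plus A v lam}"

definition gr :: "('a, 'm) ring_scheme \<Rightarrow> ('a \<Rightarrow> ereal) \<Rightarrow> (real \<Rightarrow> 'a set) ring" where
  "gr A v = \<lparr>
     carrier = {g. (\<forall>lam. \<exists>r\<in>Fil A v lam. g lam = gr_cls A v lam r) \<and> finite (gr_supp A v g)},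
     mult = (\<lambda>g h lam. gr_cls A v lam
              (finsum A (\<lambda>mu. gr_rep (g mu) \<otimes>\<^bsub>A\<^esub> gr_rep (h (lam - mu))) (gr_supp A v g))),
     one = (\<lambda>lam. if lam = 0 then gr_cls A v 0 \<one>\<^bsub>A\<^esub> else Fil_plus A v lam),
     zero = (\<lambda>lam. Fil_plus A v lam),
     add = (\<lambda>g h lam. gr_cls A v lam (gr_rep (g lam) \<oplus>\<^bsub>A\<^esub> gr_rep (h lam))) \<rparr>"

definition gr_sym :: "('a, 'm) ring_scheme \<Rightarrow> ('a \<Rightarrow> ereal) \<Rightarrow> real \<Rightarrow> 'a \<Rightarrow> (real \<Rightarrow> 'a set)" where
  "gr_sym A v lam r = (\<lambda>mu. if mu = lam then gr_cls A v lam r else Fil_plus A v mu)"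

definition gr_hom :: "('a, 'm) ring_scheme \<Rightarrow> ('a \<Rightarrow> ereal) \<Rightarrow> real \<Rightarrow> (real \<Rightarrow> 'a set) set" where
  "gr_hom A v lam = {g\<in>carrier (gr A v). \<forall>mu. mu \<noteq> lam \<longrightarrow> g mu = Fil_plus A v mu}"

text \<open>Homogeneous elements of degree lam of the polynomial ring gr_v(A)[Z], where Z has degree 1/2.\<close>
definition grpoly_hom :: "('a, 'm) ring_scheme \<Rightarrow> ('a \<Rightarrow> ereal) \<Rightarrow> real \<Rightarrow> (nat \<Rightarrow> real \<Rightarrow> 'a set) set" where
  "grpoly_hom A v lam = {p\<in>carrier (UP (gr A v)). \<forall>i. p i \<in> gr_hom A v (lam - real i / 2)}"

definition ring_of :: "'a::ring_1 itself \<Rightarrow> 'a ring" where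
  "ring_of _ = \<lparr> carrier = UNIV, mult = (*), one = 1, zero = 0, add = (+) \<rparr>"

abbreviation RR :: "'a::ring_1 ring" where "RR \<equiv> ring_of TYPE('a)"

definition skew_derivation :: "('a::ring_1 \<Rightarrow> 'a) \<Rightarrow> ('a \<Rightarrow> 'a) \<Rightarrow> bool" where
  "skew_derivation \<sigma> \<delta> \<longleftrightarrow>
     bij \<sigma> \<and> (\<forall>a b. \<sigma> (a + b) = \<sigma> a + \<sigma> b) \<and> (\<forall>a b. \<sigma> (a * b) = \<sigma> a * \<sigma> b) \<and> \<sigma> 1 = 1 \<and>
     (\<forall>a b. \<delta> (a + b) = \<delta> a + \<delta> b) \<and> (\<forall>a b. \<delta> (a * b) = \<delta> a * b + \<sigma> a * \<delta> b)"

definition deg_u :: "('a::ring_1 \<Rightarrow> ereal) \<Rightarrow> ('a \<Rightarrow> 'a) \<Rightarrow> ereal" where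
  "deg_u u d = (INF x\<in>{x. x \<noteq> 0}. u (d x) - u x)"

definition compatible :: "('a::ring_1 \<Rightarrow> ereal) \<Rightarrow> ('a \<Rightarrow> 'a) \<Rightarrow> ('a \<Rightarrow> 'a) \<Rightarrow> bool" where
  "compatible u \<sigma> \<delta> \<longleftrightarrow> deg_u u (\<lambda>x. \<sigma> x - x) > 0 \<and> deg_u u \<delta> > 0"

text \<open>A series sum r_n x^n is represented by its coefficient sequence r.\<close>
definition bseries :: "('a::ring_1 \<Rightarrow> ereal) \<Rightarrow> (nat \<Rightarrow> 'a) set" where
  "bseries u = {r. ((\<lambda>n. u (r n) + ereal (real n / 2)) \<longlonglongrightarrow> \<infinity>)}"

definition f_u :: "('a::ring_1 \<Rightarrow> ereal) \<Rightarrow> (nat \<Rightarrow> 'a) \<Rightarrow> ereal" where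
  "f_u u r = (INF i. u (r i) + ereal (real i / 2))"

definition const_s :: "'a::ring_1 \<Rightarrow> nat \<Rightarrow> 'a" where
  "const_s a = (\<lambda>n. if n = 0 then a else 0)"

definition xpow :: "nat \<Rightarrow> nat \<Rightarrow> 'a::ring_1" where
  "xpow k = (\<lambda>n. if n = k then 1 else 0)"

definition lsmult :: "'a::ring_1 \<Rightarrow> (nat \<Rightarrow> 'a) \<Rightarrow> nat \<Rightarrow> 'a" where
  "lsmult a F = (\<lambda>n. a * F n)"

definition s_add :: "(nat \<Rightarrow> 'a::ring_1) \<Rightarrow> (nat \<Rightarrow> 'a) \<Rightarrow> nat \<Rightarrow> 'a" where
  "s_add F G = (\<lambda>n. F n + G n)"

definition s_conv :: "('a::ring_1 \<Rightarrow> ereal) \<Rightarrow> (nat \<Rightarrow> nat \<Rightarrow> 'a) \<Rightarrow> (nat \<Rightarrow> 'a) \<Rightarrow> bool" where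
  "s_conv u Fs F \<longleftrightarrow> ((\<lambda>k. f_u u (\<lambda>n. Fs k n - F n)) \<longlonglongrightarrow> \<infinity>)"

definition BRing :: "('a::ring_1 \<Rightarrow> ereal) \<Rightarrow> ((nat \<Rightarrow> 'a) \<Rightarrow> (nat \<Rightarrow> 'a) \<Rightarrow> (nat \<Rightarrow> 'a)) \<Rightarrow> (nat \<Rightarrow> 'a) ring" where
  "BRing u mul = \<lparr> carrier = bseries u, mult = mul, one = const_s 1, zero = (\<lambda>n. 0), add = s_add \<rparr>"

definition skew_mult_ok :: "('a::ring_1 \<Rightarrow> ereal) \<Rightarrow> ('a \<Rightarrow> 'a) \<Rightarrow> ('a \<Rightarrow> 'a) \<Rightarrow>
    ((nat \<Rightarrow> 'a) \<Rightarrow> (nat \<Rightarrow> 'a) \<Rightarrow> (nat \<Rightarrow> 'a)) \<Rightarrow> bool" where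
  "skew_mult_ok u \<sigma> \<delta> mul \<longleftrightarrow>
     ring (BRing u mul) \<and>
     (\<forall>a. \<forall>F\<in>bseries u. \<forall>G\<in>bseries u. mul (lsmult a F) G = lsmult a (mul F G)) \<and>
     (\<forall>a. \<forall>F\<in>bseries u. mul (const_s a) F = lsmult a F) \<and>
     (\<forall>a. mul (xpow 1) (const_s a) = s_add (lsmult (\<sigma> a) (xpow 1)) (const_s (\<delta> a))) \<and>
     (\<forall>n. mul (xpow n) (xpow 1) = xpow (Suc n)) \<and>
     (\<forall>Fs Gs F G. (\<forall>k. Fs k \<in> bseries u) \<longrightarrow> (\<forall>k. Gs k \<in> bseries u) \<longrightarrow>
         F \<in> bseries u \<longrightarrow> G \<in> bseries u \<longrightarrow> s_conv u Fs F \<longrightarrow> s_conv u Gs G \<longrightarrow>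
         s_conv u (\<lambda>k. mul (Fs k) (Gs k)) (mul F G))"

definition gr_incl :: "('a::ring_1 \<Rightarrow> ereal) \<Rightarrow> ((nat \<Rightarrow> 'a) \<Rightarrow> (nat \<Rightarrow> 'a) \<Rightarrow> (nat \<Rightarrow> 'a)) \<Rightarrow>
    (real \<Rightarrow> 'a set) \<Rightarrow> (real \<Rightarrow> (nat \<Rightarrow> 'a) set)" where
  "gr_incl u mul g = (\<lambda>lam. gr_cls (BRing u mul) (f_u u) lam (const_s (gr_rep (g lam))))"

end

theory Submission
  imports Defs
begin

text \<open>
  The rule \<open>x a = \<sigma>(a) x + \<delta>(a)\<close> forces left multiplication by \<open>x\<close> on a series
  \<open>\<Sum> r\<^sub>n x\<^sup>n\<close> to be the operator with coefficients \<open>\<sigma>(r\<^sub>n\<^sub>-\<^sub>1) + \<delta>(r\<^sub>n)\<close>. Compatibility makes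
  this operator raise \<open>f\<^sub>u\<close> by \<open>1/2\<close>, so for series \<open>F\<close>, \<open>G\<close> in \<open>R\<^sup>b[[x;\<sigma>,\<delta>]]\<close> the terms of
  \<open>\<Sum>\<^sub>i F\<^sub>i (x\<^sup>i G)\<close> tend to zero coefficientwise and, \<open>R\<close> being complete, the sum defines
  a product. Any continuous \<open>R\<close>-linear multiplication obeying the rule agrees with it on
  polynomials, hence everywhere.

  Modulo terms of strictly larger filtration \<open>\<sigma>\<close> acts as the identity and \<open>\<delta>\<close> as zero,
  so the principal symbol of a product is the untwisted convolution of principal
  symbols. Sending a homogeneous element of degree \<open>\<lambda>\<close> to the polynomial whose
  \<open>i\<close>-th coefficient is the class of its \<open>i\<close>-th coefficient in degree \<open>\<lambda> - i/2\<close>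
  is therefore a graded ring isomorphism onto \<open>gr\<^sub>u(R)[Z]\<close>.
\<close>

lemma ereal_le_add_iff: "ereal r \<le> x + ereal c \<longleftrightarrow> ereal (r - c) \<le> x"
  by (cases x) auto

lemma ereal_less_add_iff: "ereal r < x + ereal c \<longleftrightarrow> ereal (r - c) < x"
  by (cases x) auto

lemma ereal_add_strict: "ereal a < x \<Longrightarrow> ereal b \<le> y \<Longrightarrow> ereal (a + b) < x + y"
  by (cases x; cases y) auto

lemma ereal_sum_le:
  fixes x y z :: ereal
  assumes "x \<noteq> -\<infinity>" "y \<noteq> -\<infinity>" "\<And>a b. ereal a \<le> x \<Longrightarrow> ereal b \<le> y \<Longrightarrow> ereal (a + b) \<le> z"
  shows "x + y \<le> z"
proof -
  obtain a0 where a0: "ereal a0 \<le> x" using assms(1) by (cases x) auto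
  obtain b0 where b0: "ereal b0 \<le> y" using assms(2) by (cases y) auto
  show ?thesis
  proof (cases "x = \<infinity> \<or> y = \<infinity>")
    case True
    have "ereal B \<le> z" for B
    proof (cases "x = \<infinity>")
      case True
      then have "ereal (B - b0) \<le> x" by simp
      from assms(3)[OF this b0] show ?thesis by simp
    next
      case False
      then have "y = \<infinity>" using \<open>x = \<infinity> \<or> y = \<infinity>\<close> by simp
      then have "ereal (B - a0) \<le> y" by simp
      from assms(3)[OF a0 this] show ?thesis by simp
    qed
    then have "z = \<infinity>" using ereal_top by blast
    then show ?thesis by simp
  next
    case False
    then obtain a b where "x = ereal a" "y = ereal b" using assms(1,2) by (cases x; cases y) auto
    then show ?thesis using assms(3)[of a b] by simp
  qed
qed

lemma UP_mult_eq: "p \<in> carrier (UP R) \<Longrightarrow> q \<in> carrier (UP R) \<Longrightarrow>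
   p \<otimes>\<^bsub>UP R\<^esub> q = (\<lambda>n. \<Oplus>\<^bsub>R\<^esub>i \<in> {..n}. p i \<otimes>\<^bsub>R\<^esub> q (n - i))"
  by (simp add: UP_def)

lemma UP_add_eq: "p \<in> carrier (UP R) \<Longrightarrow> q \<in> carrier (UP R) \<Longrightarrow>
   p \<oplus>\<^bsub>UP R\<^esub> q = (\<lambda>i. p i \<oplus>\<^bsub>R\<^esub> q i)"
  by (simp add: UP_def)

lemma UP_one_eq: "\<one>\<^bsub>UP R\<^esub> = (\<lambda>i. if i = 0 then \<one>\<^bsub>R\<^esub> else \<zero>\<^bsub>R\<^esub>)"
  by (simp add: UP_def)

lemma UP_monom_eq: "a \<in> carrier R \<Longrightarrow> monom (UP R) a n = (\<lambda>i. if i = n then a else \<zero>\<^bsub>R\<^esub>)"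
  by (simp add: UP_def)

lemma UP_carrier_iff: "p \<in> carrier (UP R) \<longleftrightarrow> (\<forall>i. p i \<in> carrier R) \<and> (\<exists>n. \<forall>m>n. p m = \<zero>\<^bsub>R\<^esub>)"
  by (auto simp: UP_def up_def bound_def)

section \<open>Filtered rings and their associated graded rings\<close>

context
  fixes A :: "('a, 'm) ring_scheme" (structure) and v :: "'a \<Rightarrow> ereal"
  assumes R: "ring A" and Fv: "is_filtration A v"
begin

interpretation ring A by (rule R)

lemma filtration_zero: "v \<zero> = \<infinity>" using Fv unfolding is_filtration_def by blast

lemma filtration_add: "x \<in> carrier A \<Longrightarrow> y \<in> carrier A \<Longrightarrow> min (v x) (v y) \<le> v (x \<oplus> y)"
  using Fv unfolding is_filtration_def by blast

lemma filtration_mult: "x \<in> carrier A \<Longrightarrow> y \<in> carrier A \<Longrightarrow> v x + v y \<le> v (x \<otimes> y)"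
  using Fv unfolding is_filtration_def by blast

lemma filtration_uminus: "x \<in> carrier A \<Longrightarrow> v (\<ominus> x) = v x"
  using Fv unfolding is_filtration_def by blast

lemma Fil_plus_subset: "Fil_plus A v lam \<subseteq> carrier A" unfolding Fil_plus_def by auto

lemma Fil_plus_zero: "\<zero> \<in> Fil_plus A v lam" unfolding Fil_plus_def by (simp add: filtration_zero)

lemma Fil_plus_add: "x \<in> Fil_plus A v lam \<Longrightarrow> y \<in> Fil_plus A v lam \<Longrightarrow> x \<oplus> y \<in> Fil_plus A v lam"
  unfolding Fil_plus_def
proof (clarsimp)
  assume "x \<in> carrier A" "ereal lam < v x" "y \<in> carrier A" "ereal lam < v y"
  then have "ereal lam < min (v x) (v y)" by simp
  then show "ereal lam < v (x \<oplus> y)" by (rule less_le_trans) (rule filtration_add; fact)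
qed

lemma Fil_plus_uminus: "x \<in> Fil_plus A v lam \<Longrightarrow> \<ominus> x \<in> Fil_plus A v lam"
  unfolding Fil_plus_def by (simp add: filtration_uminus)

lemma Fil_plus_diff: "x \<in> Fil_plus A v lam \<Longrightarrow> y \<in> Fil_plus A v lam \<Longrightarrow> x \<ominus> y \<in> Fil_plus A v lam"
  unfolding a_minus_def by (intro Fil_plus_add Fil_plus_uminus)

lemma Fil_plus_subset_Fil: "Fil_plus A v lam \<subseteq> Fil A v lam"
  unfolding Fil_plus_def Fil_def by auto

lemma Fil_subset: "Fil A v lam \<subseteq> carrier A" unfolding Fil_def by auto

lemma Fil_zero: "\<zero> \<in> Fil A v lam" unfolding Fil_def by (simp add: filtration_zero)

lemma Fil_add: "x \<in> Fil A v lam \<Longrightarrow> y \<in> Fil A v lam \<Longrightarrow> x \<oplus> y \<in> Fil A v lam"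
  unfolding Fil_def
proof (clarsimp)
  assume "x \<in> carrier A" "ereal lam \<le> v x" "y \<in> carrier A" "ereal lam \<le> v y"
  then have "ereal lam \<le> min (v x) (v y)" by simp
  then show "ereal lam \<le> v (x \<oplus> y)" by (rule order_trans) (rule filtration_add; fact)
qed

lemma Fil_plus_mult_left:
  assumes "x \<in> Fil_plus A v a" "y \<in> Fil A v b"
  shows "x \<otimes> y \<in> Fil_plus A v (a + b)"
proof -
  have c: "x \<in> carrier A" "y \<in> carrier A" "ereal a < v x" "ereal b \<le> v y"
    using assms unfolding Fil_plus_def Fil_def by auto
  have "ereal (a + b) < v x + v y" by (rule ereal_add_strict) (use c in auto)
  also have "\<dots> \<le> v (x \<otimes> y)" by (rule filtration_mult) (use c in auto)
  finally show ?thesis unfolding Fil_plus_def using c by simp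
qed

lemma Fil_plus_mult_right:
  assumes "x \<in> Fil A v a" "y \<in> Fil_plus A v b"
  shows "x \<otimes> y \<in> Fil_plus A v (a + b)"
proof -
  have c: "x \<in> carrier A" "y \<in> carrier A" "ereal a \<le> v x" "ereal b < v y"
    using assms unfolding Fil_plus_def Fil_def by auto
  have "ereal (b + a) < v y + v x" by (rule ereal_add_strict) (use c in auto)
  then have "ereal (a + b) < v x + v y" by (simp add: add.commute)
  also have "\<dots> \<le> v (x \<otimes> y)" by (rule filtration_mult) (use c in auto)
  finally show ?thesis unfolding Fil_plus_def using c by simp
qed

lemma Fil_mult: assumes "x \<in> Fil A v a" "y \<in> Fil A v b" shows "x \<otimes> y \<in> Fil A v (a + b)"
proof -
  have c: "x \<in> carrier A" "y \<in> carrier A" "ereal a \<le> v x" "ereal b \<le> v y"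
    using assms unfolding Fil_def by auto
  have "ereal a + ereal b \<le> v x + v y" by (rule add_mono) (use c in auto)
  then have "ereal (a + b) \<le> v x + v y" by simp
  also have "\<dots> \<le> v (x \<otimes> y)" by (rule filtration_mult) (use c in auto)
  finally show ?thesis unfolding Fil_def using c by simp
qed

lemma Fil_plus_finsum: "finite I \<Longrightarrow> f \<in> I \<rightarrow> Fil_plus A v lam \<Longrightarrow> finsum A f I \<in> Fil_plus A v lam"
proof (induction I rule: finite_induct)
  case empty then show ?case by (simp add: Fil_plus_zero)
next
  case (insert x I)
  have c: "f \<in> I \<rightarrow> carrier A" "f x \<in> carrier A" using insert.prems Fil_plus_subset by auto
  show ?case using insert by (simp add: finsum_insert[OF insert(1,2) c] Fil_plus_add)
qed

lemma Fil_finsum: "finite I \<Longrightarrow> f \<in> I \<rightarrow> Fil A v lam \<Longrightarrow> finsum A f I \<in> Fil A v lam"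
proof (induction I rule: finite_induct)
  case empty then show ?case by (simp add: Fil_zero)
next
  case (insert x I)
  have c: "f \<in> I \<rightarrow> carrier A" "f x \<in> carrier A" using insert.prems Fil_subset by auto
  show ?case using insert by (simp add: finsum_insert[OF insert(1,2) c] Fil_add)
qed

lemma gr_cls_mem: "r \<in> carrier A \<Longrightarrow> x \<in> gr_cls A v lam r \<longleftrightarrow> x \<in> carrier A \<and> x \<ominus> r \<in> Fil_plus A v lam"
proof
  assume r: "r \<in> carrier A" and "x \<in> gr_cls A v lam r"
  then obtain y where y: "y \<in> Fil_plus A v lam" "x = r \<oplus> y" unfolding gr_cls_def by blast
  have yc: "y \<in> carrier A" using y Fil_plus_subset by auto
  have "x \<ominus> r = y" unfolding y(2) using r yc by algebra
  then show "x \<in> carrier A \<and> x \<ominus> r \<in> Fil_plus A v lam" using y r yc by auto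
next
  assume r: "r \<in> carrier A" and x: "x \<in> carrier A \<and> x \<ominus> r \<in> Fil_plus A v lam"
  have "x = r \<oplus> (x \<ominus> r)" using r x by algebra
  then show "x \<in> gr_cls A v lam r" unfolding gr_cls_def using x by blast
qed

lemma gr_cls_eq_iff: assumes "r \<in> carrier A" "s \<in> carrier A"
  shows "gr_cls A v lam r = gr_cls A v lam s \<longleftrightarrow> r \<ominus> s \<in> Fil_plus A v lam"
proof
  assume e: "gr_cls A v lam r = gr_cls A v lam s"
  have "r \<ominus> r = \<zero>" using assms by (simp add: a_minus_def r_neg)
  then have "r \<in> gr_cls A v lam r" using assms gr_cls_mem[of r] Fil_plus_zero by simp
  then show "r \<ominus> s \<in> Fil_plus A v lam" using e gr_cls_mem[OF assms(2)] by simp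
next
  assume d: "r \<ominus> s \<in> Fil_plus A v lam"
  have delta_compat: "r \<ominus> s \<in> carrier A" using assms by simp
  show "gr_cls A v lam r = gr_cls A v lam s"
  proof (rule Set.set_eqI)
    fix x
    show "x \<in> gr_cls A v lam r \<longleftrightarrow> x \<in> gr_cls A v lam s"
    proof (cases "x \<in> carrier A")
      case True
      have e1: "x \<ominus> s = (x \<ominus> r) \<oplus> (r \<ominus> s)" using True assms by algebra
      have e2: "x \<ominus> r = (x \<ominus> s) \<ominus> (r \<ominus> s)" using True assms by algebra
      have "x \<ominus> r \<in> Fil_plus A v lam \<longleftrightarrow> x \<ominus> s \<in> Fil_plus A v lam"
      proof
        assume "x \<ominus> r \<in> Fil_plus A v lam"
        then show "x \<ominus> s \<in> Fil_plus A v lam" unfolding e1 using d by (rule Fil_plus_add)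
      next
        assume "x \<ominus> s \<in> Fil_plus A v lam"
        then show "x \<ominus> r \<in> Fil_plus A v lam" unfolding e2 using d by (rule Fil_plus_diff)
      qed
      then show ?thesis unfolding gr_cls_mem[OF assms(1)] gr_cls_mem[OF assms(2)] using True by simp
    next
      case False then show ?thesis using gr_cls_mem assms by blast
    qed
  qed
qed

lemma gr_rep_cls: assumes "r \<in> carrier A"
  shows "gr_rep (gr_cls A v lam r) \<in> carrier A" "gr_rep (gr_cls A v lam r) \<ominus> r \<in> Fil_plus A v lam"
proof -
  have "r \<ominus> r = \<zero>" using assms by (simp add: a_minus_def r_neg)
  then have "r \<in> gr_cls A v lam r" using assms gr_cls_mem[of r] Fil_plus_zero by simp
  then have "gr_rep (gr_cls A v lam r) \<in> gr_cls A v lam r" unfolding gr_rep_def by (rule someI)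
  then show "gr_rep (gr_cls A v lam r) \<in> carrier A"
    "gr_rep (gr_cls A v lam r) \<ominus> r \<in> Fil_plus A v lam"
    using gr_cls_mem[OF assms] by auto
qed

lemma gr_cls_zero: "gr_cls A v lam \<zero> = Fil_plus A v lam"
proof -
  have "(\<lambda>y. \<zero> \<oplus> y) ` Fil_plus A v lam = (\<lambda>y. y) ` Fil_plus A v lam"
    by (rule image_cong) (auto intro!: l_zero dest: subsetD[OF Fil_plus_subset])
  then show ?thesis unfolding gr_cls_def by simp
qed

lemma gr_cls_eq_Fil_plus_iff: assumes rc: "r \<in> carrier A"
  shows "gr_cls A v lam r = Fil_plus A v lam \<longleftrightarrow> r \<in> Fil_plus A v lam"
proof -
  have "r \<ominus> \<zero> = r" using rc by (simp add: a_minus_def)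
  then show ?thesis using gr_cls_eq_iff[OF rc zero_closed, of lam] gr_cls_zero by simp
qed

lemma gr_cls_Fil_plus: "r \<in> Fil_plus A v lam \<Longrightarrow> gr_cls A v lam r = Fil_plus A v lam"
  using gr_cls_eq_Fil_plus_iff Fil_plus_subset by blast

lemma gr_carrier: "g \<in> carrier (gr A v) \<longleftrightarrow>
   (\<forall>lam. \<exists>r\<in>Fil A v lam. g lam = gr_cls A v lam r) \<and> finite (gr_supp A v g)"
  unfolding gr_def by simp

lemma gr_carrier_rep: assumes "g \<in> carrier (gr A v)"
  shows "gr_rep (g lam) \<in> Fil A v lam" "g lam = gr_cls A v lam (gr_rep (g lam))"
proof -
  obtain r where r: "r \<in> Fil A v lam" "g lam = gr_cls A v lam r" using assms gr_carrier by blast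
  have rc: "r \<in> carrier A" using r Fil_subset by auto
  have 1: "gr_rep (g lam) \<in> carrier A" "gr_rep (g lam) \<ominus> r \<in> Fil_plus A v lam"
    using gr_rep_cls[OF rc] r by auto
  have eq: "gr_rep (g lam) = (gr_rep (g lam) \<ominus> r) \<oplus> r" using 1 rc by algebra
  have a: "gr_rep (g lam) \<ominus> r \<in> Fil A v lam" using 1 Fil_plus_subset_Fil by blast
  show "gr_rep (g lam) \<in> Fil A v lam" by (subst eq) (rule Fil_add[OF a r(1)])
  have "gr_cls A v lam (gr_rep (g lam)) = gr_cls A v lam r"
    using gr_cls_eq_iff[OF 1(1) rc] 1(2) by blast
  then show "g lam = gr_cls A v lam (gr_rep (g lam))" using r(2) by simp
qed

lemma gr_rep_carrier: "g \<in> carrier (gr A v) \<Longrightarrow> gr_rep (g lam) \<in> carrier A"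
  using gr_carrier_rep Fil_subset by blast

lemma gr_rep_notin_supp: assumes "g \<in> carrier (gr A v)" "lam \<notin> gr_supp A v g"
  shows "gr_rep (g lam) \<in> Fil_plus A v lam"
proof -
  have "g lam = Fil_plus A v lam" using assms(2) gr_supp_def by blast
  have e2: "g lam = gr_cls A v lam (gr_rep (g lam))" using gr_carrier_rep(2)[OF assms(1)] .
  from e2[symmetric] \<open>g lam = Fil_plus A v lam\<close>
  have "gr_cls A v lam (gr_rep (g lam)) = Fil_plus A v lam" by (rule trans)
  then show ?thesis using gr_cls_eq_Fil_plus_iff gr_rep_carrier[OF assms(1)] by blast
qed

lemma gr_zero: "\<zero>\<^bsub>gr A v\<^esub> = (\<lambda>lam. Fil_plus A v lam)" unfolding gr_def by simp

lemma gr_add: "x \<oplus>\<^bsub>gr A v\<^esub> y = (\<lambda>lam. gr_cls A v lam (gr_rep (x lam) \<oplus> gr_rep (y lam)))"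
  unfolding gr_def by simp

lemma gr_one: "\<one>\<^bsub>gr A v\<^esub> = (\<lambda>lam. if lam = 0 then gr_cls A v 0 \<one> else Fil_plus A v lam)"
  unfolding gr_def by simp

lemma gr_mult: "x \<otimes>\<^bsub>gr A v\<^esub> y = (\<lambda>lam. gr_cls A v lam
    (finsum A (\<lambda>mu. gr_rep (x mu) \<otimes> gr_rep (y (lam - mu))) (gr_supp A v x)))"
  unfolding gr_def by simp

lemma gr_add_closed: assumes "x \<in> carrier (gr A v)" "y \<in> carrier (gr A v)"
  shows "x \<oplus>\<^bsub>gr A v\<^esub> y \<in> carrier (gr A v)"
  unfolding gr_carrier
proof
  show "\<forall>lam. \<exists>r\<in>Fil A v lam. (x \<oplus>\<^bsub>gr A v\<^esub> y) lam = gr_cls A v lam r"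
    unfolding gr_add using gr_carrier_rep[OF assms(1)] gr_carrier_rep[OF assms(2)] Fil_add by blast
  have "gr_supp A v (x \<oplus>\<^bsub>gr A v\<^esub> y) \<subseteq> gr_supp A v x \<union> gr_supp A v y"
  proof
    fix lam assume a: "lam \<in> gr_supp A v (x \<oplus>\<^bsub>gr A v\<^esub> y)"
    show "lam \<in> gr_supp A v x \<union> gr_supp A v y"
    proof (rule ccontr)
      assume "lam \<notin> gr_supp A v x \<union> gr_supp A v y"
      then have "gr_rep (x lam) \<in> Fil_plus A v lam" "gr_rep (y lam) \<in> Fil_plus A v lam"
        using gr_rep_notin_supp assms by auto
      then have "(x \<oplus>\<^bsub>gr A v\<^esub> y) lam = Fil_plus A v lam"
        unfolding gr_add using Fil_plus_add gr_cls_Fil_plus by simp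
      then show False using a gr_supp_def by blast
    qed
  qed
  then show "finite (gr_supp A v (x \<oplus>\<^bsub>gr A v\<^esub> y))"
    using assms gr_carrier by (meson finite_Un finite_subset)
qed

lemma gr_zero_closed: "\<zero>\<^bsub>gr A v\<^esub> \<in> carrier (gr A v)"
  unfolding gr_carrier gr_zero gr_supp_def using Fil_zero gr_cls_zero by auto

lemma gr_abelian_monoid: "abelian_monoid (gr A v)"
proof (rule abelian_monoidI)
  fix x y assume "x \<in> carrier (gr A v)" "y \<in> carrier (gr A v)"
  then show "x \<oplus>\<^bsub>gr A v\<^esub> y \<in> carrier (gr A v)" by (rule gr_add_closed)
next
  show "\<zero>\<^bsub>gr A v\<^esub> \<in> carrier (gr A v)" by (rule gr_zero_closed)
next
  fix x y z assume c: "x \<in> carrier (gr A v)" "y \<in> carrier (gr A v)" "z \<in> carrier (gr A v)"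
  show "x \<oplus>\<^bsub>gr A v\<^esub> y \<oplus>\<^bsub>gr A v\<^esub> z = x \<oplus>\<^bsub>gr A v\<^esub> (y \<oplus>\<^bsub>gr A v\<^esub> z)"
  proof
    fix lam
    define a b c' where "a = gr_rep (x lam)" "b = gr_rep (y lam)" "c' = gr_rep (z lam)"
    have abc: "a \<in> carrier A" "b \<in> carrier A" "c' \<in> carrier A"
      using c gr_rep_carrier a_b_c'_def by auto
    define p where "p = gr_rep (gr_cls A v lam (a \<oplus> b))"
    define q where "q = gr_rep (gr_cls A v lam (b \<oplus> c'))"
    have p: "p \<in> carrier A" "p \<ominus> (a \<oplus> b) \<in> Fil_plus A v lam" using gr_rep_cls abc p_def by auto
    have q: "q \<in> carrier A" "q \<ominus> (b \<oplus> c') \<in> Fil_plus A v lam" using gr_rep_cls abc q_def by auto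
    have "(p \<oplus> c') \<ominus> (a \<oplus> q) = (p \<ominus> (a \<oplus> b)) \<ominus> (q \<ominus> (b \<oplus> c'))"
      using p q abc by algebra
    then have "(p \<oplus> c') \<ominus> (a \<oplus> q) \<in> Fil_plus A v lam" using p q Fil_plus_diff by simp
    then show "(x \<oplus>\<^bsub>gr A v\<^esub> y \<oplus>\<^bsub>gr A v\<^esub> z) lam = (x \<oplus>\<^bsub>gr A v\<^esub> (y \<oplus>\<^bsub>gr A v\<^esub> z)) lam"
      unfolding gr_add using gr_cls_eq_iff p q abc a_b_c'_def p_def q_def by simp
  qed
next
  fix x assume c: "x \<in> carrier (gr A v)"
  show "\<zero>\<^bsub>gr A v\<^esub> \<oplus>\<^bsub>gr A v\<^esub> x = x"
  proof
    fix lam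
    have z: "gr_rep (Fil_plus A v lam) \<in> Fil_plus A v lam"
      using gr_rep_cls[of \<zero> lam] gr_cls_zero by (simp add: a_minus_def)
    have zc: "gr_rep (Fil_plus A v lam) \<in> carrier A" using z Fil_plus_subset by auto
    have xc: "gr_rep (x lam) \<in> carrier A" using gr_rep_carrier[OF c] .
    have "(gr_rep (Fil_plus A v lam) \<oplus> gr_rep (x lam)) \<ominus> gr_rep (x lam) = gr_rep (Fil_plus A v lam)"
      using zc xc by algebra
    then have "gr_cls A v lam (gr_rep (Fil_plus A v lam) \<oplus> gr_rep (x lam)) = gr_cls A v lam (gr_rep (x lam))"
      using gr_cls_eq_iff zc xc z by simp
    then show "(\<zero>\<^bsub>gr A v\<^esub> \<oplus>\<^bsub>gr A v\<^esub> x) lam = x lam"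
      unfolding gr_add gr_zero using gr_carrier_rep(2)[OF c] by simp
  qed
next
  fix x y assume c: "x \<in> carrier (gr A v)" "y \<in> carrier (gr A v)"
  show "x \<oplus>\<^bsub>gr A v\<^esub> y = y \<oplus>\<^bsub>gr A v\<^esub> x"
    unfolding gr_add using gr_rep_carrier c by (simp add: a_comm)
qed

lemma gr_finsum: assumes "finite I" "f \<in> I \<rightarrow> carrier (gr A v)"
  shows "finsum (gr A v) f I = (\<lambda>lam. gr_cls A v lam (finsum A (\<lambda>i. gr_rep (f i lam)) I))"
  using assms
proof (induction I rule: finite_induct)
  case empty
  interpret G: abelian_monoid "gr A v" by (rule gr_abelian_monoid)
  show ?case by (simp add: gr_zero gr_cls_zero)
next
  case (insert a I)
  interpret G: abelian_monoid "gr A v" by (rule gr_abelian_monoid)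
  have fI: "f \<in> I \<rightarrow> carrier (gr A v)" "f a \<in> carrier (gr A v)" using insert.prems by auto
  have rc: "(\<lambda>i. gr_rep (f i lam)) \<in> I \<rightarrow> carrier A" "gr_rep (f a lam) \<in> carrier A" for lam
    using fI gr_rep_carrier by auto
  have "finsum (gr A v) f (insert a I) = f a \<oplus>\<^bsub>gr A v\<^esub> finsum (gr A v) f I"
    by (rule G.finsum_insert[OF insert(1,2) fI])
  also have "\<dots> = (\<lambda>lam. gr_cls A v lam (gr_rep (f a lam) \<oplus>
      gr_rep (gr_cls A v lam (finsum A (\<lambda>i. gr_rep (f i lam)) I))))"
    unfolding gr_add insert.IH[OF fI(1)] by simp
  also have "\<dots> = (\<lambda>lam. gr_cls A v lam (gr_rep (f a lam) \<oplus> finsum A (\<lambda>i. gr_rep (f i lam)) I))"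
  proof
    fix lam
    define s where "s = finsum A (\<lambda>i. gr_rep (f i lam)) I"
    have sigma_compat: "s \<in> carrier A" unfolding s_def using rc by simp
    have p: "gr_rep (gr_cls A v lam s) \<in> carrier A"
      "gr_rep (gr_cls A v lam s) \<ominus> s \<in> Fil_plus A v lam"
      using gr_rep_cls[OF sigma_compat] by auto
    have "(gr_rep (f a lam) \<oplus> gr_rep (gr_cls A v lam s)) \<ominus> (gr_rep (f a lam) \<oplus> s) =
        gr_rep (gr_cls A v lam s) \<ominus> s" using p sigma_compat rc by algebra
    then show "gr_cls A v lam (gr_rep (f a lam) \<oplus> gr_rep (gr_cls A v lam s)) =
        gr_cls A v lam (gr_rep (f a lam) \<oplus> s)"
      using gr_cls_eq_iff p sigma_compat rc by simp
  qed
  also have "\<dots> = (\<lambda>lam. gr_cls A v lam (finsum A (\<lambda>i. gr_rep (f i lam)) (insert a I)))"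
    using finsum_insert[OF insert(1,2) rc] by simp
  finally show ?case .
qed

lemma gr_mult_over_superset: assumes g: "g \<in> carrier (gr A v)" and h: "h \<in> carrier (gr A v)"
  and S: "finite S" "gr_supp A v g \<subseteq> S"
  shows "(g \<otimes>\<^bsub>gr A v\<^esub> h) lam = gr_cls A v lam
    (finsum A (\<lambda>mu. gr_rep (g mu) \<otimes> gr_rep (h (lam - mu))) S)"
proof -
  define f where "f mu = gr_rep (g mu) \<otimes> gr_rep (h (lam - mu))" for mu
  have fc: "f \<in> S' \<rightarrow> carrier A" for S' unfolding f_def using gr_rep_carrier g h by auto
  have disj: "S = gr_supp A v g \<union> (S - gr_supp A v g)" using S by auto
  have "finsum A f S = finsum A f (gr_supp A v g) \<oplus> finsum A f (S - gr_supp A v g)"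
    by (subst disj, rule finsum_Un_disjoint) (use S fc in \<open>auto intro: finite_subset\<close>)
  moreover have "finsum A f (S - gr_supp A v g) \<in> Fil_plus A v lam"
  proof (rule Fil_plus_finsum)
    show "finite (S - gr_supp A v g)" using S by auto
    show "f \<in> S - gr_supp A v g \<rightarrow> Fil_plus A v lam"
    proof
      fix mu assume "mu \<in> S - gr_supp A v g"
      then have "gr_rep (g mu) \<in> Fil_plus A v mu" using gr_rep_notin_supp g by auto
      from Fil_plus_mult_left[OF this gr_carrier_rep(1)[OF h, of "lam - mu"]] show
        "f mu \<in> Fil_plus A v lam"
        unfolding f_def by simp
    qed
  qed
  moreover have "finsum A f (gr_supp A v g) \<oplus> finsum A f (S - gr_supp A v g) \<ominus> finsum A f (gr_supp A v g)
      = finsum A f (S - gr_supp A v g)"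
  proof -
    have "finsum A f (gr_supp A v g) \<in> carrier A" "finsum A f (S - gr_supp A v g) \<in> carrier A"
      using fc by simp_all
    then show ?thesis by algebra
  qed
  ultimately have "finsum A f S \<ominus> finsum A f (gr_supp A v g) \<in> Fil_plus A v lam" by simp
  then have "gr_cls A v lam (finsum A f S) = gr_cls A v lam (finsum A f (gr_supp A v g))"
    using gr_cls_eq_iff fc by simp
  then show ?thesis unfolding gr_mult f_def by simp
qed

lemma gr_mult_closed: assumes g: "g \<in> carrier (gr A v)" and h: "h \<in> carrier (gr A v)"
  shows "g \<otimes>\<^bsub>gr A v\<^esub> h \<in> carrier (gr A v)"
  unfolding gr_carrier
proof
  have fg: "finite (gr_supp A v g)" "finite (gr_supp A v h)" using g h gr_carrier by auto
  have tm: "gr_rep (g mu) \<otimes> gr_rep (h (lam - mu)) \<in> Fil A v lam" for lam mu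
    using Fil_mult[OF gr_carrier_rep(1)[OF g, of mu] gr_carrier_rep(1)[OF h, of "lam - mu"]] by simp
  show "\<forall>lam. \<exists>r\<in>Fil A v lam. (g \<otimes>\<^bsub>gr A v\<^esub> h) lam = gr_cls A v lam r"
  proof
    fix lam
    have "finsum A (\<lambda>mu. gr_rep (g mu) \<otimes> gr_rep (h (lam - mu))) (gr_supp A v g) \<in> Fil A v lam"
      by (rule Fil_finsum[OF fg(1)]) (use tm in auto)
    then show "\<exists>r\<in>Fil A v lam. (g \<otimes>\<^bsub>gr A v\<^esub> h) lam = gr_cls A v lam r"
      unfolding gr_mult by blast
  qed
  have "gr_supp A v (g \<otimes>\<^bsub>gr A v\<^esub> h) \<subseteq> (\<lambda>(a, b). a + b) ` (gr_supp A v g \<times> gr_supp A v h)"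
  proof
    fix lam assume a: "lam \<in> gr_supp A v (g \<otimes>\<^bsub>gr A v\<^esub> h)"
    show "lam \<in> (\<lambda>(a, b). a + b) ` (gr_supp A v g \<times> gr_supp A v h)"
    proof (rule ccontr)
      assume na: "lam \<notin> (\<lambda>(a, b). a + b) ` (gr_supp A v g \<times> gr_supp A v h)"
      have "finsum A (\<lambda>mu. gr_rep (g mu) \<otimes> gr_rep (h (lam - mu))) (gr_supp A v g) \<in> Fil_plus A v lam"
      proof (rule Fil_plus_finsum[OF fg(1)], rule Pi_I)
        fix mu assume mu: "mu \<in> gr_supp A v g"
        have "lam - mu \<notin> gr_supp A v h"
        proof
          assume "lam - mu \<in> gr_supp A v h"
          then have "(mu, lam - mu) \<in> gr_supp A v g \<times> gr_supp A v h" using mu by simp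
          then have "lam \<in> (\<lambda>(a, b). a + b) ` (gr_supp A v g \<times> gr_supp A v h)"
            by (metis (no_types, lifting) add_diff_cancel_left' diff_add_cancel case_prod_conv image_eqI)
          then show False using na by blast
        qed
        then have "gr_rep (h (lam - mu)) \<in> Fil_plus A v (lam - mu)"
          using gr_rep_notin_supp[OF h] by blast
        from Fil_plus_mult_right[OF gr_carrier_rep(1)[OF g, of mu] this]
        show "gr_rep (g mu) \<otimes> gr_rep (h (lam - mu)) \<in> Fil_plus A v lam" by simp
      qed
      then have "(g \<otimes>\<^bsub>gr A v\<^esub> h) lam = Fil_plus A v lam"
        unfolding gr_mult by (rule gr_cls_Fil_plus)
      then show False using a gr_supp_def by blast
    qed
  qed
  then show "finite (gr_supp A v (g \<otimes>\<^bsub>gr A v\<^esub> h))"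
    by (rule finite_subset) (use fg in auto)
qed

lemma gr_one_closed: assumes "\<one> \<in> Fil A v 0" shows "\<one>\<^bsub>gr A v\<^esub> \<in> carrier (gr A v)"
  unfolding gr_carrier
proof
  show "\<forall>lam. \<exists>r\<in>Fil A v lam. \<one>\<^bsub>gr A v\<^esub> lam = gr_cls A v lam r"
    unfolding gr_one using assms Fil_zero gr_cls_zero by auto
  have "gr_supp A v \<one>\<^bsub>gr A v\<^esub> \<subseteq> {0}" unfolding gr_supp_def gr_one by auto
  then show "finite (gr_supp A v \<one>\<^bsub>gr A v\<^esub>)" by (rule finite_subset) simp
qed

end

lemma RR_simps[simp]: "carrier (RR::'a::ring_1 ring) = UNIV" "mult (RR::'a ring) = (*)"
  "add (RR::'a ring) = (+)" "zero (RR::'a ring) = 0" "one (RR::'a ring) = 1"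
  by (simp_all add: ring_of_def)

lemma ring_RR: "ring (RR::'a::ring_1 ring)"
proof (rule ringI)
  show "abelian_group (RR::'a ring)"
    apply (rule abelian_groupI)
         apply (simp_all add: add.assoc add.commute)
    subgoal for x by (rule exI[of _ "- x"]) simp
    done
  show "monoid (RR::'a ring)"
    by (rule monoidI) (simp_all add: mult.assoc)
qed (simp_all add: algebra_simps)

lemma RR_ainv[simp]: "a_inv (RR::'a::ring_1 ring) x = - x"
proof -
  interpret R: ring "RR::'a ring" by (rule ring_RR)
  show ?thesis by (rule R.minus_equality) simp_all
qed

lemma RR_aminus[simp]: "a_minus (RR::'a::ring_1 ring) x y = x - y"
  by (simp add: a_minus_def)

lemma RR_finsum:
  assumes "finite S"
  shows "finsum (RR::'a::ring_1 ring) f S = sum f S"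
proof -
  interpret R: ring "RR::'a ring" by (rule ring_RR)
  from assms show ?thesis
    by (induction S rule: finite_induct) (simp_all add: R.finsum_insert)
qed

lemma RR_Fil: "Fil (RR::'a::ring_1 ring) u lam = {x. ereal lam \<le> u x}" by (simp add: Fil_def)

lemma RR_Fil_plus: "Fil_plus (RR::'a::ring_1 ring) u lam = {x. ereal lam < u x}"
  by (simp add: Fil_plus_def)

lemma BRing_simps[simp]: "carrier (BRing u mul) = bseries u" "mult (BRing u mul) = mul"
  "one (BRing u mul) = const_s 1" "zero (BRing u mul) = (\<lambda>n. 0)" "add (BRing u mul) = s_add"
  by (simp_all add: BRing_def)

section \<open>Convergence in a complete filtered ring\<close>

text \<open>Compatibility is stated in the form it takes
  for an integer-valued \<open>u\<close>: \<open>\<sigma> - id\<close> and \<open>\<delta>\<close> raise \<open>u\<close> by at least \<open>1\<close>.\<close>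

locale complete_skew_filtration =
  fixes u :: "'a::ring_1 \<Rightarrow> ereal" and \<sigma> \<delta> :: "'a \<Rightarrow> 'a"
  assumes u_zero: "u 0 = \<infinity>"
  and u_add: "min (u x) (u y) \<le> u (x + y)"
  and u_mult: "u x + u y \<le> u (x * y)"
  and u_uminus: "u (- x) = u x"
  and u_int_valued: "u x = \<infinity> \<or> (\<exists>k::int. u x = ereal (of_int k))"
  and u_one: "u 1 = 0"
  and u_separated: "u x = \<infinity> \<Longrightarrow> x = 0"
  and u_complete: "\<And>s::nat \<Rightarrow> 'a. (\<forall>r::real. \<exists>N. \<forall>m\<ge>N. \<forall>n\<ge>N. ereal r \<le> u (s m - s n)) \<Longrightarrow>
      \<exists>l. \<forall>r::real. \<exists>N. \<forall>n\<ge>N. ereal r \<le> u (s n - l)"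
  and sigma_add: "\<sigma> (x + y) = \<sigma> x + \<sigma> y"
  and sigma_mult: "\<sigma> (x * y) = \<sigma> x * \<sigma> y"
  and sigma_one: "\<sigma> 1 = 1"
  and delta_add: "\<delta> (x + y) = \<delta> x + \<delta> y"
  and delta_mult: "\<delta> (x * y) = \<delta> x * y + \<sigma> x * \<delta> y"
  and sigma_compat: "ereal r \<le> u x \<Longrightarrow> ereal (r + 1) \<le> u (\<sigma> x - x)"
  and delta_compat: "ereal r \<le> u x \<Longrightarrow> ereal (r + 1) \<le> u (\<delta> x)"
begin

definition val_ge :: "'a \<Rightarrow> real \<Rightarrow> bool" where "val_ge x r \<longleftrightarrow> ereal r \<le> u x"

lemma val_ge_zero[simp]: "val_ge 0 r" by (simp add: val_ge_def u_zero)

lemma val_ge_add: "val_ge x r \<Longrightarrow> val_ge y r \<Longrightarrow> val_ge (x + y) r"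
  unfolding val_ge_def using u_add[of x y] by (metis min.bounded_iff order_trans)

lemma val_ge_uminus[simp]: "val_ge (- x) r \<longleftrightarrow> val_ge x r" by (simp add: val_ge_def u_uminus)

lemma val_ge_diff: "val_ge x r \<Longrightarrow> val_ge y r \<Longrightarrow> val_ge (x - y) r"
  using val_ge_add[of x r "-y"] by simp

lemma val_ge_mono: "val_ge x r \<Longrightarrow> s \<le> r \<Longrightarrow> val_ge x s"
  unfolding val_ge_def by (meson ereal_less_eq(3) order_trans)

lemma val_ge_mult: "val_ge x r \<Longrightarrow> val_ge y s \<Longrightarrow> val_ge (x * y) (r + s)"
  unfolding val_ge_def using u_mult[of x y]
  by (metis add_mono order_trans plus_ereal.simps(1))

lemma val_ge_sum: "(\<And>i. i \<in> A \<Longrightarrow> val_ge (f i) r) \<Longrightarrow> val_ge (sum f A) r"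
  by (induction A rule: infinite_finite_induct) (auto intro: val_ge_add)

lemma val_ge_all_iff_zero: "(\<forall>r. val_ge x r) \<longleftrightarrow> x = 0"
  unfolding val_ge_def
  apply (rule iffI)
   apply (rule u_separated, rule ereal_top, blast)
  by (simp add: u_zero)

lemma val_ge_exists: "\<exists>r. val_ge x r"
  using u_int_valued[of x] unfolding val_ge_def by (metis ereal_less_eq(1) order_refl)

lemma val_gt_iff_val_ge: "ereal r < u x \<longleftrightarrow> val_ge x (of_int (\<lfloor>r\<rfloor> + 1))"
proof (cases "u x = \<infinity>")
  case True then show ?thesis by (simp add: val_ge_def)
next
  case False
  then obtain k :: int where k: "u x = ereal (of_int k)" using u_int_valued by blast
  have "r < of_int k \<longleftrightarrow> \<lfloor>r\<rfloor> < k" by (simp add: floor_less_iff)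
  also have "\<dots> \<longleftrightarrow> of_int (\<lfloor>r\<rfloor> + 1) \<le> (of_int k :: real)"
    by (subst of_int_le_iff) linarith
  finally have "r < of_int k \<longleftrightarrow> of_int (\<lfloor>r\<rfloor> + 1) \<le> (of_int k :: real)" .
  then show ?thesis by (simp add: val_ge_def k)
qed

lemma val_gt_if_val_ge: "val_ge x (r + 1/2) \<Longrightarrow> ereal r < u x"
  unfolding val_ge_def by (rule less_le_trans[of _ "ereal (r + 1/2)"]) auto

lemma sigma_zero[simp]: "\<sigma> 0 = 0" using sigma_add[of 0 0] by simp

lemma delta_zero[simp]: "\<delta> 0 = 0" using delta_add[of 0 0] by simp

lemma sigma_uminus: "\<sigma> (- x) = - \<sigma> x"
proof -
  have "\<sigma> x + \<sigma> (-x) = 0" using sigma_add[of x "-x"] by simp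
  then show ?thesis by (metis neg_eq_iff_add_eq_0)
qed

lemma delta_uminus: "\<delta> (- x) = - \<delta> x"
proof -
  have "\<delta> x + \<delta> (-x) = 0" using delta_add[of x "-x"] by simp
  then show ?thesis by (metis neg_eq_iff_add_eq_0)
qed

lemma sigma_diff: "\<sigma> (x - y) = \<sigma> x - \<sigma> y" using sigma_add[of x "-y"] sigma_uminus by simp

lemma delta_diff: "\<delta> (x - y) = \<delta> x - \<delta> y" using delta_add[of x "-y"] delta_uminus by simp

lemma delta_one[simp]: "\<delta> 1 = 0" using delta_mult[of 1 1] sigma_one by simp

lemma sigma_sum: "\<sigma> (sum f A) = (\<Sum>i\<in>A. \<sigma> (f i))"
  by (induction A rule: infinite_finite_induct) (auto simp: sigma_add)

lemma delta_sum: "\<delta> (sum f A) = (\<Sum>i\<in>A. \<delta> (f i))"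
  by (induction A rule: infinite_finite_induct) (auto simp: delta_add)

lemma val_ge_delta: "val_ge x r \<Longrightarrow> val_ge (\<delta> x) (r + 1)" unfolding val_ge_def by (rule delta_compat)

lemma val_ge_delta_weak: "val_ge x r \<Longrightarrow> val_ge (\<delta> x) r"
  using val_ge_delta[of x r] val_ge_mono[of "\<delta> x" "r+1" r] by simp

lemma val_ge_sigma_minus_id: "val_ge x r \<Longrightarrow> val_ge (\<sigma> x - x) (r + 1)"
  unfolding val_ge_def by (rule sigma_compat)

lemma val_ge_sigma: "val_ge x r \<Longrightarrow> val_ge (\<sigma> x) r"
proof -
  assume a: "val_ge x r"
  have "val_ge (\<sigma> x - x) r" using val_ge_sigma_minus_id[OF a] val_ge_mono by force
  from val_ge_add[OF this a] show ?thesis by simp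
qed

lemma val_ge_sigma_pow_minus_id: "val_ge x r \<Longrightarrow> val_ge ((\<sigma>^^i) x - x) (r + 1)"
proof (induction i)
  case 0 then show ?case by simp
next
  case (Suc i)
  have "val_ge ((\<sigma>^^i) x) r" using Suc val_ge_add[of "(\<sigma>^^i) x - x" r x] val_ge_mono[of _ "r+1" r]
    by force
  then have "val_ge (\<sigma> ((\<sigma>^^i) x) - (\<sigma>^^i) x) (r+1)" by (rule val_ge_sigma_minus_id)
  from val_ge_add[OF this Suc.IH[OF Suc.prems]] show ?case by simp
qed

definition converges_to :: "(nat \<Rightarrow> 'a) \<Rightarrow> 'a \<Rightarrow> bool" where
  "converges_to s l \<longleftrightarrow> (\<forall>r. \<exists>N. \<forall>n\<ge>N. val_ge (s n - l) r)"

definition tends_zero :: "(nat \<Rightarrow> 'a) \<Rightarrow> bool" where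
  "tends_zero f \<longleftrightarrow> (\<forall>r. \<exists>N. \<forall>n\<ge>N. val_ge (f n) r)"

lemma tends_zero_iff_converges_to: "tends_zero f \<longleftrightarrow> converges_to f 0"
  unfolding tends_zero_def converges_to_def by simp

lemma converges_to_unique: "converges_to s l \<Longrightarrow> converges_to s l' \<Longrightarrow> l = l'"
proof -
  assume a: "converges_to s l" "converges_to s l'"
  have "val_ge (l' - l) r" for r
  proof -
    obtain N1 where "\<forall>n\<ge>N1. val_ge (s n - l) r" using a(1) converges_to_def by blast
    moreover obtain N2 where "\<forall>n\<ge>N2. val_ge (s n - l') r" using a(2) converges_to_def by blast
    ultimately have "val_ge (s (max N1 N2) - l) r" "val_ge (s (max N1 N2) - l') r" by auto
    from val_ge_diff[OF this] show ?thesis by simp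
  qed
  then show ?thesis using val_ge_all_iff_zero by force
qed

lemma converges_to_val_ge: "converges_to s l \<Longrightarrow> \<forall>n\<ge>N0. val_ge (s n) r \<Longrightarrow> val_ge l r"
proof -
  assume a: "converges_to s l" "\<forall>n\<ge>N0. val_ge (s n) r"
  obtain N where "\<forall>n\<ge>N. val_ge (s n - l) r" using a(1) converges_to_def by blast
  then have "val_ge (s (max N N0) - l) r" "val_ge (s (max N N0)) r" using a(2) by auto
  from val_ge_diff[OF this(2) this(1)] show ?thesis by simp
qed

lemma converges_to_add: "converges_to s l \<Longrightarrow> converges_to t m \<Longrightarrow> converges_to (\<lambda>n. s n + t n) (l + m)"
  unfolding converges_to_def
proof (intro allI)
  fix r assume a: "\<forall>r. \<exists>N. \<forall>n\<ge>N. val_ge (s n - l) r" "\<forall>r. \<exists>N. \<forall>n\<ge>N. val_ge (t n - m) r"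
  obtain N1 N2 where "\<forall>n\<ge>N1. val_ge (s n - l) r" "\<forall>n\<ge>N2. val_ge (t n - m) r" using a by blast
  then have "\<forall>n\<ge>max N1 N2. val_ge (s n + t n - (l + m)) r"
    using val_ge_add by (metis (no_types, lifting) add_diff_add max.boundedE)
  then show "\<exists>N. \<forall>n\<ge>N. val_ge (s n + t n - (l + m)) r" by blast
qed

lemma converges_to_uminus: "converges_to s l \<Longrightarrow> converges_to (\<lambda>n. - s n) (- l)"
  unfolding converges_to_def by (metis minus_diff_eq minus_diff_minus val_ge_uminus)

lemma converges_to_diff:
  "converges_to s l \<Longrightarrow> converges_to t m \<Longrightarrow> converges_to (\<lambda>n. s n - t n) (l - m)"
  using converges_to_add[of s l "\<lambda>n. - t n" "-m"] converges_to_uminus[of t m] by simp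

lemma converges_to_const: "converges_to (\<lambda>n. c) c"
  unfolding converges_to_def by simp

lemma converges_to_mult_left: "converges_to s l \<Longrightarrow> converges_to (\<lambda>n. a * s n) (a * l)"
  unfolding converges_to_def
proof (intro allI)
  fix r assume a: "\<forall>r. \<exists>N. \<forall>n\<ge>N. val_ge (s n - l) r"
  obtain c where c: "val_ge a c" using val_ge_exists by blast
  obtain N where N: "\<forall>n\<ge>N. val_ge (s n - l) (r - c)" using a by blast
  have "val_ge (a * (s n - l)) (c + (r - c))" if "n \<ge> N" for n
    by (rule val_ge_mult) (use N that c in auto)
  then show "\<exists>N. \<forall>n\<ge>N. val_ge (a * s n - a * l) r" by (auto simp: right_diff_distrib)
qed

lemma converges_to_sigma: "converges_to s l \<Longrightarrow> converges_to (\<lambda>n. \<sigma> (s n)) (\<sigma> l)"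
  unfolding converges_to_def by (metis sigma_diff val_ge_sigma)

lemma converges_to_delta: "converges_to s l \<Longrightarrow> converges_to (\<lambda>n. \<delta> (s n)) (\<delta> l)"
  unfolding converges_to_def by (metis delta_diff val_ge_delta_weak)

lemma converges_to_shift: "converges_to s l \<longleftrightarrow> converges_to (\<lambda>n. s (n + k)) l"
proof
  assume "converges_to s l"
  then show "converges_to (\<lambda>n. s (n + k)) l"
    unfolding converges_to_def by (meson le_add1 order_trans)
next
  assume a: "converges_to (\<lambda>n. s (n + k)) l"
  show "converges_to s l" unfolding converges_to_def
  proof
    fix r obtain N where N: "\<forall>n\<ge>N. val_ge (s (n + k) - l) r"
      using a unfolding converges_to_def by blast
    have "val_ge (s n - l) r" if "n \<ge> N + k" for n
      using N[rule_format, of "n - k"] that by simp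
    then show "\<exists>N. \<forall>n\<ge>N. val_ge (s n - l) r" by blast
  qed
qed

lemma tends_zero_uminus: "tends_zero f \<Longrightarrow> tends_zero (\<lambda>n. - f n)"
  using converges_to_uminus[of f 0] by (simp add: tends_zero_iff_converges_to)

lemma tends_zero_diff: "tends_zero f \<Longrightarrow> tends_zero g \<Longrightarrow> tends_zero (\<lambda>n. f n - g n)"
  using converges_to_diff[of f 0 g 0] by (simp add: tends_zero_iff_converges_to)

lemma tends_zero_sigma: "tends_zero f \<Longrightarrow> tends_zero (\<lambda>n. \<sigma> (f n))"
  using converges_to_sigma[of f 0] by (simp add: tends_zero_iff_converges_to)

lemma tends_zero_delta: "tends_zero f \<Longrightarrow> tends_zero (\<lambda>n. \<delta> (f n))"
  using converges_to_delta[of f 0] by (simp add: tends_zero_iff_converges_to)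

lemma tends_zero_finite: "\<forall>n\<ge>N. f n = 0 \<Longrightarrow> tends_zero f"
  unfolding tends_zero_def by (metis val_ge_zero)

definition usum :: "(nat \<Rightarrow> 'a) \<Rightarrow> 'a" where
  "usum f = (SOME l. converges_to (\<lambda>N. \<Sum>i<N. f i) l)"

lemma val_ge_sum_diff:
  fixes f :: "nat \<Rightarrow> 'a" and N m n :: nat
  assumes "\<forall>n\<ge>N. val_ge (f n) r" "N \<le> m" "m \<le> n"
  shows "val_ge ((\<Sum>i<n. f i) - (\<Sum>i<m. f i)) r"
proof -
  have "sum f {0..<m} + sum f {m..<n} = sum f {0..<n}"
    by (rule sum.atLeastLessThan_concat) (use assms in auto)
  then have "(\<Sum>i<n. f i) - (\<Sum>i<m. f i) = (\<Sum>i\<in>{m..<n}. f i)"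
    by (simp add: atLeast0LessThan algebra_simps)
  then show ?thesis using assms by (auto intro!: val_ge_sum)
qed

lemma converges_to_usum: "tends_zero f \<Longrightarrow> converges_to (\<lambda>N. \<Sum>i<N. f i) (usum f)"
proof -
  assume t: "tends_zero f"
  have "\<exists>l. converges_to (\<lambda>N. \<Sum>i<N. f i) l"
    unfolding converges_to_def val_ge_def[symmetric]
  proof (rule u_complete[unfolded val_ge_def[symmetric]], intro allI)
    fix r
    obtain N where N: "\<forall>n\<ge>N. val_ge (f n) r" using t tends_zero_def by blast
    show "\<exists>N. \<forall>m\<ge>N. \<forall>n\<ge>N. val_ge ((\<Sum>i<m. f i) - (\<Sum>i<n. f i)) r"
    proof (intro exI allI impI)
      fix m n assume "N \<le> m" "N \<le> n"
      then show "val_ge ((\<Sum>i<m. f i) - (\<Sum>i<n. f i)) r"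
        using val_ge_sum_diff[OF N] by (metis minus_diff_eq nat_le_linear val_ge_uminus)
    qed
  qed
  then show ?thesis unfolding usum_def by (rule someI_ex)
qed

lemma usum_eqI: "converges_to (\<lambda>N. \<Sum>i<N. f i) l \<Longrightarrow> usum f = l"
  unfolding usum_def by (rule some_equality) (auto intro: converges_to_unique)

lemma usum_add: "tends_zero f \<Longrightarrow> tends_zero g \<Longrightarrow> usum (\<lambda>n. f n + g n) = usum f + usum g"
  by (rule usum_eqI) (auto simp: sum.distrib intro: converges_to_add converges_to_usum)

lemma usum_uminus: "tends_zero f \<Longrightarrow> usum (\<lambda>n. - f n) = - usum f"
  by (rule usum_eqI) (auto simp: sum_negf intro: converges_to_uminus converges_to_usum)

lemma usum_diff: "tends_zero f \<Longrightarrow> tends_zero g \<Longrightarrow> usum (\<lambda>n. f n - g n) = usum f - usum g"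
  using usum_add[of f "\<lambda>n. - g n"] usum_uminus[of g] tends_zero_uminus[of g] by simp

lemma usum_mult_left: "tends_zero f \<Longrightarrow> usum (\<lambda>n. a * f n) = a * usum f"
  by (rule usum_eqI) (auto simp: sum_distrib_left[symmetric] intro: converges_to_mult_left converges_to_usum)

lemma usum_sigma: "tends_zero f \<Longrightarrow> usum (\<lambda>n. \<sigma> (f n)) = \<sigma> (usum f)"
  by (rule usum_eqI) (auto simp: sigma_sum[symmetric] intro: converges_to_sigma converges_to_usum)

lemma usum_delta: "tends_zero f \<Longrightarrow> usum (\<lambda>n. \<delta> (f n)) = \<delta> (usum f)"
  by (rule usum_eqI) (auto simp: delta_sum[symmetric] intro: converges_to_delta converges_to_usum)

lemma usum_finite: "\<forall>n\<ge>N. f n = 0 \<Longrightarrow> usum f = (\<Sum>i<N. f i)"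
proof (rule usum_eqI, unfold converges_to_def, intro allI exI impI)
  fix r n assume a: "\<forall>n\<ge>N. f n = 0" "N \<le> n"
  have "sum f {0..<N} + sum f {N..<n} = sum f {0..<n}"
    by (rule sum.atLeastLessThan_concat) (use a in auto)
  then have "(\<Sum>i<n. f i) = (\<Sum>i<N. f i) + (\<Sum>i\<in>{N..<n}. f i)"
    by (simp add: atLeast0LessThan)
  also have "(\<Sum>i\<in>{N..<n}. f i) = 0" using a(1) by auto
  finally show "val_ge ((\<Sum>i<n. f i) - (\<Sum>i<N. f i)) r" by simp
qed

lemma usum_val_ge: "tends_zero f \<Longrightarrow> (\<And>i. val_ge (f i) r) \<Longrightarrow> val_ge (usum f) r"
  by (rule converges_to_val_ge[OF converges_to_usum, of f 0]) (auto intro: val_ge_sum)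

lemma usum_tail_val_ge:
  assumes t: "tends_zero f" and b: "\<And>i. i \<ge> N \<Longrightarrow> val_ge (f i) r"
  shows "val_ge (usum f - (\<Sum>i<N. f i)) r"
proof (rule converges_to_val_ge)
  show "converges_to (\<lambda>n. (\<Sum>i<n. f i) - (\<Sum>i<N. f i)) (usum f - (\<Sum>i<N. f i))"
    by (rule converges_to_diff[OF converges_to_usum[OF t] converges_to_const])
  show "\<forall>n\<ge>N. val_ge ((\<Sum>i<n. f i) - (\<Sum>i<N. f i)) r"
    using val_ge_sum_diff[of N f r N] b by blast
qed

lemma usum_shift: "tends_zero f \<Longrightarrow> usum f = f 0 + usum (\<lambda>i. f (Suc i))"
proof (rule usum_eqI)
  assume "tends_zero f"
  then have "tends_zero (\<lambda>i. f (Suc i))" unfolding tends_zero_def by (meson le_SucI)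
  then have "converges_to (\<lambda>n. f 0 + (\<Sum>i<n. f (Suc i))) (f 0 + usum (\<lambda>i. f (Suc i)))"
    by (rule converges_to_add[OF converges_to_const converges_to_usum])
  then show "converges_to (\<lambda>N. \<Sum>i<N. f i) (f 0 + usum (\<lambda>i. f (Suc i)))"
    by (subst converges_to_shift[where k=1])
      (simp del: sum.lessThan_Suc add: sum.lessThan_Suc_shift)
qed

section \<open>Skew power series and their product\<close>

definition xmult :: "(nat \<Rightarrow> 'a) \<Rightarrow> nat \<Rightarrow> 'a" where
  "xmult s = (\<lambda>n. (case n of 0 \<Rightarrow> 0 | Suc m \<Rightarrow> \<sigma> (s m)) + \<delta> (s n))"

lemma xmult_0[simp]: "xmult s 0 = \<delta> (s 0)" by (simp add: xmult_def)

lemma xmult_Suc[simp]: "xmult s (Suc n) = \<sigma> (s n) + \<delta> (s (Suc n))" by (simp add: xmult_def)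

text \<open>\<open>series_ge F r\<close> means \<open>r \<le> f\<^sub>u F\<close>, and \<open>is_bseries F\<close> means \<open>F \<in> bseries u\<close>
  (lemmas \<open>f_u_ge_iff\<close> and \<open>bseries_iff\<close> below).\<close>

definition series_ge :: "(nat \<Rightarrow> 'a) \<Rightarrow> real \<Rightarrow> bool" where
  "series_ge F r \<longleftrightarrow> (\<forall>i. val_ge (F i) (r - real i / 2))"

definition tail_ge :: "nat \<Rightarrow> (nat \<Rightarrow> 'a) \<Rightarrow> real \<Rightarrow> bool" where
  "tail_ge N F r \<longleftrightarrow> (\<forall>i\<ge>N. val_ge (F i) (r - real i / 2))"

definition is_bseries :: "(nat \<Rightarrow> 'a) \<Rightarrow> bool" where
  "is_bseries F \<longleftrightarrow> (\<forall>r. \<exists>N. tail_ge N F r)"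

definition skew_mult :: "(nat \<Rightarrow> 'a) \<Rightarrow> (nat \<Rightarrow> 'a) \<Rightarrow> nat \<Rightarrow> 'a" where
  "skew_mult F G = (\<lambda>n. usum (\<lambda>i. F i * (xmult^^i) G n))"

definition skew_mult_upto :: "nat \<Rightarrow> (nat \<Rightarrow> 'a) \<Rightarrow> (nat \<Rightarrow> 'a) \<Rightarrow> nat \<Rightarrow> 'a" where
  "skew_mult_upto N F G = (\<lambda>n. \<Sum>i<N. F i * (xmult^^i) G n)"

lemma series_ge_tail_ge: "series_ge F r \<Longrightarrow> tail_ge N F r"
  unfolding series_ge_def tail_ge_def by blast

lemma series_ge_mono: "series_ge F r \<Longrightarrow> s \<le> r \<Longrightarrow> series_ge F s"
  unfolding series_ge_def using val_ge_mono by (metis diff_right_mono)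

lemma series_ge_add: "series_ge F r \<Longrightarrow> series_ge G r \<Longrightarrow> series_ge (\<lambda>n. F n + G n) r"
  unfolding series_ge_def using val_ge_add by blast

lemma series_ge_uminus: "series_ge (\<lambda>n. - F n) r \<longleftrightarrow> series_ge F r"
  unfolding series_ge_def by simp

lemma series_ge_diff: "series_ge F r \<Longrightarrow> series_ge G r \<Longrightarrow> series_ge (\<lambda>n. F n - G n) r"
  unfolding series_ge_def using val_ge_diff by blast

lemma series_ge_zero[simp]: "series_ge (\<lambda>n. 0) r" unfolding series_ge_def by simp

lemma series_ge_all_iff_zero: "(\<forall>r. series_ge F r) \<longleftrightarrow> (\<forall>n. F n = 0)"
proof
  assume a: "\<forall>r. series_ge F r"
  show "\<forall>n. F n = 0"
  proof
    fix n
    have "val_ge (F n) r" for r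
    proof -
      have "val_ge (F n) (r + real n / 2 - real n / 2)" using a unfolding series_ge_def by blast
      then show ?thesis by simp
    qed
    then show "F n = 0" using val_ge_all_iff_zero by blast
  qed
qed (simp add: series_ge_def)

lemma tail_ge_add: "tail_ge N F r \<Longrightarrow> tail_ge N G r \<Longrightarrow> tail_ge N (\<lambda>n. F n + G n) r"
  unfolding tail_ge_def using val_ge_add by blast

lemma tail_ge_mono: "tail_ge N F r \<Longrightarrow> N \<le> M \<Longrightarrow> s \<le> r \<Longrightarrow> tail_ge M F s"
  unfolding tail_ge_def using val_ge_mono by (metis diff_right_mono order_trans)

lemma is_bseries_add: "is_bseries F \<Longrightarrow> is_bseries G \<Longrightarrow> is_bseries (\<lambda>n. F n + G n)"
  unfolding is_bseries_def
proof
  fix r assume a: "\<forall>r. \<exists>N. tail_ge N F r" "\<forall>r. \<exists>N. tail_ge N G r"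
  obtain N1 N2 where "tail_ge N1 F r" "tail_ge N2 G r" using a by blast
  then have "tail_ge (max N1 N2) F r" "tail_ge (max N1 N2) G r" using tail_ge_mono by auto
  then show "\<exists>N. tail_ge N (\<lambda>n. F n + G n) r" using tail_ge_add by blast
qed

lemma is_bseries_uminus: "is_bseries F \<Longrightarrow> is_bseries (\<lambda>n. - F n)"
  unfolding is_bseries_def tail_ge_def by simp

lemma is_bseries_diff: "is_bseries F \<Longrightarrow> is_bseries G \<Longrightarrow> is_bseries (\<lambda>n. F n - G n)"
  using is_bseries_add[of F "\<lambda>n. - G n"] is_bseries_uminus[of G] by simp

lemma is_bseries_mult_left: "is_bseries F \<Longrightarrow> is_bseries (\<lambda>n. a * F n)"
  unfolding is_bseries_def
proof
  fix r assume a: "\<forall>r. \<exists>N. tail_ge N F r"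
  obtain c where c: "val_ge a c" using val_ge_exists by blast
  obtain N where N: "tail_ge N F (r - c)" using a by blast
  have "val_ge (a * F i) (r - real i / 2)" if "i \<ge> N" for i
  proof -
    have "val_ge (a * F i) (c + (r - c - real i / 2))" using N that c unfolding tail_ge_def
      by (intro val_ge_mult) auto
    then show ?thesis by simp
  qed
  then show "\<exists>N. tail_ge N (\<lambda>n. a * F n) r" unfolding tail_ge_def by blast
qed

lemma is_bseries_finite: "\<forall>n\<ge>N. F n = 0 \<Longrightarrow> is_bseries F"
  unfolding is_bseries_def tail_ge_def by (metis val_ge_zero)

lemma is_bseries_zero[simp]: "is_bseries (\<lambda>n. 0)" by (rule is_bseries_finite) simp

lemma is_bseries_series_ge: "is_bseries F \<Longrightarrow> \<exists>r. series_ge F r"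
proof -
  assume "is_bseries F"
  then obtain N where N: "tail_ge N F 0" using is_bseries_def by blast
  have "\<forall>i. \<exists>r. val_ge (F i) r" using val_ge_exists by blast
  from choice[OF this] obtain c where c: "\<And>i. val_ge (F i) (c i)" by blast
  define r where "r = Min (insert 0 ((\<lambda>i. c i + real i / 2) ` {..<N}))"
  have "val_ge (F i) (r - real i / 2)" for i
  proof (cases "i < N")
    case True
    then have "r \<le> c i + real i / 2" unfolding r_def by (intro Min_le) auto
    with c[of i] show ?thesis by (elim val_ge_mono) simp
  next
    case False
    then have "val_ge (F i) (0 - real i / 2)" using N unfolding tail_ge_def by simp
    moreover have "r \<le> 0" unfolding r_def by (intro Min_le) auto
    ultimately show ?thesis by (elim val_ge_mono) simp
  qed
  then show ?thesis unfolding series_ge_def by blast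
qed

lemma is_bseries_approx: "(\<And>r. \<exists>H. is_bseries H \<and> series_ge (\<lambda>n. F n - H n) r) \<Longrightarrow> is_bseries F"
  unfolding is_bseries_def
proof
  fix r assume a: "\<And>r. \<exists>H. (\<forall>r. \<exists>N. tail_ge N H r) \<and> series_ge (\<lambda>n. F n - H n) r"
  obtain H where H: "\<forall>r. \<exists>N. tail_ge N H r" "series_ge (\<lambda>n. F n - H n) r" using a by blast
  obtain N where N: "tail_ge N H r" using H by blast
  have "tail_ge N (\<lambda>n. (F n - H n) + H n) r" using tail_ge_add[OF series_ge_tail_ge[OF H(2)] N] .
  then show "\<exists>N. tail_ge N F r" by auto
qed

lemma xmult_add: "xmult (\<lambda>n. F n + G n) = (\<lambda>n. xmult F n + xmult G n)"
  unfolding xmult_def by (auto simp: sigma_add delta_add split: nat.split)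

lemma xmult_diff: "xmult (\<lambda>n. F n - G n) = (\<lambda>n. xmult F n - xmult G n)"
  unfolding xmult_def by (auto simp: sigma_diff delta_diff split: nat.split)

lemma xmult_zero[simp]: "xmult (\<lambda>n. 0) = (\<lambda>n. 0)"
  unfolding xmult_def by (auto split: nat.split)

lemma xmult_mult_left: "xmult (\<lambda>n. a * F n) = (\<lambda>n. \<sigma> a * xmult F n + \<delta> a * F n)"
  unfolding xmult_def by (auto simp: sigma_mult delta_mult algebra_simps split: nat.split)

lemma xmult_pow_add: "(xmult^^i) (\<lambda>n. F n + G n) = (\<lambda>n. (xmult^^i) F n + (xmult^^i) G n)"
  by (induction i) (auto simp: xmult_add)

lemma xmult_pow_diff: "(xmult^^i) (\<lambda>n. F n - G n) = (\<lambda>n. (xmult^^i) F n - (xmult^^i) G n)"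
  by (induction i) (auto simp: xmult_diff)

lemma xmult_xpow: "xmult (xpow k) = xpow (Suc k)"
  unfolding xmult_def xpow_def by (auto simp: sigma_one split: nat.split)

lemma xmult_pow_xpow: "(xmult^^i) (xpow k) = xpow (i + k)"
  by (induction i) (auto simp: xmult_xpow)

lemma series_ge_xmult: "series_ge F r \<Longrightarrow> series_ge (xmult F) (r + 1/2)"
  unfolding series_ge_def
proof
  fix i assume a: "\<forall>i. val_ge (F i) (r - real i / 2)"
  show "val_ge (xmult F i) (r + 1 / 2 - real i / 2)"
  proof (cases i)
    case 0
    have "val_ge (\<delta> (F 0)) (r - real 0 / 2 + 1)" by (rule val_ge_delta) (use a in blast)
    then have "val_ge (\<delta> (F 0)) (r + 1 / 2 - real i / 2)" using 0 by (auto elim: val_ge_mono)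
    then show ?thesis using 0 by simp
  next
    case (Suc m)
    have "val_ge (\<sigma> (F m)) (r - real m / 2)" using val_ge_sigma a by blast
    moreover have "r - real m / 2 = r + 1 / 2 - real i / 2" using Suc by (simp add: field_simps)
    ultimately have 1: "val_ge (\<sigma> (F m)) (r + 1 / 2 - real i / 2)" by simp
    have "val_ge (\<delta> (F i)) (r - real i / 2 + 1)" using val_ge_delta a by blast
    then have 2: "val_ge (\<delta> (F i)) (r + 1 / 2 - real i / 2)" using val_ge_mono by fastforce
    show ?thesis using Suc val_ge_add[OF 1 2] by simp
  qed
qed

lemma series_ge_xmult_pow: "series_ge F r \<Longrightarrow> series_ge ((xmult^^i) F) (r + real i / 2)"
proof (induction i)
  case 0 then show ?case by simp
next
  case (Suc i)
  have "series_ge (xmult ((xmult^^i) F)) (r + real i / 2 + 1/2)"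
    by (rule series_ge_xmult[OF Suc.IH[OF Suc.prems]])
  moreover have "r + real i / 2 + 1/2 = r + real (Suc i) / 2" by (simp add: add_divide_distrib)
  ultimately show ?case by simp
qed

lemma tail_ge_xmult: "tail_ge N F r \<Longrightarrow> tail_ge (Suc N) (xmult F) r"
  unfolding tail_ge_def
proof (intro allI impI)
  fix i assume a: "\<forall>i\<ge>N. val_ge (F i) (r - real i / 2)" and i: "Suc N \<le> i"
  then obtain m where m: "i = Suc m" "m \<ge> N" by (metis Suc_le_D Suc_le_mono)
  have "val_ge (\<sigma> (F m)) (r - real m / 2)" using val_ge_sigma a m by blast
  then have 1: "val_ge (\<sigma> (F m)) (r - real i / 2)" using m val_ge_mono by fastforce
  have "val_ge (\<delta> (F i)) (r - real i / 2 + 1)" using val_ge_delta a i by auto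
  then have 2: "val_ge (\<delta> (F i)) (r - real i / 2)" using val_ge_mono by fastforce
  show "val_ge (xmult F i) (r - real i / 2)" using m val_ge_add[OF 1 2] by simp
qed

lemma is_bseries_xmult: "is_bseries F \<Longrightarrow> is_bseries (xmult F)"
  unfolding is_bseries_def using tail_ge_xmult by blast

lemma is_bseries_xmult_pow: "is_bseries F \<Longrightarrow> is_bseries ((xmult^^i) F)"
  by (induction i) (auto simp: is_bseries_xmult)

lemma val_ge_skew_mult_term:
  assumes "val_ge (F i) (a - real i / 2)" "series_ge G b"
  shows "val_ge (F i * (xmult^^i) G n) (a + b - real n / 2)"
proof -
  have "val_ge ((xmult^^i) G n) (b + real i / 2 - real n / 2)"
    using series_ge_xmult_pow[OF assms(2), of i] unfolding series_ge_def by blast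
  from val_ge_mult[OF assms(1) this] show ?thesis by (simp add: algebra_simps)
qed

lemma skew_mult_terms_tends_zero:
  assumes "is_bseries F" "is_bseries G"
  shows "tends_zero (\<lambda>i. F i * (xmult^^i) G n)"
  unfolding tends_zero_def
proof
  fix r
  obtain b where b: "series_ge G b" using is_bseries_series_ge[OF assms(2)] by blast
  obtain N where N: "tail_ge N F (r - b + real n / 2)" using assms(1) is_bseries_def by blast
  have "val_ge (F i * (xmult^^i) G n) r" if "i \<ge> N" for i
  proof -
    have "val_ge (F i) ((r - b + real n / 2) - real i / 2)" using N that tail_ge_def by blast
    from val_ge_skew_mult_term[of F i "r - b + real n / 2" G b n] this b show ?thesis by simp
  qed
  then show "\<exists>N. \<forall>i\<ge>N. val_ge (F i * (xmult^^i) G n) r" by blast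
qed

lemma series_ge_skew_mult:
  assumes "series_ge F a" "series_ge G b" "is_bseries F" "is_bseries G"
  shows "series_ge (skew_mult F G) (a + b)"
  unfolding series_ge_def skew_mult_def
proof
  fix n
  show "val_ge (usum (\<lambda>i. F i * (xmult ^^ i) G n)) (a + b - real n / 2)"
    by (rule usum_val_ge[OF skew_mult_terms_tends_zero[OF assms(3,4)]])
       (rule val_ge_skew_mult_term[OF _ assms(2)], use assms(1) series_ge_def in blast)
qed

lemma series_ge_skew_mult_tail:
  assumes "tail_ge N F a" "series_ge G b" "is_bseries F" "is_bseries G"
  shows "series_ge (\<lambda>n. skew_mult F G n - skew_mult_upto N F G n) (a + b)"
  unfolding series_ge_def skew_mult_def skew_mult_upto_def
proof
  fix n
  show "val_ge (usum (\<lambda>i. F i * (xmult ^^ i) G n) - (\<Sum>i<N. F i * (xmult ^^ i) G n)) (a + b - real n / 2)"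
    by (rule usum_tail_val_ge[OF skew_mult_terms_tends_zero[OF assms(3,4)]])
       (rule val_ge_skew_mult_term[OF _ assms(2)], use assms(1) tail_ge_def in blast)
qed

lemma is_bseries_sigma: "is_bseries F \<Longrightarrow> is_bseries (\<lambda>i. \<sigma> (F i))"
  unfolding is_bseries_def tail_ge_def using val_ge_sigma by blast

lemma is_bseries_delta: "is_bseries F \<Longrightarrow> is_bseries (\<lambda>i. \<delta> (F i))"
  unfolding is_bseries_def tail_ge_def using val_ge_delta_weak by blast

lemma skew_mult_add_left: "is_bseries F \<Longrightarrow> is_bseries F' \<Longrightarrow> is_bseries G \<Longrightarrow>
   skew_mult (\<lambda>n. F n + F' n) G = (\<lambda>n. skew_mult F G n + skew_mult F' G n)"
  unfolding skew_mult_def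
  by (auto simp: distrib_right usum_add[OF skew_mult_terms_tends_zero skew_mult_terms_tends_zero])

lemma skew_mult_diff_left: "is_bseries F \<Longrightarrow> is_bseries F' \<Longrightarrow> is_bseries G \<Longrightarrow>
   skew_mult (\<lambda>n. F n - F' n) G = (\<lambda>n. skew_mult F G n - skew_mult F' G n)"
  unfolding skew_mult_def
  by (auto simp: left_diff_distrib usum_diff[OF skew_mult_terms_tends_zero skew_mult_terms_tends_zero])

lemma skew_mult_mult_left:
  "is_bseries F \<Longrightarrow> is_bseries G \<Longrightarrow> skew_mult (\<lambda>n. a * F n) G = (\<lambda>n. a * skew_mult F G n)"
  unfolding skew_mult_def by (auto simp: mult.assoc usum_mult_left[OF skew_mult_terms_tends_zero])

lemma skew_mult_add_right: "is_bseries F \<Longrightarrow> is_bseries G \<Longrightarrow> is_bseries G' \<Longrightarrow>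
   skew_mult F (\<lambda>n. G n + G' n) = (\<lambda>n. skew_mult F G n + skew_mult F G' n)"
  unfolding skew_mult_def
  by (auto simp: xmult_pow_add distrib_left usum_add[OF skew_mult_terms_tends_zero skew_mult_terms_tends_zero])

lemma skew_mult_diff_right: "is_bseries F \<Longrightarrow> is_bseries G \<Longrightarrow> is_bseries G' \<Longrightarrow>
   skew_mult F (\<lambda>n. G n - G' n) = (\<lambda>n. skew_mult F G n - skew_mult F G' n)"
  unfolding skew_mult_def
  by (auto simp: xmult_pow_diff right_diff_distrib usum_diff[OF skew_mult_terms_tends_zero skew_mult_terms_tends_zero])

lemma skew_mult_finite: "\<forall>i\<ge>N. F i = 0 \<Longrightarrow> skew_mult F G = skew_mult_upto N F G"
  unfolding skew_mult_def skew_mult_upto_def by (rule ext, rule usum_finite) simp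

lemma skew_mult_const: "skew_mult (const_s a) G = (\<lambda>n. a * G n)"
  by (subst skew_mult_finite[of 1]) (auto simp: const_s_def skew_mult_upto_def)

lemma skew_mult_xpow: "skew_mult (xpow k) G = (xmult^^k) G"
proof -
  have "skew_mult (xpow k) G = skew_mult_upto (Suc k) (xpow k) G"
    by (rule skew_mult_finite) (simp add: xpow_def)
  also have "\<dots> = (xmult^^k) G" unfolding skew_mult_upto_def xpow_def
    by (auto simp: if_distrib cong: if_cong)
  finally show ?thesis .
qed

lemma xpow_0_eq_const: "xpow 0 = const_s 1" unfolding xpow_def const_s_def by auto

lemma skew_mult_one_right: "skew_mult F (xpow 0) = F"
proof
  fix n
  have "skew_mult F (xpow 0) n = usum (\<lambda>i. F i * xpow i n)"
    unfolding skew_mult_def by (simp add: xmult_pow_xpow)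
  also have "\<dots> = (\<Sum>i<Suc n. F i * xpow i n)" by (rule usum_finite) (simp add: xpow_def)
  also have "\<dots> = F n" by (simp add: xpow_def if_distrib cong: if_cong)
  finally show "skew_mult F (xpow 0) n = F n" .
qed

lemma is_bseries_skew_mult_upto: "is_bseries F \<Longrightarrow> is_bseries G \<Longrightarrow> is_bseries (skew_mult_upto N F G)"
proof (induction N)
  case 0 then show ?case unfolding skew_mult_upto_def by simp
next
  case (Suc N)
  have "skew_mult_upto (Suc N) F G = (\<lambda>n. skew_mult_upto N F G n + F N * (xmult^^N) G n)"
    unfolding skew_mult_upto_def by simp
  moreover have "is_bseries (\<lambda>n. F N * (xmult^^N) G n)"
    by (rule is_bseries_mult_left[OF is_bseries_xmult_pow[OF Suc.prems(2)]])
  ultimately show ?case using is_bseries_add[OF Suc.IH[OF Suc.prems]] by simp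
qed

lemma is_bseries_skew_mult: assumes "is_bseries F" "is_bseries G" shows "is_bseries (skew_mult F G)"
proof (rule is_bseries_approx)
  fix r
  obtain b where b: "series_ge G b" using is_bseries_series_ge[OF assms(2)] by blast
  obtain N where N: "tail_ge N F (r - b)" using assms(1) is_bseries_def by blast
  have "series_ge (\<lambda>n. skew_mult F G n - skew_mult_upto N F G n) (r - b + b)"
    by (rule series_ge_skew_mult_tail[OF N b assms])
  then show "\<exists>H. is_bseries H \<and> series_ge (\<lambda>n. skew_mult F G n - H n) r"
    using is_bseries_skew_mult_upto[OF assms] by auto
qed

lemma tends_zero_shiftD: "tends_zero (\<lambda>i. f (Suc i)) \<Longrightarrow> tends_zero f"
  unfolding tends_zero_def by (metis Suc_le_D Suc_le_mono)

lemma xmult_skew_mult: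
  assumes F: "is_bseries F" and G: "is_bseries G"
  shows "xmult (skew_mult F G) = skew_mult (xmult F) G"
proof
  fix n
  define Y where "Y i = (xmult^^i) G" for i
  have YS: "Y (Suc i) = xmult (Y i)" for i unfolding Y_def by simp
  have t: "tends_zero (\<lambda>i. F i * Y i m)" for m unfolding Y_def
    by (rule skew_mult_terms_tends_zero[OF F G])
  have ts: "tends_zero (\<lambda>i. \<sigma> (F i) * Y (Suc i) n)"
    unfolding Y_def funpow_Suc_right o_def
      by (rule skew_mult_terms_tends_zero[OF is_bseries_sigma[OF F] is_bseries_xmult[OF G]])
  have td: "tends_zero (\<lambda>i. \<delta> (F i) * Y i n)"
    unfolding Y_def by (rule skew_mult_terms_tends_zero[OF is_bseries_delta[OF F] G])
  have tc: "tends_zero (\<lambda>i. (case i of 0 \<Rightarrow> 0 | Suc m \<Rightarrow> \<sigma> (F m)) * Y i n)"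
    by (rule tends_zero_shiftD) (simp add: ts)
  have A: "xmult (skew_mult F G) n = usum (\<lambda>i. xmult (\<lambda>m. F i * Y i m) n)"
  proof (cases n)
    case 0
    then show ?thesis unfolding skew_mult_def Y_def by (simp add: usum_delta[OF t[unfolded Y_def]])
  next
    case (Suc k)
    have "xmult (skew_mult F G) n = \<sigma> (usum (\<lambda>i. F i * Y i k)) + \<delta> (usum (\<lambda>i. F i * Y i n))"
      unfolding skew_mult_def Y_def Suc by simp
    also have "\<dots> = usum (\<lambda>i. \<sigma> (F i * Y i k)) + usum (\<lambda>i. \<delta> (F i * Y i n))"
      by (simp add: usum_sigma[OF t] usum_delta[OF t])
    also have "\<dots> = usum (\<lambda>i. \<sigma> (F i * Y i k) + \<delta> (F i * Y i n))"
      by (rule usum_add[symmetric]) (auto intro: tends_zero_sigma tends_zero_delta t)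
    finally show ?thesis unfolding Suc by simp
  qed
  also have "\<dots> = usum (\<lambda>i. \<sigma> (F i) * Y (Suc i) n + \<delta> (F i) * Y i n)"
    by (simp add: xmult_mult_left YS)
  also have "\<dots> = usum (\<lambda>i. \<sigma> (F i) * Y (Suc i) n) + usum (\<lambda>i. \<delta> (F i) * Y i n)"
    by (rule usum_add[OF ts td])
  also have "usum (\<lambda>i. \<sigma> (F i) * Y (Suc i) n) =
      usum (\<lambda>i. (case i of 0 \<Rightarrow> 0 | Suc m \<Rightarrow> \<sigma> (F m)) * Y i n)"
    by (subst usum_shift[of "\<lambda>i. (case i of 0 \<Rightarrow> 0 | Suc m \<Rightarrow> \<sigma> (F m)) * Y i n"])
       (use tc in auto)
  also have "usum (\<lambda>i. (case i of 0 \<Rightarrow> 0 | Suc m \<Rightarrow> \<sigma> (F m)) * Y i n) + usum (\<lambda>i. \<delta> (F i) * Y i n)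
      = usum (\<lambda>i. xmult F i * Y i n)"
    unfolding xmult_def distrib_right
    by (rule usum_add[symmetric, OF tc td])
  also have "\<dots> = skew_mult (xmult F) G n" unfolding skew_mult_def Y_def by simp
  finally show "xmult (skew_mult F G) n = skew_mult (xmult F) G n" .
qed

lemma skew_mult_xmult_pow:
  "is_bseries G \<Longrightarrow> is_bseries H \<Longrightarrow> skew_mult ((xmult^^i) G) H = (xmult^^i) (skew_mult G H)"
proof (induction i)
  case 0 then show ?case by simp
next
  case (Suc i)
  have "skew_mult ((xmult^^Suc i) G) H = skew_mult (xmult ((xmult^^i) G)) H" by simp
  also have "\<dots> = xmult (skew_mult ((xmult^^i) G) H)"
    by (rule xmult_skew_mult[OF is_bseries_xmult_pow[OF Suc.prems(1)] Suc.prems(2), symmetric])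
  finally show ?case using Suc by simp
qed

lemma skew_mult_skew_mult_upto:
  assumes F: "is_bseries F" and G: "is_bseries G" and H: "is_bseries H"
  shows "skew_mult (skew_mult_upto N F G) H = skew_mult_upto N F (skew_mult G H)"
proof (induction N)
  case 0
  have "usum (\<lambda>i. 0) = 0" using usum_finite[of 0 "\<lambda>i. 0"] by simp
  then show ?case unfolding skew_mult_def skew_mult_upto_def by simp
next
  case (Suc N)
  have xG: "is_bseries (\<lambda>n. F N * (xmult^^N) G n)"
    by (rule is_bseries_mult_left[OF is_bseries_xmult_pow[OF G]])
  have "skew_mult (skew_mult_upto (Suc N) F G) H =
      skew_mult (\<lambda>n. skew_mult_upto N F G n + F N * (xmult^^N) G n) H"
    unfolding skew_mult_upto_def by simp
  also have "\<dots> = (\<lambda>n. skew_mult (skew_mult_upto N F G) H n + skew_mult (\<lambda>n. F N * (xmult^^N) G n) H n)"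
    by (rule skew_mult_add_left[OF is_bseries_skew_mult_upto[OF F G] xG H])
  also have "skew_mult (\<lambda>n. F N * (xmult^^N) G n) H = (\<lambda>n. F N * (xmult^^N) (skew_mult G H) n)"
    by (simp add: skew_mult_mult_left[OF is_bseries_xmult_pow[OF G] H] skew_mult_xmult_pow[OF G H])
  finally show ?case
    unfolding Suc.IH by (simp add: skew_mult_upto_def)
qed

lemma skew_mult_assoc:
  assumes F: "is_bseries F" and G: "is_bseries G" and H: "is_bseries H"
  shows "skew_mult (skew_mult F G) H = skew_mult F (skew_mult G H)"
proof -
  obtain b where b: "series_ge G b" using is_bseries_series_ge[OF G] by blast
  obtain c where c: "series_ge H c" using is_bseries_series_ge[OF H] by blast
  have GH: "is_bseries (skew_mult G H)" using is_bseries_skew_mult[OF G H] .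
  have bGH: "series_ge (skew_mult G H) (b + c)" using series_ge_skew_mult[OF b c G H] .
  have "series_ge (\<lambda>n. skew_mult (skew_mult F G) H n - skew_mult F (skew_mult G H) n) r" for r
  proof -
    obtain N where N: "tail_ge N F (r - b - c)" using F unfolding is_bseries_def by blast
    have tail: "series_ge (\<lambda>n. skew_mult F G n - skew_mult_upto N F G n) (r - b - c + b)"
      by (rule series_ge_skew_mult_tail[OF N b F G])
    have tail_H: "series_ge (skew_mult (\<lambda>n. skew_mult F G n - skew_mult_upto N F G n) H) (r - b - c + b + c)"
      by (rule series_ge_skew_mult[OF tail c
          is_bseries_diff[OF is_bseries_skew_mult[OF F G] is_bseries_skew_mult_upto[OF F G]] H])
    have eq: "skew_mult (\<lambda>n. skew_mult F G n - skew_mult_upto N F G n) H =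
        (\<lambda>n. skew_mult (skew_mult F G) H n - skew_mult_upto N F (skew_mult G H) n)"
      by (simp only: skew_mult_diff_left[OF is_bseries_skew_mult[OF F G] is_bseries_skew_mult_upto[OF F G] H]
          skew_mult_skew_mult_upto[OF F G H])
    have rr: "r - b - c + b + c = r" by simp
    have left: "series_ge (\<lambda>n. skew_mult (skew_mult F G) H n - skew_mult_upto N F (skew_mult G H) n) r"
      using tail_H unfolding eq rr .
    have tail_GH: "series_ge (\<lambda>n. skew_mult F (skew_mult G H) n - skew_mult_upto N F (skew_mult G H) n)
        (r - b - c + (b + c))"
      by (rule series_ge_skew_mult_tail[OF N bGH F GH])
    have rr2: "r - b - c + (b + c) = r" by simp
    have "series_ge (\<lambda>n. (skew_mult (skew_mult F G) H n - skew_mult_upto N F (skew_mult G H) n) -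
        (skew_mult F (skew_mult G H) n - skew_mult_upto N F (skew_mult G H) n)) r"
      by (rule series_ge_diff[OF left tail_GH[unfolded rr2]])
    moreover have "(\<lambda>n. (skew_mult (skew_mult F G) H n - skew_mult_upto N F (skew_mult G H) n) -
        (skew_mult F (skew_mult G H) n - skew_mult_upto N F (skew_mult G H) n)) =
        (\<lambda>n. skew_mult (skew_mult F G) H n - skew_mult F (skew_mult G H) n)"
      by (rule ext) (simp add: algebra_simps)
    ultimately show ?thesis by simp
  qed
  then have "\<forall>r. series_ge (\<lambda>n. skew_mult (skew_mult F G) H n - skew_mult F (skew_mult G H) n) r"
    by blast
  then have "\<forall>n. skew_mult (skew_mult F G) H n - skew_mult F (skew_mult G H) n = 0"
    by (rule iffD1[OF series_ge_all_iff_zero])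
  then show ?thesis by (simp add: fun_eq_iff)
qed

lemma val_ge_iff_shift: "val_ge x (r - c) \<longleftrightarrow> ereal r \<le> u x + ereal c"
  unfolding val_ge_def by (simp add: ereal_le_add_iff)

lemma bseries_iff: "F \<in> bseries u \<longleftrightarrow> is_bseries F"
proof
  assume "F \<in> bseries u"
  then have a: "\<forall>r. \<exists>N. \<forall>n\<ge>N. ereal r < u (F n) + ereal (real n / 2)"
    unfolding bseries_def tendsto_PInfty eventually_sequentially by simp
  show "is_bseries F" unfolding is_bseries_def tail_ge_def
  proof
    fix r obtain N where "\<forall>n\<ge>N. ereal r < u (F n) + ereal (real n / 2)" using a by blast
    then have "\<forall>n\<ge>N. val_ge (F n) (r - real n / 2)"
      unfolding val_ge_iff_shift using less_imp_le by blast
    then show "\<exists>N. \<forall>i\<ge>N. val_ge (F i) (r - real i / 2)" by blast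
  qed
next
  assume b: "is_bseries F"
  have "\<exists>N. \<forall>n\<ge>N. ereal r < u (F n) + ereal (real n / 2)" for r
  proof -
    obtain N where "tail_ge N F (r + 1)" using b is_bseries_def by blast
    then have "\<forall>n\<ge>N. ereal (r + 1) \<le> u (F n) + ereal (real n / 2)"
      unfolding tail_ge_def val_ge_iff_shift by blast
    moreover have "ereal r < ereal (r + 1)" by simp
    ultimately show ?thesis using less_le_trans by blast
  qed
  then show "F \<in> bseries u"
    unfolding bseries_def tendsto_PInfty eventually_sequentially by simp
qed

lemma bseries_cauchy_limit:
  fixes s :: "nat \<Rightarrow> nat \<Rightarrow> 'a"
  assumes bs: "\<And>k. is_bseries (s k)"
    and cau: "\<forall>r. \<exists>N. \<forall>m\<ge>N. \<forall>n\<ge>N. series_ge (\<lambda>i. s m i - s n i) r"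
  obtains l where "is_bseries l" "\<forall>r. \<exists>N. \<forall>m\<ge>N. series_ge (\<lambda>i. s m i - l i) r"
proof -
  have "\<exists>l. converges_to (\<lambda>m. s m i) l" for i
    unfolding converges_to_def
  proof (rule u_complete[of "\<lambda>m. s m i", unfolded val_ge_def[symmetric]], intro allI)
    fix r obtain N where N: "\<forall>m\<ge>N. \<forall>n\<ge>N. series_ge (\<lambda>i. s m i - s n i) (r + real i / 2)"
      using cau by blast
    show "\<exists>N. \<forall>m\<ge>N. \<forall>n\<ge>N. val_ge (s m i - s n i) r"
      using N unfolding series_ge_def by (metis add_diff_cancel_right')
  qed
  then obtain l where l: "\<And>i. converges_to (\<lambda>m. s m i) (l i)" by metis
  have near: "\<forall>r. \<exists>N. \<forall>m\<ge>N. series_ge (\<lambda>i. s m i - l i) r"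
  proof
    fix r obtain N where N: "\<forall>m\<ge>N. \<forall>n\<ge>N. series_ge (\<lambda>i. s m i - s n i) r" using cau by blast
    have "series_ge (\<lambda>i. s m i - l i) r" if m: "m \<ge> N" for m
      unfolding series_ge_def
    proof
      fix i
      have "converges_to (\<lambda>n. s m i - s n i) (s m i - l i)"
        by (rule converges_to_diff[OF converges_to_const l])
      then show "val_ge (s m i - l i) (r - real i / 2)"
        by (rule converges_to_val_ge[of _ _ N]) (use N m in \<open>auto simp: series_ge_def\<close>)
    qed
    then show "\<exists>N. \<forall>m\<ge>N. series_ge (\<lambda>i. s m i - l i) r" by blast
  qed
  have "is_bseries l"
  proof (rule is_bseries_approx)
    fix r obtain N where "\<forall>m\<ge>N. series_ge (\<lambda>i. s m i - l i) r" using near by blast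
    then have "series_ge (\<lambda>i. l i - s N i) r" using series_ge_uminus[of "\<lambda>i. s N i - l i" r] by simp
    then show "\<exists>H. is_bseries H \<and> series_ge (\<lambda>n. l n - H n) r" using bs by auto
  qed
  with near show ?thesis using that by blast
qed

lemma bseries_eq: "bseries u = {F. is_bseries F}"
  by (auto simp: bseries_iff)

lemma f_u_ge_iff: "ereal r \<le> f_u u F \<longleftrightarrow> series_ge F r"
  unfolding f_u_def le_INF_iff series_ge_def val_ge_iff_shift by simp

lemma s_conv_iff: "s_conv u Fs F \<longleftrightarrow> (\<forall>r. \<exists>N. \<forall>k\<ge>N. series_ge (\<lambda>n. Fs k n - F n) r)"
proof
  assume "s_conv u Fs F"
  then have a: "\<forall>r. \<exists>N. \<forall>k\<ge>N. ereal r < f_u u (\<lambda>n. Fs k n - F n)"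
    unfolding s_conv_def tendsto_PInfty eventually_sequentially by simp
  show "\<forall>r. \<exists>N. \<forall>k\<ge>N. series_ge (\<lambda>n. Fs k n - F n) r"
    using a less_imp_le f_u_ge_iff by metis
next
  assume a: "\<forall>r. \<exists>N. \<forall>k\<ge>N. series_ge (\<lambda>n. Fs k n - F n) r"
  have "\<exists>N. \<forall>k\<ge>N. ereal r < f_u u (\<lambda>n. Fs k n - F n)" for r
  proof -
    obtain N where "\<forall>k\<ge>N. series_ge (\<lambda>n. Fs k n - F n) (r + 1)" using a by blast
    then have "\<forall>k\<ge>N. ereal (r + 1) \<le> f_u u (\<lambda>n. Fs k n - F n)" using f_u_ge_iff by blast
    moreover have "ereal r < ereal (r + 1)" by simp
    ultimately show ?thesis using less_le_trans by blast
  qed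
  then show "s_conv u Fs F" unfolding s_conv_def tendsto_PInfty eventually_sequentially by simp
qed

lemma s_conv_unique: "s_conv u Fs A \<Longrightarrow> s_conv u Fs B \<Longrightarrow> A = B"
proof -
  assume a: "s_conv u Fs A" "s_conv u Fs B"
  have "series_ge (\<lambda>n. B n - A n) r" for r
  proof -
    obtain N1 where N1: "\<forall>k\<ge>N1. series_ge (\<lambda>n. Fs k n - A n) r" using a(1) s_conv_iff by blast
    obtain N2 where N2: "\<forall>k\<ge>N2. series_ge (\<lambda>n. Fs k n - B n) r" using a(2) s_conv_iff by blast
    have "series_ge (\<lambda>n. (Fs (max N1 N2) n - A n) - (Fs (max N1 N2) n - B n)) r"
      by (rule series_ge_diff) (use N1 N2 in auto)
    then show ?thesis by simp
  qed
  then have "\<forall>r. series_ge (\<lambda>n. B n - A n) r" by blast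
  then have "\<forall>n. B n - A n = 0" by (rule iffD1[OF series_ge_all_iff_zero])
  then show ?thesis by (simp add: fun_eq_iff)
qed

lemma is_bseries_const: "is_bseries (const_s a)"
  by (rule is_bseries_finite[of 1]) (simp add: const_s_def)

lemma is_bseries_xpow:
  "is_bseries (xpow k)" by (rule is_bseries_finite[of "Suc k"]) (simp add: xpow_def)

lemma ring_BRing_skew_mult: "ring (BRing u skew_mult)"
proof (rule ringI)
  show "abelian_group (BRing u skew_mult)"
    apply (rule abelian_groupI)
         apply (simp_all add: bseries_iff s_add_def is_bseries_add add_ac)
    subgoal for x by (rule bexI[of _ "\<lambda>n. - x n"]) (simp_all add: is_bseries_uminus bseries_iff)
    done
next
  show "monoid (BRing u skew_mult)"
    apply (rule monoidI)
        apply (simp_all add: bseries_iff is_bseries_skew_mult is_bseries_const skew_mult_assoc skew_mult_const)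
    subgoal for x using skew_mult_one_right[of x] by (simp add: xpow_0_eq_const)
    done
next
  fix x y z assume "x \<in> carrier (BRing u skew_mult)" "y \<in> carrier (BRing u skew_mult)"
    "z \<in> carrier (BRing u skew_mult)"
  then have b: "is_bseries x" "is_bseries y" "is_bseries z" by (simp_all add: bseries_iff)
  show "(x \<oplus>\<^bsub>BRing u skew_mult\<^esub> y) \<otimes>\<^bsub>BRing u skew_mult\<^esub> z =
     x \<otimes>\<^bsub>BRing u skew_mult\<^esub> z \<oplus>\<^bsub>BRing u skew_mult\<^esub> y \<otimes>\<^bsub>BRing u skew_mult\<^esub> z"
    using b by (simp add: s_add_def skew_mult_add_left)
  show "z \<otimes>\<^bsub>BRing u skew_mult\<^esub> (x \<oplus>\<^bsub>BRing u skew_mult\<^esub> y) =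
     z \<otimes>\<^bsub>BRing u skew_mult\<^esub> x \<oplus>\<^bsub>BRing u skew_mult\<^esub> z \<otimes>\<^bsub>BRing u skew_mult\<^esub> y"
    using b by (simp add: s_add_def skew_mult_add_right)
qed

lemma skew_mult_continuous:
  assumes Fs: "\<forall>k. is_bseries (Fs k)" and Gs: "\<forall>k. is_bseries (Gs k)" and F: "is_bseries F"
    and G: "is_bseries G"
    and cF: "s_conv u Fs F" and cG: "s_conv u Gs G"
  shows "s_conv u (\<lambda>k. skew_mult (Fs k) (Gs k)) (skew_mult F G)"
  unfolding s_conv_iff
proof
  fix r
  obtain bF where bF: "series_ge F bF" using is_bseries_series_ge[OF F] by blast
  obtain bG where bG: "series_ge G bG" using is_bseries_series_ge[OF G] by blast
  obtain N0 where N0: "\<forall>k\<ge>N0. series_ge (\<lambda>n. Gs k n - G n) 0" using cG s_conv_iff by blast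
  define c where "c = min 0 bG"
  obtain N1 where N1: "\<forall>k\<ge>N1. series_ge (\<lambda>n. Fs k n - F n) (r - c)" using cF s_conv_iff by blast
  obtain N2 where N2: "\<forall>k\<ge>N2. series_ge (\<lambda>n. Gs k n - G n) (r - bF)" using cG s_conv_iff by blast
  have "series_ge (\<lambda>n. skew_mult (Fs k) (Gs k) n - skew_mult F G n) r"
    if k: "k \<ge> max N0 (max N1 N2)" for k
  proof -
    have gk: "series_ge (Gs k) c"
    proof -
      have "series_ge (\<lambda>n. (Gs k n - G n) + G n) c"
        using N0 k bG by (intro series_ge_add) (auto simp: c_def intro: series_ge_mono)
      then show ?thesis by simp
    qed
    have diff_F: "series_ge (skew_mult (\<lambda>n. Fs k n - F n) (Gs k)) (r - c + c)"
      by (rule series_ge_skew_mult[OF _ gk]) (use N1 k Fs Gs F is_bseries_diff in auto)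
    have diff_G: "series_ge (skew_mult F (\<lambda>n. Gs k n - G n)) (bF + (r - bF))"
      by (rule series_ge_skew_mult[OF bF]) (use N2 k Gs G F is_bseries_diff in auto)
    have e1: "skew_mult (\<lambda>n. Fs k n - F n) (Gs k) = (\<lambda>n. skew_mult (Fs k) (Gs k) n - skew_mult F (Gs k) n)"
      by (rule skew_mult_diff_left) (use Fs Gs F in auto)
    have e2: "skew_mult F (\<lambda>n. Gs k n - G n) = (\<lambda>n. skew_mult F (Gs k) n - skew_mult F G n)"
      by (rule skew_mult_diff_right) (use Fs Gs G F in auto)
    have "series_ge (\<lambda>n. (skew_mult (Fs k) (Gs k) n - skew_mult F (Gs k) n) + (skew_mult F (Gs k) n - skew_mult F G n)) r"
      using diff_F diff_G unfolding e1 e2 by (intro series_ge_add) auto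
    then show ?thesis by simp
  qed
  then show "\<exists>N. \<forall>k\<ge>N. series_ge (\<lambda>n. skew_mult (Fs k) (Gs k) n - skew_mult F G n) r" by blast
qed

lemma xmult_const: "xmult (const_s a) = s_add (lsmult (\<sigma> a) (xpow 1)) (const_s (\<delta> a))"
  by (rule ext) (auto simp: xmult_def const_s_def xpow_def s_add_def lsmult_def split: nat.split)

lemma skew_mult_ok_skew_mult: "skew_mult_ok u \<sigma> \<delta> skew_mult"
  unfolding skew_mult_ok_def
proof (intro conjI allI ballI impI)
  show "ring (BRing u skew_mult)" by (rule ring_BRing_skew_mult)
next
  fix a F G assume "F \<in> bseries u" "G \<in> bseries u"
  then show "skew_mult (lsmult a F) G = lsmult a (skew_mult F G)"
    unfolding lsmult_def bseries_iff by (rule skew_mult_mult_left)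
next
  fix a F show "skew_mult (const_s a) F = lsmult a F" by (simp add: skew_mult_const lsmult_def)
next
  fix a show "skew_mult (xpow 1) (const_s a) = s_add (lsmult (\<sigma> a) (xpow 1)) (const_s (\<delta> a))"
    by (simp add: skew_mult_xpow xmult_const)
next
  fix n show "skew_mult (xpow n) (xpow 1) = xpow (Suc n)"
    by (simp add: skew_mult_xpow xmult_pow_xpow)
next
  fix Fs Gs F G
  assume "\<forall>k. Fs k \<in> bseries u" "\<forall>k. Gs k \<in> bseries u" "F \<in> bseries u" "G \<in> bseries u"
    "s_conv u Fs F" "s_conv u Gs G"
  then show "s_conv u (\<lambda>k. skew_mult (Fs k) (Gs k)) (skew_mult F G)"
    unfolding bseries_iff by (intro skew_mult_continuous) auto
qed

definition trunc_series :: "nat \<Rightarrow> (nat \<Rightarrow> 'a) \<Rightarrow> nat \<Rightarrow> 'a" where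
  "trunc_series N G = (\<lambda>n. if n < N then G n else 0)"

lemma trunc_series_Suc: "trunc_series (Suc N) G = s_add (trunc_series N G) (lsmult (G N) (xpow N))"
  by (rule ext) (auto simp: trunc_series_def s_add_def lsmult_def xpow_def less_Suc_eq)

lemma trunc_series_0: "trunc_series 0 G = (\<lambda>n. 0)" by (simp add: trunc_series_def)

lemma is_bseries_trunc_series: "is_bseries (trunc_series N G)"
  by (rule is_bseries_finite[of N]) (simp add: trunc_series_def)

lemma is_bseries_lsmult: "is_bseries F \<Longrightarrow> is_bseries (lsmult a F)"
  unfolding lsmult_def by (rule is_bseries_mult_left)

lemma s_conv_trunc_series: assumes "is_bseries G" shows "s_conv u (\<lambda>k. trunc_series k G) G"
  unfolding s_conv_iff
proof
  fix r obtain N where N: "tail_ge N G r" using assms is_bseries_def by blast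
  have "series_ge (\<lambda>n. trunc_series k G n - G n) r" if "k \<ge> N" for k
    unfolding series_ge_def trunc_series_def using N that unfolding tail_ge_def by auto
  then show "\<exists>N. \<forall>k\<ge>N. series_ge (\<lambda>n. trunc_series k G n - G n) r" by blast
qed

lemma s_conv_skew_mult_upto:
  assumes "is_bseries F" "is_bseries G"
  shows "s_conv u (\<lambda>k. skew_mult_upto k F G) (skew_mult F G)"
  unfolding s_conv_iff
proof
  fix r
  obtain b where b: "series_ge G b" using is_bseries_series_ge[OF assms(2)] by blast
  obtain N where N: "tail_ge N F (r - b)" using assms(1) is_bseries_def by blast
  have "series_ge (\<lambda>n. skew_mult_upto k F G n - skew_mult F G n) r" if "k \<ge> N" for k
  proof -
    have "series_ge (\<lambda>n. skew_mult F G n - skew_mult_upto k F G n) (r - b + b)"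
      by (rule series_ge_skew_mult_tail[OF _ b assms]) (use N that tail_ge_mono in blast)
    then show ?thesis using series_ge_uminus[of "\<lambda>n. skew_mult F G n - skew_mult_upto k F G n" r]
      by simp
  qed
  then show "\<exists>N. \<forall>k\<ge>N. series_ge (\<lambda>n. skew_mult_upto k F G n - skew_mult F G n) r" by blast
qed

lemma s_conv_xmult: assumes "s_conv u Gs G" shows "s_conv u (\<lambda>k. xmult (Gs k)) (xmult G)"
  unfolding s_conv_iff
proof
  fix r obtain N where N: "\<forall>k\<ge>N. series_ge (\<lambda>n. Gs k n - G n) r" using assms s_conv_iff by blast
  have "series_ge (\<lambda>n. xmult (Gs k) n - xmult G n) r" if "k \<ge> N" for k
  proof -
    have "series_ge (xmult (\<lambda>n. Gs k n - G n)) (r + 1/2)"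
      by (rule series_ge_xmult) (use N that in blast)
    then show ?thesis by (simp add: xmult_diff series_ge_mono)
  qed
  then show "\<exists>N. \<forall>k\<ge>N. series_ge (\<lambda>n. xmult (Gs k) n - xmult G n) r" by blast
qed

lemma s_conv_const: "s_conv u (\<lambda>k. G) G" unfolding s_conv_iff by simp

section \<open>The filtration \<^const>\<open>f_u\<close>\<close>

lemma f_u_zero: "f_u u (\<lambda>n. 0) = \<infinity>"
  unfolding f_u_def by (simp add: u_zero)

lemma f_u_uminus: "f_u u (\<lambda>n. - F n) = f_u u F"
  unfolding f_u_def by (simp add: u_uminus)

lemma f_u_add: "min (f_u u F) (f_u u G) \<le> f_u u (\<lambda>n. F n + G n)"
  unfolding f_u_def
proof (rule INF_greatest)
  fix i :: nat
  have 1: "min (INF i. u (F i) + ereal (real i / 2)) (INF i. u (G i) + ereal (real i / 2))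
      \<le> u (F i) + ereal (real i / 2)" by (meson INF_lower UNIV_I min.coboundedI1)
  have 2: "min (INF i. u (F i) + ereal (real i / 2)) (INF i. u (G i) + ereal (real i / 2))
      \<le> u (G i) + ereal (real i / 2)" by (meson INF_lower UNIV_I min.coboundedI2)
  have "u (F i) \<le> u (F i + G i) \<or> u (G i) \<le> u (F i + G i)" using u_add[of "F i" "G i"]
    by (simp add: min_le_iff_disj)
  then show "min (INF i. u (F i) + ereal (real i / 2)) (INF i. u (G i) + ereal (real i / 2))
      \<le> u (F i + G i) + ereal (real i / 2)"
  proof
    assume "u (F i) \<le> u (F i + G i)"
    then have "u (F i) + ereal (real i / 2) \<le> u (F i + G i) + ereal (real i / 2)"
      by (rule add_right_mono)
    then show ?thesis using 1 by (rule order_trans[rotated])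
  next
    assume "u (G i) \<le> u (F i + G i)"
    then have "u (G i) + ereal (real i / 2) \<le> u (F i + G i) + ereal (real i / 2)"
      by (rule add_right_mono)
    then show ?thesis using 2 by (rule order_trans[rotated])
  qed
qed

lemma f_u_not_MInfty: "is_bseries F \<Longrightarrow> f_u u F \<noteq> -\<infinity>"
proof -
  assume "is_bseries F"
  then obtain b where "series_ge F b" using is_bseries_series_ge by blast
  then have "ereal b \<le> f_u u F" using f_u_ge_iff by blast
  then show ?thesis by auto
qed

lemma f_u_skew_mult:
  assumes "is_bseries F" "is_bseries G"
  shows "f_u u F + f_u u G \<le> f_u u (skew_mult F G)"
proof (rule ereal_sum_le[OF f_u_not_MInfty[OF assms(1)] f_u_not_MInfty[OF assms(2)]])
  fix a b assume "ereal a \<le> f_u u F" "ereal b \<le> f_u u G"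
  then have "series_ge F a" "series_ge G b" using f_u_ge_iff by blast+
  then have "series_ge (skew_mult F G) (a + b)" using series_ge_skew_mult assms by blast
  then show "ereal (a + b) \<le> f_u u (skew_mult F G)" using f_u_ge_iff by blast
qed

lemma f_u_const: "f_u u (const_s a) = u a"
proof (rule antisym)
  show "f_u u (const_s a) \<le> u a" unfolding f_u_def
    using INF_lower[of 0 UNIV "\<lambda>i. u (const_s a i) + ereal (real i / 2)"] by (simp add: const_s_def)
  show "u a \<le> f_u u (const_s a)" unfolding f_u_def
    by (rule INF_greatest) (auto simp: const_s_def u_zero)
qed

lemma f_u_attained:
  assumes "is_bseries F"
  obtains j where "f_u u F = u (F j) + ereal (real j / 2)"
proof -
  define g where "g i = u (F i) + ereal (real i / 2)" for i
  have fg: "f_u u F = (INF i. g i)" unfolding f_u_def g_def by simp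
  have "\<exists>j. (INF i. g i) = g j"
  proof (cases "\<forall>i. g i = \<infinity>")
    case True
    then show ?thesis by simp
  next
    case False
    then obtain i0 where i0: "g i0 \<noteq> \<infinity>" by blast
    then obtain c where c: "g i0 = ereal c" using u_int_valued[of "F i0"] unfolding g_def by auto
    obtain M where M: "tail_ge M F (c + 1)" using assms is_bseries_def by blast
    define M' where "M' = max M (Suc i0)"
    define m where "m = Min (g ` {..<M'})"
    have i0M: "i0 \<in> {..<M'}" by (simp add: M'_def)
    have fin: "finite (g ` {..<M'})" "g ` {..<M'} \<noteq> {}" using i0M by auto
    have "m \<in> g ` {..<M'}" unfolding m_def using Min_in[OF fin] .
    then obtain j where j: "m = g j" by blast
    have le: "m \<le> g i" for i
    proof (cases "i < M'")
      case True then show ?thesis unfolding m_def using fin by (auto intro: Min_le)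
    next
      case False
      then have "val_ge (F i) (c + 1 - real i / 2)" using M unfolding tail_ge_def M'_def by auto
      then have "ereal (c + 1) \<le> g i" unfolding g_def val_ge_iff_shift .
      moreover have "m \<le> g i0" unfolding m_def using fin i0M by (auto intro: Min_le)
      moreover have "g i0 \<le> ereal (c + 1)" using c by simp
      ultimately show ?thesis by (meson order_trans)
    qed
    have "(INF i. g i) = m"
    proof (rule antisym)
      show "(INF i. g i) \<le> m" unfolding j by (rule INF_lower) simp
      show "m \<le> (INF i. g i)" by (rule INF_greatest) (rule le)
    qed
    then show ?thesis using j by blast
  qed
  then show ?thesis using that unfolding fg g_def by blast
qed

lemma f_u_values:
  assumes "is_bseries F"
  shows "f_u u F = \<infinity> \<or> (\<exists>k::int. f_u u F = ereal (of_int k / 2))"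
proof -
  obtain j where fe: "f_u u F = u (F j) + ereal (real j / 2)"
    using f_u_attained[OF assms] .
  show ?thesis
  proof (cases "u (F j) = \<infinity>")
    case True then show ?thesis using fe by simp
  next
    case False
    then obtain k :: int where k: "u (F j) = ereal (of_int k)" using u_int_valued by blast
    have "f_u u F = ereal (of_int (2 * k + int j) / 2)" using fe k by (simp add: field_simps)
    then show ?thesis by blast
  qed
qed

section \<open>Principal symbols of products\<close>

lemma is_filtration_RR: "is_filtration RR u"
  unfolding is_filtration_def by (simp add: u_zero u_add u_mult u_uminus)

definition eq_mod :: "real \<Rightarrow> 'a \<Rightarrow> 'a \<Rightarrow> bool" where
  "eq_mod mu x y \<longleftrightarrow> ereal mu < u (x - y)"

lemma eq_mod_refl[simp]: "eq_mod mu x x" by (simp add: eq_mod_def u_zero)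

lemma eq_mod_sym:
  "eq_mod mu x y \<Longrightarrow> eq_mod mu y x" unfolding eq_mod_def using u_uminus[of "x - y"] by simp

lemma eq_mod_trans [trans]: "eq_mod mu x y \<Longrightarrow> eq_mod mu y z \<Longrightarrow> eq_mod mu x z"
proof -
  assume a: "eq_mod mu x y" "eq_mod mu y z"
  have "ereal mu < min (u (x - y)) (u (y - z))" using a eq_mod_def by simp
  also have "\<dots> \<le> u ((x - y) + (y - z))" by (rule u_add)
  finally show ?thesis unfolding eq_mod_def by simp
qed

lemma eq_mod_add: "eq_mod mu x y \<Longrightarrow> eq_mod mu x' y' \<Longrightarrow> eq_mod mu (x + x') (y + y')"
proof -
  assume a: "eq_mod mu x y" "eq_mod mu x' y'"
  have "ereal mu < min (u (x - y)) (u (x' - y'))" using a eq_mod_def by simp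
  also have "\<dots> \<le> u ((x - y) + (x' - y'))" by (rule u_add)
  finally show ?thesis unfolding eq_mod_def by (simp add: algebra_simps)
qed

lemma eq_mod_sum: "finite S \<Longrightarrow> (\<And>s. s \<in> S \<Longrightarrow> eq_mod mu (f s) (g s)) \<Longrightarrow> eq_mod mu (sum f S) (sum g S)"
  by (induction S rule: finite_induct) (auto intro: eq_mod_add)

lemma eq_mod_0_iff: "eq_mod mu x 0 \<longleftrightarrow> ereal mu < u x" by (simp add: eq_mod_def)

lemma val_gt_mult_left: "ereal a < u x \<Longrightarrow> ereal b \<le> u y \<Longrightarrow> ereal (a + b) < u (x * y)"
  using ereal_add_strict u_mult less_le_trans by blast

lemma val_gt_mult_right: "ereal a \<le> u x \<Longrightarrow> ereal b < u y \<Longrightarrow> ereal (a + b) < u (x * y)"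
proof -
  assume "ereal a \<le> u x" "ereal b < u y"
  then have "ereal (b + a) < u y + u x" by (rule ereal_add_strict[rotated])
  then have "ereal (a + b) < u x + u y" by (simp add: add.commute)
  then show ?thesis using u_mult less_le_trans by blast
qed

lemma eq_mod_mult: assumes "eq_mod a x x'" "eq_mod b y y'" "ereal a \<le> u x'" "ereal b \<le> u y"
  shows "eq_mod (a + b) (x * y) (x' * y')"
proof -
  have "x * y - x' * y' = (x - x') * y + x' * (y - y')" by (simp add: algebra_simps)
  moreover have "ereal (a + b) < u ((x - x') * y)" using val_gt_mult_left assms eq_mod_def by blast
  moreover have "ereal (a + b) < u (x' * (y - y'))"
    using val_gt_mult_right assms eq_mod_def by blast
  ultimately show ?thesis unfolding eq_mod_def
    using eq_mod_add[of "a+b" "(x - x') * y" 0 "x' * (y - y')" 0]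
    by (simp add: eq_mod_def)
qed

lemma gr_cls_RR_eq_iff: "gr_cls RR u mu x = gr_cls RR u mu y \<longleftrightarrow> eq_mod mu x y"
  using gr_cls_eq_iff[OF ring_RR is_filtration_RR, of x y mu] by (simp add: RR_Fil_plus eq_mod_def)

lemma gr_rep_RR: "eq_mod mu (gr_rep (gr_cls RR u mu x)) x"
  using gr_rep_cls(2)[OF ring_RR is_filtration_RR, of x mu] by (simp add: RR_Fil_plus eq_mod_def)

lemma gr_cls_RR_eq_Fil_plus_iff: "gr_cls RR u mu x = Fil_plus RR u mu \<longleftrightarrow> ereal mu < u x"
  using gr_cls_eq_Fil_plus_iff[OF ring_RR is_filtration_RR, of x mu] by (simp add: RR_Fil_plus)

text \<open>Strict lower bounds pass through the infimum defining \<^const>\<open>f_u\<close> because all the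
  values \<open>u (F i) + i/2\<close> are half-integers.\<close>

lemma f_u_gt_iff: "ereal lam < f_u u F \<longleftrightarrow> (\<forall>i. ereal (lam - real i / 2) < u (F i))"
proof
  assume a: "ereal lam < f_u u F"
  show "\<forall>i. ereal (lam - real i / 2) < u (F i)"
  proof
    fix i
    have "f_u u F \<le> u (F i) + ereal (real i / 2)" unfolding f_u_def by (rule INF_lower) simp
    then have "ereal lam < u (F i) + ereal (real i / 2)" using a by (rule less_le_trans[rotated])
    then show "ereal (lam - real i / 2) < u (F i)" by (simp add: ereal_less_add_iff)
  qed
next
  assume a: "\<forall>i. ereal (lam - real i / 2) < u (F i)"
  define c where "c = (real_of_int \<lfloor>2 * lam\<rfloor> + 1) / 2"
  have "series_ge F c" unfolding series_ge_def
  proof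
    fix i
    define m where "m = \<lfloor>lam - real i / 2\<rfloor> + 1"
    have v: "val_ge (F i) (real_of_int m)" using a val_gt_iff_val_ge m_def by blast
    have m1: "real_of_int m > lam - real i / 2" unfolding m_def by linarith
    have "real_of_int (2 * m + int i) > real_of_int \<lfloor>2 * lam\<rfloor>" using m1 by linarith
    then have "2 * m + int i > \<lfloor>2 * lam\<rfloor>" by (simp only: of_int_less_iff)
    then have "2 * m + int i \<ge> \<lfloor>2 * lam\<rfloor> + 1" by linarith
    then have "real_of_int (2 * m + int i) \<ge> real_of_int (\<lfloor>2 * lam\<rfloor> + 1)"
      by (simp only: of_int_le_iff)
    then have "c - real i / 2 \<le> real_of_int m" unfolding c_def of_int_add of_int_mult
      by (simp add: field_simps)
    then show "val_ge (F i) (c - real i / 2)" using v val_ge_mono by blast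
  qed
  then have "ereal c \<le> f_u u F" using f_u_ge_iff by blast
  moreover have "lam < c"
  proof -
    have "2 * lam < real_of_int \<lfloor>2 * lam\<rfloor> + 1" using floor_correct[of "2 * lam"] by simp
    then show ?thesis unfolding c_def by (simp add: field_simps)
  qed
  moreover have "ereal lam < ereal c" using \<open>lam < c\<close> by simp
  ultimately show "ereal lam < f_u u F" using less_le_trans by blast
qed

text \<open>Modulo terms of higher filtration, \<open>x\<^sup>i\<close> shifts coefficients by \<open>i\<close> and applies \<open>\<sigma>\<^sup>i\<close>:
  each \<open>\<delta>\<close>-term gains an extra \<open>1/2\<close>.\<close>

lemma xmult_pow_coeff_approx: assumes "series_ge Q b"
  shows "val_ge ((xmult^^i) Q n - (if i \<le> n then (\<sigma>^^i) (Q (n - i)) else 0)) (b - real n / 2 + real i / 2 + 1/2)"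
  using assms
proof (induction i arbitrary: n)
  case 0 then show ?case by simp
next
  case (Suc i)
  have XQ: "val_ge ((xmult^^i) Q n) (b + real i / 2 - real n / 2)" for n
    using series_ge_xmult_pow[OF Suc.prems, of i] unfolding series_ge_def by blast
  show ?case
  proof (cases n)
    case 0
    have d: "val_ge (\<delta> ((xmult^^i) Q 0)) (b + real i / 2 - real 0 / 2 + 1)"
      by (rule val_ge_delta[OF XQ])
    have eq2: "(xmult^^Suc i) Q n - (if Suc i \<le> n then (\<sigma>^^Suc i) (Q (n - Suc i)) else 0) = \<delta> ((xmult^^i) Q 0)"
      using 0 by simp
    show ?thesis unfolding eq2 by (rule val_ge_mono[OF d]) (simp add: 0 field_simps)
  next
    case (Suc m)
    have e: "(xmult^^Suc i) Q n - (if Suc i \<le> n then (\<sigma>^^Suc i) (Q (n - Suc i)) else 0)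
        = \<sigma> ((xmult^^i) Q m - (if i \<le> m then (\<sigma>^^i) (Q (m - i)) else 0)) + \<delta> ((xmult^^i) Q n)"
      using Suc by (simp add: sigma_diff)
    have 1: "val_ge (\<sigma> ((xmult^^i) Q m - (if i \<le> m then (\<sigma>^^i) (Q (m - i)) else 0)))
        (b - real m / 2 + real i / 2 + 1/2)" by (rule val_ge_sigma[OF Suc.IH[OF Suc.prems]])
    have 2: "val_ge (\<delta> ((xmult^^i) Q n)) (b + real i / 2 - real n / 2 + 1)"
      by (rule val_ge_delta[OF XQ])
    have s1: "val_ge (\<sigma> ((xmult^^i) Q m - (if i \<le> m then (\<sigma>^^i) (Q (m - i)) else 0)))
        (b - real n / 2 + real (Suc i) / 2 + 1/2)" by (rule val_ge_mono[OF 1]) (simp add: Suc field_simps)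
    have s2: "val_ge (\<delta> ((xmult^^i) Q n)) (b - real n / 2 + real (Suc i) / 2 + 1/2)"
      by (rule val_ge_mono[OF 2]) (simp add: field_simps)
    show ?thesis unfolding e by (rule val_ge_add[OF s1 s2])
  qed
qed

lemma val_ge_skew_mult_coeff_twisted:
  assumes P: "is_bseries P" "series_ge P a" and Q: "is_bseries Q" "series_ge Q b"
  shows "val_ge (skew_mult P Q n - (\<Sum>i\<le>n. P i * (\<sigma>^^i) (Q (n - i)))) (a + b - real n / 2 + 1/2)"
proof -
  define E where "E i = (xmult^^i) Q n - (if i \<le> n then (\<sigma>^^i) (Q (n - i)) else 0)" for i
  define W where "W i = (if i \<le> n then P i * (\<sigma>^^i) (Q (n - i)) else 0)" for i
  have t: "tends_zero (\<lambda>i. P i * (xmult^^i) Q n)" by (rule skew_mult_terms_tends_zero[OF P(1) Q(1)])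
  have tW: "tends_zero W" unfolding W_def by (rule tends_zero_finite[of "Suc n"]) simp
  have split: "(\<lambda>i. P i * (xmult^^i) Q n) = (\<lambda>i. P i * E i + W i)"
    by (rule ext) (simp add: E_def W_def algebra_simps)
  have tE: "tends_zero (\<lambda>i. P i * E i)"
  proof -
    have "tends_zero (\<lambda>i. P i * (xmult^^i) Q n - W i)" by (rule tends_zero_diff[OF t tW])
    moreover have "(\<lambda>i. P i * (xmult^^i) Q n - W i) = (\<lambda>i. P i * E i)"
      by (rule ext) (simp add: E_def W_def algebra_simps)
    ultimately show ?thesis by simp
  qed
  have "skew_mult P Q n = usum (\<lambda>i. P i * E i) + usum W"
    unfolding skew_mult_def split by (rule usum_add[OF tE tW])
  also have "usum W = (\<Sum>i<Suc n. W i)" by (rule usum_finite) (simp add: W_def)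
  finally have L: "skew_mult P Q n = usum (\<lambda>i. P i * E i) + (\<Sum>i\<le>n. P i * (\<sigma>^^i) (Q (n - i)))"
    by (simp add: W_def lessThan_Suc_atMost)
  have "val_ge (usum (\<lambda>i. P i * E i)) (a + b - real n / 2 + 1/2)"
  proof (rule usum_val_ge[OF tE])
    fix i
    have "val_ge (P i * E i) ((a - real i / 2) + (b - real n / 2 + real i / 2 + 1/2))"
      unfolding E_def by (rule val_ge_mult)
        (use P(2) series_ge_def xmult_pow_coeff_approx[OF Q(2)] in auto)
    then show "val_ge (P i * E i) (a + b - real n / 2 + 1/2)" by (simp add: algebra_simps)
  qed
  then show ?thesis unfolding L by simp
qed

lemma skew_mult_coeff_approx:
  assumes P: "is_bseries P" "series_ge P a" and Q: "is_bseries Q" "series_ge Q b"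
  shows "eq_mod (a + b - real n / 2) (skew_mult P Q n) (\<Sum>i\<le>n. P i * Q (n - i))"
proof -
  have untwist: "val_ge (P i * ((\<sigma>^^i) (Q (n - i)) - Q (n - i))) (a + b - real n / 2 + 1/2)"
    if "i \<le> n" for i
  proof -
    have q: "val_ge (Q (n - i)) (b - real (n - i) / 2)" using Q(2) series_ge_def by blast
    have "val_ge (P i * ((\<sigma>^^i) (Q (n - i)) - Q (n - i))) ((a - real i / 2) + (b - real (n - i) / 2 + 1))"
      by (rule val_ge_mult) (use P(2) series_ge_def val_ge_sigma_pow_minus_id[OF q] in auto)
    moreover have "(a - real i / 2) + (b - real (n - i) / 2 + 1) \<ge> a + b - real n / 2 + 1/2"
      using that by (simp add: of_nat_diff field_simps)
    ultimately show ?thesis using val_ge_mono by blast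
  qed
  have eq: "skew_mult P Q n - (\<Sum>i\<le>n. P i * Q (n - i)) =
      (skew_mult P Q n - (\<Sum>i\<le>n. P i * (\<sigma>^^i) (Q (n - i)))) +
      (\<Sum>i\<le>n. P i * ((\<sigma>^^i) (Q (n - i)) - Q (n - i)))"
    by (simp add: sum_subtractf right_diff_distrib algebra_simps)
  have "val_ge ((skew_mult P Q n - (\<Sum>i\<le>n. P i * (\<sigma>^^i) (Q (n - i)))) +
      (\<Sum>i\<le>n. P i * ((\<sigma>^^i) (Q (n - i)) - Q (n - i)))) (a + b - real n / 2 + 1/2)"
    by (rule val_ge_add[OF val_ge_skew_mult_coeff_twisted[OF P Q] val_ge_sum]) (use untwist in auto)
  then show ?thesis
    unfolding eq[symmetric] eq_mod_def by (rule val_gt_if_val_ge)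
qed

lemma grR_rep: assumes "g \<in> carrier (gr RR u)"
  shows "ereal mu \<le> u (gr_rep (g mu))" "g mu = gr_cls RR u mu (gr_rep (g mu))"
  using gr_carrier_rep[OF ring_RR is_filtration_RR assms] by (auto simp: RR_Fil)

definition gr_to_poly :: "(real \<Rightarrow> (nat \<Rightarrow> 'a) set) \<Rightarrow> nat \<Rightarrow> real \<Rightarrow> 'a set" where
  "gr_to_poly G = (\<lambda>i mu. gr_cls RR u mu (gr_rep (G (mu + real i / 2)) i))"

lemma grR_one_closed: "\<one>\<^bsub>gr RR u\<^esub> \<in> carrier (gr RR u)"
  by (rule gr_one_closed[OF ring_RR is_filtration_RR]) (simp add: RR_Fil u_one)

lemma grR_mult_closed:
  "g \<in> carrier (gr RR u) \<Longrightarrow> h \<in> carrier (gr RR u) \<Longrightarrow> g \<otimes>\<^bsub>gr RR u\<^esub> h \<in> carrier (gr RR u)"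
  by (rule gr_mult_closed[OF ring_RR is_filtration_RR])

lemma grR_add: "g \<oplus>\<^bsub>gr RR u\<^esub> h = (\<lambda>mu. gr_cls RR u mu (gr_rep (g mu) + gr_rep (h mu)))"
  using gr_add[OF ring_RR is_filtration_RR] by simp

lemma grR_finsum: assumes "finite I" "f \<in> I \<rightarrow> carrier (gr RR u)"
  shows "finsum (gr RR u) f I = (\<lambda>mu. gr_cls RR u mu (\<Sum>i\<in>I. gr_rep (f i mu)))"
  using gr_finsum[OF ring_RR is_filtration_RR assms] by (simp add: RR_finsum[OF assms(1)])

lemma is_bseries_sum: "finite S \<Longrightarrow> (\<And>s. s \<in> S \<Longrightarrow> is_bseries (f s)) \<Longrightarrow> is_bseries (\<lambda>k. \<Sum>s\<in>S. f s k)"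
  by (induction S rule: finite_induct) (auto intro: is_bseries_add)

text \<open>\<^const>\<open>gr_rep\<close> of a zero class is an arbitrary element of \<^const>\<open>Fil_plus\<close>; taking \<open>0\<close>
  there instead keeps the series finitely supported.\<close>

definition poly_series :: "(nat \<Rightarrow> real \<Rightarrow> 'a set) \<Rightarrow> real \<Rightarrow> nat \<Rightarrow> 'a" where
  "poly_series p lam = (\<lambda>i. if p i (lam - real i / 2) = Fil_plus RR u (lam - real i / 2) then 0
      else gr_rep (p i (lam - real i / 2)))"

lemma gr_cls_RR_zero: "gr_cls RR u mu 0 = Fil_plus RR u mu"
  using gr_cls_zero[OF ring_RR is_filtration_RR, of mu] by simp

lemma poly_series_spec: assumes p: "p \<in> carrier (UP (gr RR u))"
  shows "is_bseries (poly_series p lam)" "series_ge (poly_series p lam) lam"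
    "gr_cls RR u (lam - real i / 2) (poly_series p lam i) = p i (lam - real i / 2)"
proof -
  have pc: "p i \<in> carrier (gr RR u)" for i using p UP_carrier_iff by blast
  obtain n where n0: "\<forall>m>n. p m = \<zero>\<^bsub>gr RR u\<^esub>" using p UP_carrier_iff by blast
  have n: "\<forall>m>n. p m = (\<lambda>mu. Fil_plus RR u mu)"
    using n0 gr_zero[OF ring_RR is_filtration_RR] by simp
  show "is_bseries (poly_series p lam)"
    by (rule is_bseries_finite[of "Suc n"]) (auto simp: poly_series_def n)
  show "series_ge (poly_series p lam) lam" unfolding series_ge_def
  proof
    fix i show "val_ge (poly_series p lam i) (lam - real i / 2)"
      unfolding poly_series_def val_ge_def using grR_rep(1)[OF pc] by (auto simp: u_zero)
  qed
  show "gr_cls RR u (lam - real i / 2) (poly_series p lam i) = p i (lam - real i / 2)"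
  proof (cases "p i (lam - real i / 2) = Fil_plus RR u (lam - real i / 2)")
    case True then show ?thesis unfolding poly_series_def using gr_cls_RR_zero by simp
  next
    case False then show ?thesis unfolding poly_series_def using grR_rep(2)[OF pc] by simp
  qed
qed

end

section \<open>Uniqueness of the multiplication\<close>

locale skew_bseries_ring = complete_skew_filtration +
  fixes mul :: "(nat \<Rightarrow> 'a) \<Rightarrow> (nat \<Rightarrow> 'a) \<Rightarrow> nat \<Rightarrow> 'a"
  assumes mul_ok: "skew_mult_ok u \<sigma> \<delta> mul"
begin

lemma ring_BRing: "ring (BRing u mul)"
  using mul_ok skew_mult_ok_def by blast

sublocale B: ring "BRing u mul"
  by (rule ring_BRing)

lemma mul_assoc:
  "is_bseries F \<Longrightarrow> is_bseries G \<Longrightarrow> is_bseries H \<Longrightarrow> mul (mul F G) H = mul F (mul G H)"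
  using B.m_assoc by (simp add: bseries_iff)

lemma mul_add_left:
  "is_bseries F \<Longrightarrow> is_bseries G \<Longrightarrow> is_bseries H \<Longrightarrow> mul (s_add F G) H = s_add (mul F H) (mul G H)"
  using B.l_distr by (simp add: bseries_iff)

lemma mul_add_right:
  "is_bseries F \<Longrightarrow> is_bseries G \<Longrightarrow> is_bseries H \<Longrightarrow> mul H (s_add F G) = s_add (mul H F) (mul H G)"
  using B.r_distr by (simp add: bseries_iff)

lemma mul_zero_left: "is_bseries F \<Longrightarrow> mul (\<lambda>n. 0) F = (\<lambda>n. 0)"
  using B.l_null by (simp add: bseries_iff)

lemma mul_zero_right: "is_bseries F \<Longrightarrow> mul F (\<lambda>n. 0) = (\<lambda>n. 0)"
  using B.r_null by (simp add: bseries_iff)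

lemma mul_one_left: "is_bseries F \<Longrightarrow> mul (xpow 0) F = F"
  using B.l_one by (simp add: bseries_iff xpow_0_eq_const)

lemma mul_one_right: "is_bseries F \<Longrightarrow> mul F (xpow 0) = F"
  using B.r_one by (simp add: bseries_iff xpow_0_eq_const)

lemma mul_lsmult: "is_bseries F \<Longrightarrow> is_bseries G \<Longrightarrow> mul (lsmult a F) G = lsmult a (mul F G)"
  using mul_ok unfolding skew_mult_ok_def bseries_eq by blast

lemma mul_const: "is_bseries F \<Longrightarrow> mul (const_s a) F = lsmult a F"
  using mul_ok unfolding skew_mult_ok_def bseries_eq by blast

lemma mul_x_const: "mul (xpow 1) (const_s a) = s_add (lsmult (\<sigma> a) (xpow 1)) (const_s (\<delta> a))"
  using mul_ok unfolding skew_mult_ok_def by blast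

lemma mul_xpow_x: "mul (xpow n) (xpow 1) = xpow (Suc n)"
  using mul_ok unfolding skew_mult_ok_def by blast

lemma mul_continuous:
  "(\<And>k. is_bseries (Fs k)) \<Longrightarrow> (\<And>k. is_bseries (Gs k)) \<Longrightarrow> is_bseries F \<Longrightarrow> is_bseries G \<Longrightarrow>
    s_conv u Fs F \<Longrightarrow> s_conv u Gs G \<Longrightarrow> s_conv u (\<lambda>k. mul (Fs k) (Gs k)) (mul F G)"
  using mul_ok unfolding skew_mult_ok_def bseries_eq by blast

lemma mul_x_xpow: "mul (xpow 1) (xpow k) = xpow (Suc k)"
proof (induction k)
  case 0
  show ?case using mul_one_right[OF is_bseries_xpow] by simp
next
  case (Suc k)
  have "mul (xpow 1) (xpow (Suc k)) = mul (xpow 1) (mul (xpow k) (xpow 1))"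
    by (simp only: mul_xpow_x)
  also have "\<dots> = mul (mul (xpow 1) (xpow k)) (xpow 1)"
    by (simp add: mul_assoc is_bseries_xpow)
  also have "\<dots> = xpow (Suc (Suc k))"
    by (simp only: Suc.IH mul_xpow_x)
  finally show ?case .
qed

lemma mul_x_monomial: "mul (xpow 1) (lsmult a (xpow k)) = xmult (lsmult a (xpow k))"
proof -
  have "mul (xpow 1) (lsmult a (xpow k)) = mul (mul (xpow 1) (const_s a)) (xpow k)"
    by (simp add: mul_const mul_assoc is_bseries_xpow is_bseries_const)
  also have "\<dots> = s_add (mul (lsmult (\<sigma> a) (xpow 1)) (xpow k)) (mul (const_s (\<delta> a)) (xpow k))"
    unfolding mul_x_const
    by (rule mul_add_left) (simp_all add: is_bseries_xpow is_bseries_lsmult is_bseries_const)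
  also have "\<dots> = s_add (lsmult (\<sigma> a) (xpow (Suc k))) (lsmult (\<delta> a) (xpow k))"
    by (simp add: mul_lsmult mul_const is_bseries_xpow mul_x_xpow del: One_nat_def)
  also have "\<dots> = xmult (lsmult a (xpow k))"
    unfolding lsmult_def s_add_def xmult_mult_left xmult_xpow by simp
  finally show ?thesis .
qed

lemma mul_x_trunc_series: "mul (xpow 1) (trunc_series N G) = xmult (trunc_series N G)"
proof (induction N)
  case 0
  show ?case by (simp add: trunc_series_0 mul_zero_right is_bseries_xpow)
next
  case (Suc N)
  have "mul (xpow 1) (trunc_series (Suc N) G) =
      s_add (mul (xpow 1) (trunc_series N G)) (mul (xpow 1) (lsmult (G N) (xpow N)))"
    unfolding trunc_series_Suc
    by (rule mul_add_right) (simp_all add: is_bseries_trunc_series is_bseries_lsmult is_bseries_xpow)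
  also have "\<dots> = xmult (trunc_series (Suc N) G)"
    unfolding Suc mul_x_monomial trunc_series_Suc s_add_def by (simp add: xmult_add)
  finally show ?case .
qed

text \<open>Truncations converge to the series, so continuity extends the rule from polynomials.\<close>

lemma mul_x: assumes G: "is_bseries G" shows "mul (xpow 1) G = xmult G"
proof (rule s_conv_unique)
  show "s_conv u (\<lambda>k. mul (xpow 1) (trunc_series k G)) (mul (xpow 1) G)"
    by (rule mul_continuous) (simp_all add: is_bseries_xpow is_bseries_trunc_series G s_conv_const s_conv_trunc_series)
  show "s_conv u (\<lambda>k. mul (xpow 1) (trunc_series k G)) (xmult G)"
    unfolding mul_x_trunc_series by (rule s_conv_xmult[OF s_conv_trunc_series[OF G]])
qed

lemma mul_xpow: "is_bseries G \<Longrightarrow> mul (xpow n) G = (xmult^^n) G"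
proof (induction n arbitrary: G)
  case 0
  then show ?case by (simp add: mul_one_left)
next
  case (Suc n)
  have "mul (xpow (Suc n)) G = mul (xpow n) (mul (xpow 1) G)"
    by (simp only: mul_xpow_x[symmetric]) (simp add: mul_assoc is_bseries_xpow Suc.prems)
  also have "\<dots> = (xmult^^n) (xmult G)"
    by (simp add: mul_x Suc.prems Suc.IH is_bseries_xmult del: One_nat_def)
  finally show ?case by (simp only: funpow_Suc_right o_def)
qed

lemma mul_trunc_series: assumes G: "is_bseries G"
  shows "mul (trunc_series N F) G = skew_mult_upto N F G"
proof (induction N)
  case 0
  show ?case by (simp add: trunc_series_0 mul_zero_left G skew_mult_upto_def)
next
  case (Suc N)
  have "mul (trunc_series (Suc N) F) G =
      s_add (mul (trunc_series N F) G) (mul (lsmult (F N) (xpow N)) G)"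
    unfolding trunc_series_Suc
    by (rule mul_add_left) (simp_all add: is_bseries_trunc_series is_bseries_lsmult is_bseries_xpow G)
  also have "\<dots> = s_add (skew_mult_upto N F G) (lsmult (F N) ((xmult^^N) G))"
    by (simp add: Suc mul_lsmult is_bseries_xpow G mul_xpow)
  also have "\<dots> = skew_mult_upto (Suc N) F G"
    by (simp add: skew_mult_upto_def s_add_def lsmult_def)
  finally show ?case .
qed

lemma mul_eq_skew_mult: assumes F: "is_bseries F" and G: "is_bseries G"
  shows "mul F G = skew_mult F G"
proof (rule s_conv_unique)
  show "s_conv u (\<lambda>k. mul (trunc_series k F) G) (mul F G)"
    by (rule mul_continuous) (simp_all add: is_bseries_trunc_series F G s_conv_const s_conv_trunc_series)
  show "s_conv u (\<lambda>k. mul (trunc_series k F) G) (skew_mult F G)"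
    unfolding mul_trunc_series[OF G] by (rule s_conv_skew_mult_upto[OF F G])
qed

lemma BRing_a_inv: "is_bseries F \<Longrightarrow> \<ominus>\<^bsub>BRing u mul\<^esub> F = (\<lambda>n. - F n)"
  by (rule B.minus_equality)
    (auto simp: s_add_def bseries_iff intro: is_bseries_uminus)

lemma BRing_a_minus:
  "is_bseries F \<Longrightarrow> is_bseries G \<Longrightarrow> F \<ominus>\<^bsub>BRing u mul\<^esub> G = (\<lambda>n. F n - G n)"
  unfolding a_minus_def by (simp add: BRing_a_inv s_add_def)

lemma is_filtration_f_u: "is_filtration (BRing u mul) (f_u u)"
  unfolding is_filtration_def
proof (intro conjI ballI)
  show "f_u u \<zero>\<^bsub>BRing u mul\<^esub> = \<infinity>" by (simp add: f_u_zero)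
next
  fix x y assume "x \<in> carrier (BRing u mul)" "y \<in> carrier (BRing u mul)"
  then show "min (f_u u x) (f_u u y) \<le> f_u u (x \<oplus>\<^bsub>BRing u mul\<^esub> y)"
    using f_u_add by (simp add: s_add_def)
next
  fix x y assume "x \<in> carrier (BRing u mul)" "y \<in> carrier (BRing u mul)"
  then have "is_bseries x" "is_bseries y" by (simp_all add: bseries_iff)
  then show "f_u u x + f_u u y \<le> f_u u (x \<otimes>\<^bsub>BRing u mul\<^esub> y)"
    using f_u_skew_mult mul_eq_skew_mult by simp
next
  fix x assume "x \<in> carrier (BRing u mul)"
  then have "is_bseries x" by (simp add: bseries_iff)
  then show "f_u u (\<ominus>\<^bsub>BRing u mul\<^esub> x) = f_u u x" using BRing_a_inv f_u_uminus by simp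
qed

lemma filt_complete_BRing: "filt_complete (BRing u mul) (f_u u)"
  unfolding filt_complete_def
proof (intro allI impI)
  fix s assume rs: "range s \<subseteq> carrier (BRing u mul)" and cs: "filt_cauchy (BRing u mul) (f_u u) s"
  have bs: "is_bseries (s k)" for k
    using rs unfolding BRing_simps bseries_eq by auto
  have "\<forall>r. \<exists>N. \<forall>m\<ge>N. \<forall>n\<ge>N. series_ge (\<lambda>i. s m i - s n i) r"
    using cs unfolding filt_cauchy_def BRing_a_minus[OF bs bs] f_u_ge_iff by blast
  then obtain l where bl: "is_bseries l" and near: "\<forall>r. \<exists>N. \<forall>m\<ge>N. series_ge (\<lambda>i. s m i - l i) r"
    using bseries_cauchy_limit bs by blast
  have "filt_converges (BRing u mul) (f_u u) s l"
    unfolding filt_converges_def BRing_a_minus[OF bs bl] tendsto_PInfty eventually_sequentially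
  proof
    fix r obtain N where N: "\<forall>m\<ge>N. series_ge (\<lambda>i. s m i - l i) (r + 1)" using near by blast
    have "ereal r < f_u u (\<lambda>i. s m i - l i)" if "m \<ge> N" for m
    proof -
      have "ereal (r + 1) \<le> f_u u (\<lambda>i. s m i - l i)" using N that f_u_ge_iff by blast
      then show ?thesis by (rule less_le_trans[rotated]) simp
    qed
    then show "\<exists>N. \<forall>n\<ge>N. ereal r < f_u u (\<lambda>i. s n i - l i)" by blast
  qed
  then show "\<exists>l\<in>carrier (BRing u mul). filt_converges (BRing u mul) (f_u u) s l"
    using bl by (auto simp: bseries_iff)
qed

section \<open>The associated graded ring\<close>

lemma Fil_BRing: "Fil (BRing u mul) (f_u u) lam = {F. is_bseries F \<and> series_ge F lam}"
  unfolding Fil_def by (auto simp: bseries_iff f_u_ge_iff)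

lemma Fil_plus_BRing:
  "Fil_plus (BRing u mul) (f_u u) lam = {F. is_bseries F \<and> (\<forall>i. ereal (lam - real i / 2) < u (F i))}"
  unfolding Fil_plus_def by (auto simp: bseries_iff f_u_gt_iff)

lemma gr_cls_BRing_eq_iff: assumes "is_bseries X" "is_bseries Y"
  shows "gr_cls (BRing u mul) (f_u u) lam X = gr_cls (BRing u mul) (f_u u) lam Y \<longleftrightarrow>
     (\<forall>i. eq_mod (lam - real i / 2) (X i) (Y i))"
proof -
  have c: "X \<in> carrier (BRing u mul)" "Y \<in> carrier (BRing u mul)"
    using assms by (simp_all add: bseries_iff)
  show ?thesis using gr_cls_eq_iff[OF ring_BRing is_filtration_f_u c, of lam]
    by (simp add: BRing_a_minus[OF assms] Fil_plus_BRing is_bseries_diff[OF assms] eq_mod_def)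
qed

lemma gr_rep_BRing: assumes "is_bseries X"
  shows "is_bseries (gr_rep (gr_cls (BRing u mul) (f_u u) lam X))"
    "eq_mod (lam - real i / 2) (gr_rep (gr_cls (BRing u mul) (f_u u) lam X) i) (X i)"
proof -
  have c: "X \<in> carrier (BRing u mul)" using assms by (simp add: bseries_iff)
  have r: "gr_rep (gr_cls (BRing u mul) (f_u u) lam X) \<in> carrier (BRing u mul)"
    "gr_rep (gr_cls (BRing u mul) (f_u u) lam X) \<ominus>\<^bsub>BRing u mul\<^esub> X \<in> Fil_plus (BRing u mul) (f_u u) lam"
    using gr_rep_cls[OF ring_BRing is_filtration_f_u c] by auto
  show b: "is_bseries (gr_rep (gr_cls (BRing u mul) (f_u u) lam X))"
    using r(1) by (simp add: bseries_iff)
  show "eq_mod (lam - real i / 2) (gr_rep (gr_cls (BRing u mul) (f_u u) lam X) i) (X i)"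
    using r(2) by (simp add: BRing_a_minus[OF b assms] Fil_plus_BRing eq_mod_def)
qed

lemma finsum_BRing: "finite S \<Longrightarrow> (\<And>s. s \<in> S \<Longrightarrow> is_bseries (f s)) \<Longrightarrow>
    finsum (BRing u mul) f S = (\<lambda>k. \<Sum>s\<in>S. f s k)"
proof (induction S rule: finite_induct)
  case empty
  then show ?case by simp
next
  case (insert x S)
  have c: "f \<in> S \<rightarrow> carrier (BRing u mul)" "f x \<in> carrier (BRing u mul)"
    using insert.prems by (auto simp: bseries_iff)
  show ?case using insert by (simp add: B.finsum_insert[OF insert(1,2) c] s_add_def)
qed

lemma grB_rep: assumes "G \<in> carrier (gr (BRing u mul) (f_u u))"
  shows "is_bseries (gr_rep (G lam))" "series_ge (gr_rep (G lam)) lam"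
    "G lam = gr_cls (BRing u mul) (f_u u) lam (gr_rep (G lam))"
  using gr_carrier_rep[OF ring_BRing is_filtration_f_u assms, of lam] by (auto simp: Fil_BRing)

lemma grB_rep_notin_supp:
  assumes "G \<in> carrier (gr (BRing u mul) (f_u u))" "lam \<notin> gr_supp (BRing u mul) (f_u u) G"
  shows "ereal (lam - real i / 2) < u (gr_rep (G lam) i)"
  using gr_rep_notin_supp[OF ring_BRing is_filtration_f_u assms] by (simp add: Fil_plus_BRing)

lemma grB_finite_supp:
  "G \<in> carrier (gr (BRing u mul) (f_u u)) \<Longrightarrow> finite (gr_supp (BRing u mul) (f_u u) G)"
  using gr_carrier[OF ring_BRing is_filtration_f_u] by blast

lemma gr_supp_gr_to_poly_coeff: assumes G: "G \<in> carrier (gr (BRing u mul) (f_u u))"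
  shows "gr_supp RR u (gr_to_poly G i) \<subseteq> (\<lambda>lam. lam - real i / 2) ` gr_supp (BRing u mul) (f_u u) G"
proof
  fix mu assume a: "mu \<in> gr_supp RR u (gr_to_poly G i)"
  show "mu \<in> (\<lambda>lam. lam - real i / 2) ` gr_supp (BRing u mul) (f_u u) G"
  proof (rule ccontr)
    assume "mu \<notin> (\<lambda>lam. lam - real i / 2) ` gr_supp (BRing u mul) (f_u u) G"
    then have "mu + real i / 2 \<notin> gr_supp (BRing u mul) (f_u u) G" by force
    then have "ereal (mu + real i / 2 - real i / 2) < u (gr_rep (G (mu + real i / 2)) i)"
      by (rule grB_rep_notin_supp[OF G])
    then have "gr_to_poly G i mu = Fil_plus RR u mu"
      unfolding gr_to_poly_def gr_cls_RR_eq_Fil_plus_iff by simp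
    then show False using a gr_supp_def by blast
  qed
qed

lemma gr_to_poly_coeff_carrier: assumes G: "G \<in> carrier (gr (BRing u mul) (f_u u))"
  shows "gr_to_poly G i \<in> carrier (gr RR u)"
  unfolding gr_carrier[OF ring_RR is_filtration_RR]
proof
  show "\<forall>mu. \<exists>r\<in>Fil RR u mu. gr_to_poly G i mu = gr_cls RR u mu r"
  proof
    fix mu
    have "series_ge (gr_rep (G (mu + real i / 2))) (mu + real i / 2)" using grB_rep[OF G] by blast
    then have "val_ge (gr_rep (G (mu + real i / 2)) i) (mu + real i / 2 - real i / 2)"
      unfolding series_ge_def by blast
    then have "val_ge (gr_rep (G (mu + real i / 2)) i) mu" by simp
    then show "\<exists>r\<in>Fil RR u mu. gr_to_poly G i mu = gr_cls RR u mu r"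
      unfolding gr_to_poly_def RR_Fil val_ge_def by auto
  qed
  show "finite (gr_supp RR u (gr_to_poly G i))"
    using gr_supp_gr_to_poly_coeff[OF G] grB_finite_supp[OF G]
      by (rule finite_subset[OF _ finite_imageI])
qed

lemma gr_to_poly_bound: assumes G: "G \<in> carrier (gr (BRing u mul) (f_u u))"
  shows "\<exists>n. \<forall>m>n. gr_to_poly G m = (\<lambda>mu. Fil_plus RR u mu)"
proof -
  define S where "S = gr_supp (BRing u mul) (f_u u) G"
  have fS: "finite S" using grB_finite_supp[OF G] S_def by simp
  have ex: "\<forall>lam. \<exists>N. tail_ge N (gr_rep (G lam)) (lam + 1)"
    using grB_rep(1)[OF G] unfolding is_bseries_def by blast
  obtain Nf where Nf: "\<forall>lam. tail_ge (Nf lam) (gr_rep (G lam)) (lam + 1)"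
    using choice[OF ex] by blast
  obtain n where n: "\<forall>lam\<in>S. Nf lam \<le> n"
    using fS finite_nat_set_iff_bounded_le[of "Nf ` S"] by auto
  have "gr_to_poly G m = (\<lambda>mu. Fil_plus RR u mu)" if m: "m > n" for m
  proof
    fix mu
    define lam where "lam = mu + real m / 2"
    have "ereal mu < u (gr_rep (G lam) m)"
    proof (cases "lam \<in> S")
      case True
      then have "m \<ge> Nf lam" using n m by force
      then have "val_ge (gr_rep (G lam) m) (lam + 1 - real m / 2)"
        using Nf unfolding tail_ge_def by blast
      then have "val_ge (gr_rep (G lam) m) (mu + 1)" unfolding lam_def by simp
      then have "val_ge (gr_rep (G lam) m) (mu + 1/2)" by (rule val_ge_mono) simp
      then show ?thesis by (rule val_gt_if_val_ge)
    next
      case False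
      then have "ereal (lam - real m / 2) < u (gr_rep (G lam) m)"
        using grB_rep_notin_supp[OF G] S_def by blast
      then show ?thesis unfolding lam_def by simp
    qed
    then show "gr_to_poly G m mu = Fil_plus RR u mu"
      unfolding gr_to_poly_def gr_cls_RR_eq_Fil_plus_iff lam_def by simp
  qed
  then show ?thesis by blast
qed

lemma gr_to_poly_carrier: assumes G: "G \<in> carrier (gr (BRing u mul) (f_u u))"
  shows "gr_to_poly G \<in> carrier (UP (gr RR u))"
proof -
  obtain n where n: "\<forall>m>n. gr_to_poly G m = (\<lambda>mu. Fil_plus RR u mu)"
    using gr_to_poly_bound[OF G] by blast
  have "gr_to_poly G \<in> up (gr RR u)"
  proof (rule mem_upI)
    fix m show "gr_to_poly G m \<in> carrier (gr RR u)" by (rule gr_to_poly_coeff_carrier[OF G])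
  next
    have "bound \<zero>\<^bsub>gr RR u\<^esub> n (gr_to_poly G)"
      by (rule bound.intro) (simp add: n gr_zero[OF ring_RR is_filtration_RR])
    then show "\<exists>n. bound \<zero>\<^bsub>gr RR u\<^esub> n (gr_to_poly G)" by blast
  qed
  then show ?thesis by (simp add: UP_def)
qed

lemma gr_rep_BRing_Fil_plus:
  "eq_mod (lam - real i / 2) (gr_rep (Fil_plus (BRing u mul) (f_u u) lam) i) 0"
proof -
  have "Fil_plus (BRing u mul) (f_u u) lam = gr_cls (BRing u mul) (f_u u) lam (\<lambda>n. 0)"
    using gr_cls_zero[OF ring_BRing is_filtration_f_u, of lam] by simp
  then show ?thesis using gr_rep_BRing(2)[OF is_bseries_zero, where lam=lam and i=i] by simp
qed

lemma gr_to_poly_add: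
  assumes G: "G \<in> carrier (gr (BRing u mul) (f_u u))"
    and H: "H \<in> carrier (gr (BRing u mul) (f_u u))"
  shows "gr_to_poly (G \<oplus>\<^bsub>gr (BRing u mul) (f_u u)\<^esub> H) = gr_to_poly G \<oplus>\<^bsub>UP (gr RR u)\<^esub> gr_to_poly H"
proof (rule ext, rule ext)
  fix i mu
  define lam where "lam = mu + real i / 2"
  define P where "P = gr_rep (G lam)"
  define Q where "Q = gr_rep (H lam)"
  have bP: "is_bseries P" using grB_rep[OF G] P_def by blast
  have bQ: "is_bseries Q" using grB_rep[OF H] Q_def by blast
  have ml: "lam - real i / 2 = mu" unfolding lam_def by simp
  have GH: "(G \<oplus>\<^bsub>gr (BRing u mul) (f_u u)\<^esub> H) lam = gr_cls (BRing u mul) (f_u u) lam (\<lambda>n. P n + Q n)"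
    unfolding gr_add[OF ring_BRing is_filtration_f_u] P_def Q_def by (simp add: s_add_def)
  have L: "gr_to_poly (G \<oplus>\<^bsub>gr (BRing u mul) (f_u u)\<^esub> H) i mu = gr_cls RR u mu (P i + Q i)"
  proof -
    have "eq_mod mu (gr_rep (gr_cls (BRing u mul) (f_u u) lam (\<lambda>n. P n + Q n)) i) (P i + Q i)"
      using gr_rep_BRing(2)[OF is_bseries_add[OF bP bQ], where lam=lam and i=i] ml by simp
    then show ?thesis unfolding gr_to_poly_def lam_def[symmetric] GH gr_cls_RR_eq_iff by simp
  qed
  have R: "(gr_to_poly G \<oplus>\<^bsub>UP (gr RR u)\<^esub> gr_to_poly H) i mu =
      gr_cls RR u mu (gr_rep (gr_to_poly G i mu) + gr_rep (gr_to_poly H i mu))"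
    by (simp add: UP_add_eq[OF gr_to_poly_carrier[OF G] gr_to_poly_carrier[OF H]] grR_add)
  have e1: "eq_mod mu (gr_rep (gr_to_poly G i mu)) (P i)"
    unfolding gr_to_poly_def lam_def[symmetric] P_def by (rule gr_rep_RR)
  have e2: "eq_mod mu (gr_rep (gr_to_poly H i mu)) (Q i)"
    unfolding gr_to_poly_def lam_def[symmetric] Q_def by (rule gr_rep_RR)
  show "gr_to_poly (G \<oplus>\<^bsub>gr (BRing u mul) (f_u u)\<^esub> H) i mu = (gr_to_poly G \<oplus>\<^bsub>UP (gr RR u)\<^esub> gr_to_poly H) i mu"
    unfolding L R gr_cls_RR_eq_iff by (rule eq_mod_sym, rule eq_mod_add[OF e1 e2])
qed

lemma gr_to_poly_one: "gr_to_poly \<one>\<^bsub>gr (BRing u mul) (f_u u)\<^esub> = \<one>\<^bsub>UP (gr RR u)\<^esub>"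
proof (rule ext, rule ext)
  fix i mu
  define lam where "lam = mu + real i / 2"
  have ml: "lam - real i / 2 = mu" unfolding lam_def by simp
  have lhs: "gr_to_poly \<one>\<^bsub>gr (BRing u mul) (f_u u)\<^esub> i mu =
    gr_cls RR u mu (gr_rep (if lam = 0 then gr_cls (BRing u mul) (f_u u) 0 (const_s 1)
       else Fil_plus (BRing u mul) (f_u u) lam) i)"
    unfolding gr_to_poly_def gr_one[OF ring_BRing is_filtration_f_u] lam_def by simp
  have rhs: "\<one>\<^bsub>UP (gr RR u)\<^esub> i mu = (if i = 0 then (if mu = 0 then gr_cls RR u 0 1 else Fil_plus RR u mu)
      else Fil_plus RR u mu)"
    by (simp add: UP_one_eq gr_one[OF ring_RR is_filtration_RR] gr_zero[OF ring_RR is_filtration_RR])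
  show "gr_to_poly \<one>\<^bsub>gr (BRing u mul) (f_u u)\<^esub> i mu = \<one>\<^bsub>UP (gr RR u)\<^esub> i mu"
  proof (cases "lam = 0")
    case True
    have e: "eq_mod mu (gr_rep (gr_cls (BRing u mul) (f_u u) 0 (const_s 1)) i) (const_s 1 i)"
      using gr_rep_BRing(2)[OF is_bseries_const[of 1], where lam=0 and i=i] ml True by simp
    have "gr_to_poly \<one>\<^bsub>gr (BRing u mul) (f_u u)\<^esub> i mu = gr_cls RR u mu (const_s 1 i)"
      unfolding lhs using True e gr_cls_RR_eq_iff by simp
    then show ?thesis unfolding rhs using True lam_def
      by (auto simp: const_s_def gr_cls_RR_eq_Fil_plus_iff u_zero)
  next
    case False
    have e: "eq_mod mu (gr_rep (Fil_plus (BRing u mul) (f_u u) lam) i) 0"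
      using gr_rep_BRing_Fil_plus[of lam i] ml by simp
    have "gr_to_poly \<one>\<^bsub>gr (BRing u mul) (f_u u)\<^esub> i mu = gr_cls RR u mu 0"
      unfolding lhs using False e gr_cls_RR_eq_iff by simp
    then show ?thesis unfolding rhs using False lam_def gr_cls_zero[OF ring_RR is_filtration_RR]
      by auto
  qed
qed

lemma gr_to_poly_mult_coeff:
  assumes G: "G \<in> carrier (gr (BRing u mul) (f_u u))"
    and H: "H \<in> carrier (gr (BRing u mul) (f_u u))"
  shows "gr_to_poly (G \<otimes>\<^bsub>gr (BRing u mul) (f_u u)\<^esub> H) n mu = gr_cls RR u mu
    (\<Sum>\<nu>\<in>gr_supp (BRing u mul) (f_u u) G. \<Sum>i\<le>n. gr_rep (G \<nu>) i * gr_rep (H (mu + real n / 2 - \<nu>)) (n - i))"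
proof -
  define lam where "lam = mu + real n / 2"
  define SG where "SG = gr_supp (BRing u mul) (f_u u) G"
  define P where "P \<nu> = gr_rep (G \<nu>)" for \<nu>
  define Q where "Q \<kappa> = gr_rep (H \<kappa>)" for \<kappa>
  have fSG: "finite SG" using grB_finite_supp[OF G] SG_def by simp
  have bP: "is_bseries (P \<nu>)" "series_ge (P \<nu>) \<nu>" for \<nu> using grB_rep[OF G] P_def by auto
  have bQ: "is_bseries (Q \<nu>)" "series_ge (Q \<nu>) \<nu>" for \<nu> using grB_rep[OF H] Q_def by auto
  define S where "S = (\<lambda>k. \<Sum>\<nu>\<in>SG. skew_mult (P \<nu>) (Q (lam - \<nu>)) k)"
  have bS: "is_bseries S"
    unfolding S_def by (rule is_bseries_sum[OF fSG]) (use is_bseries_skew_mult bP bQ in blast)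
  have "(G \<otimes>\<^bsub>gr (BRing u mul) (f_u u)\<^esub> H) lam =
      gr_cls (BRing u mul) (f_u u) lam (finsum (BRing u mul) (\<lambda>\<nu>. mul (P \<nu>) (Q (lam - \<nu>))) SG)"
    unfolding gr_mult[OF ring_BRing is_filtration_f_u] SG_def P_def Q_def by simp
  also have "finsum (BRing u mul) (\<lambda>\<nu>. mul (P \<nu>) (Q (lam - \<nu>))) SG =
      (\<lambda>k. \<Sum>\<nu>\<in>SG. mul (P \<nu>) (Q (lam - \<nu>)) k)"
    by (rule finsum_BRing[OF fSG]) (simp add: mul_eq_skew_mult bP bQ is_bseries_skew_mult)
  also have "\<dots> = S" unfolding S_def by (simp add: mul_eq_skew_mult bP bQ)
  finally have "eq_mod mu (gr_rep ((G \<otimes>\<^bsub>gr (BRing u mul) (f_u u)\<^esub> H) lam) n) (S n)"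
    using gr_rep_BRing(2)[OF bS, where lam=lam and i=n] by (simp add: lam_def)
  also have "eq_mod mu (S n) (\<Sum>\<nu>\<in>SG. \<Sum>i\<le>n. P \<nu> i * Q (lam - \<nu>) (n - i))"
    unfolding S_def
  proof (rule eq_mod_sum[OF fSG])
    fix \<nu>
    show "eq_mod mu (skew_mult (P \<nu>) (Q (lam - \<nu>)) n) (\<Sum>i\<le>n. P \<nu> i * Q (lam - \<nu>) (n - i))"
      using skew_mult_coeff_approx[OF bP bQ, of \<nu> "lam - \<nu>" n] by (simp add: lam_def)
  qed
  finally show ?thesis
    by (simp add: gr_to_poly_def gr_cls_RR_eq_iff lam_def SG_def P_def Q_def)
qed

lemma eq_mod_gr_to_poly_coeff_mult:
  assumes G: "G \<in> carrier (gr (BRing u mul) (f_u u))"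
    and H: "H \<in> carrier (gr (BRing u mul) (f_u u))"
  shows "eq_mod mu (gr_rep (gr_to_poly G i (\<nu> - real i / 2)) * gr_rep (gr_to_poly H j (mu - (\<nu> - real i / 2))))
    (gr_rep (G \<nu>) i * gr_rep (H (mu + real (i + j) / 2 - \<nu>)) j)"
proof -
  define a where "a = \<nu> - real i / 2"
  define b where "b = mu - \<nu> + real i / 2"
  have "eq_mod a (gr_rep (gr_to_poly G i a)) (gr_rep (G \<nu>) i)"
    using gr_rep_RR unfolding gr_to_poly_def a_def by simp
  moreover have "eq_mod b (gr_rep (gr_to_poly H j b)) (gr_rep (H (mu + real (i + j) / 2 - \<nu>)) j)"
  proof -
    have "b + real j / 2 = mu + real (i + j) / 2 - \<nu>" unfolding b_def by (simp add: field_simps)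
    then show ?thesis using gr_rep_RR unfolding gr_to_poly_def by simp
  qed
  moreover have "ereal a \<le> u (gr_rep (G \<nu>) i)"
    using grB_rep(2)[OF G, of \<nu>] unfolding series_ge_def val_ge_def a_def by blast
  moreover have "ereal b \<le> u (gr_rep (gr_to_poly H j b))"
    by (rule grR_rep(1)[OF gr_to_poly_coeff_carrier[OF H]])
  ultimately have "eq_mod (a + b) (gr_rep (gr_to_poly G i a) * gr_rep (gr_to_poly H j b))
      (gr_rep (G \<nu>) i * gr_rep (H (mu + real (i + j) / 2 - \<nu>)) j)"
    by (rule eq_mod_mult)
  moreover have "a + b = mu" "b = mu - (\<nu> - real i / 2)" unfolding a_def b_def by simp_all
  ultimately show ?thesis unfolding a_def by simp
qed

lemma gr_rep_gr_to_poly_coeff_mult: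
  assumes G: "G \<in> carrier (gr (BRing u mul) (f_u u))"
    and H: "H \<in> carrier (gr (BRing u mul) (f_u u))"
  shows "eq_mod mu (gr_rep ((gr_to_poly G i \<otimes>\<^bsub>gr RR u\<^esub> gr_to_poly H j) mu))
    (\<Sum>\<nu>\<in>gr_supp (BRing u mul) (f_u u) G. gr_rep (G \<nu>) i * gr_rep (H (mu + real (i + j) / 2 - \<nu>)) j)"
proof -
  define SG where "SG = gr_supp (BRing u mul) (f_u u) G"
  define Si where "Si = (\<lambda>\<nu>. \<nu> - real i / 2) ` SG"
  have fSG: "finite SG" using grB_finite_supp[OF G] SG_def by simp
  then have fSi: "finite Si" unfolding Si_def by simp
  have "(gr_to_poly G i \<otimes>\<^bsub>gr RR u\<^esub> gr_to_poly H j) mu = gr_cls RR u mu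
      (\<Sum>\<nu>'\<in>Si. gr_rep (gr_to_poly G i \<nu>') * gr_rep (gr_to_poly H j (mu - \<nu>')))"
    using gr_mult_over_superset[OF ring_RR is_filtration_RR gr_to_poly_coeff_carrier[OF G, of i]
        gr_to_poly_coeff_carrier[OF H, of j] fSi[unfolded Si_def SG_def]
          gr_supp_gr_to_poly_coeff[OF G, of i]]
    by (simp add: RR_finsum[OF fSi[unfolded Si_def SG_def]] Si_def SG_def)
  then have "eq_mod mu (gr_rep ((gr_to_poly G i \<otimes>\<^bsub>gr RR u\<^esub> gr_to_poly H j) mu))
      (\<Sum>\<nu>'\<in>Si. gr_rep (gr_to_poly G i \<nu>') * gr_rep (gr_to_poly H j (mu - \<nu>')))"
    using gr_rep_RR by simp
  also have "(\<Sum>\<nu>'\<in>Si. gr_rep (gr_to_poly G i \<nu>') * gr_rep (gr_to_poly H j (mu - \<nu>'))) =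
      (\<Sum>\<nu>\<in>SG. gr_rep (gr_to_poly G i (\<nu> - real i / 2)) * gr_rep (gr_to_poly H j (mu - (\<nu> - real i / 2))))"
    unfolding Si_def by (rule sum.reindex_cong[OF _ refl refl]) (simp add: inj_on_def)
  also have "eq_mod mu \<dots> (\<Sum>\<nu>\<in>SG. gr_rep (G \<nu>) i * gr_rep (H (mu + real (i + j) / 2 - \<nu>)) j)"
    by (rule eq_mod_sum[OF fSG eq_mod_gr_to_poly_coeff_mult[OF G H]])
  finally show ?thesis unfolding SG_def .
qed

lemma gr_to_poly_mult:
  assumes G: "G \<in> carrier (gr (BRing u mul) (f_u u))"
    and H: "H \<in> carrier (gr (BRing u mul) (f_u u))"
  shows "gr_to_poly (G \<otimes>\<^bsub>gr (BRing u mul) (f_u u)\<^esub> H) = gr_to_poly G \<otimes>\<^bsub>UP (gr RR u)\<^esub> gr_to_poly H"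
proof (intro ext)
  fix n mu
  define SG where "SG = gr_supp (BRing u mul) (f_u u) G"
  have "(\<lambda>i. gr_to_poly G i \<otimes>\<^bsub>gr RR u\<^esub> gr_to_poly H (n - i)) \<in> {..n} \<rightarrow> carrier (gr RR u)"
    using grR_mult_closed gr_to_poly_coeff_carrier[OF G] gr_to_poly_coeff_carrier[OF H] by blast
  then have "(gr_to_poly G \<otimes>\<^bsub>UP (gr RR u)\<^esub> gr_to_poly H) n mu =
      gr_cls RR u mu (\<Sum>i\<le>n. gr_rep ((gr_to_poly G i \<otimes>\<^bsub>gr RR u\<^esub> gr_to_poly H (n - i)) mu))"
    by (simp add: UP_mult_eq[OF gr_to_poly_carrier[OF G] gr_to_poly_carrier[OF H]] grR_finsum)
  also have "\<dots> = gr_cls RR u mu (\<Sum>i\<le>n. \<Sum>\<nu>\<in>SG. gr_rep (G \<nu>) i * gr_rep (H (mu + real n / 2 - \<nu>)) (n - i))"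
    unfolding gr_cls_RR_eq_iff SG_def
  proof (rule eq_mod_sum[OF finite_atMost])
    fix i assume "i \<in> {..n}"
    then have "real (i + (n - i)) = real n" by simp
    then show "eq_mod mu (gr_rep ((gr_to_poly G i \<otimes>\<^bsub>gr RR u\<^esub> gr_to_poly H (n - i)) mu))
        (\<Sum>\<nu>\<in>gr_supp (BRing u mul) (f_u u) G. gr_rep (G \<nu>) i * gr_rep (H (mu + real n / 2 - \<nu>)) (n - i))"
      using gr_rep_gr_to_poly_coeff_mult[OF G H, of mu i "n - i"] by simp
  qed
  also have "\<dots> = gr_to_poly (G \<otimes>\<^bsub>gr (BRing u mul) (f_u u)\<^esub> H) n mu"
    unfolding gr_to_poly_mult_coeff[OF G H] SG_def by (subst sum.swap) (rule refl)
  finally show "gr_to_poly (G \<otimes>\<^bsub>gr (BRing u mul) (f_u u)\<^esub> H) n mu =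
      (gr_to_poly G \<otimes>\<^bsub>UP (gr RR u)\<^esub> gr_to_poly H) n mu"
    by (rule sym)
qed

definition poly_to_gr :: "(nat \<Rightarrow> real \<Rightarrow> 'a set) \<Rightarrow> real \<Rightarrow> (nat \<Rightarrow> 'a) set" where
  "poly_to_gr p = (\<lambda>lam. gr_cls (BRing u mul) (f_u u) lam (poly_series p lam))"

lemma gr_cls_BRing_zero:
  "gr_cls (BRing u mul) (f_u u) lam (\<lambda>n. 0) = Fil_plus (BRing u mul) (f_u u) lam"
  using gr_cls_zero[OF ring_BRing is_filtration_f_u, of lam] by simp

lemma poly_to_gr_carrier: assumes p: "p \<in> carrier (UP (gr RR u))"
  shows "poly_to_gr p \<in> carrier (gr (BRing u mul) (f_u u))"
  unfolding gr_carrier[OF ring_BRing is_filtration_f_u]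
proof
  show "\<forall>lam. \<exists>r\<in>Fil (BRing u mul) (f_u u) lam. poly_to_gr p lam = gr_cls (BRing u mul) (f_u u) lam r"
    unfolding poly_to_gr_def Fil_BRing using poly_series_spec[OF p] by blast
  have pc: "p i \<in> carrier (gr RR u)" for i using p UP_carrier_iff by blast
  obtain n where n0: "\<forall>m>n. p m = \<zero>\<^bsub>gr RR u\<^esub>" using p UP_carrier_iff by blast
  have n: "\<forall>m>n. p m = (\<lambda>mu. Fil_plus RR u mu)"
    using n0 gr_zero[OF ring_RR is_filtration_RR] by simp
  have fin: "finite (gr_supp RR u (p i))" for i using pc gr_carrier[OF ring_RR is_filtration_RR]
    by blast
  have "gr_supp (BRing u mul) (f_u u) (poly_to_gr p) \<subseteq> (\<Union>i\<in>{..n}. (\<lambda>mu. mu + real i / 2) ` gr_supp RR u (p i))"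
  proof
    fix lam assume a: "lam \<in> gr_supp (BRing u mul) (f_u u) (poly_to_gr p)"
    show "lam \<in> (\<Union>i\<in>{..n}. (\<lambda>mu. mu + real i / 2) ` gr_supp RR u (p i))"
    proof (rule ccontr)
      assume na: "lam \<notin> (\<Union>i\<in>{..n}. (\<lambda>mu. mu + real i / 2) ` gr_supp RR u (p i))"
      have "poly_series p lam i = 0" for i
      proof (cases "i \<le> n")
        case True
        have "lam - real i / 2 \<notin> gr_supp RR u (p i)"
        proof
          assume "lam - real i / 2 \<in> gr_supp RR u (p i)"
          then have "lam \<in> (\<lambda>mu. mu + real i / 2) ` gr_supp RR u (p i)" by force
          then show False using na True by blast
        qed
        then show ?thesis unfolding poly_series_def gr_supp_def by simp
      next
        case False then show ?thesis unfolding poly_series_def using n by simp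
      qed
      then have "poly_series p lam = (\<lambda>n. 0)" by auto
      then have "poly_to_gr p lam = Fil_plus (BRing u mul) (f_u u) lam"
        unfolding poly_to_gr_def by (simp add: gr_cls_BRing_zero)
      then show False using a gr_supp_def by blast
    qed
  qed
  then show "finite (gr_supp (BRing u mul) (f_u u) (poly_to_gr p))"
    by (rule finite_subset) (use fin in auto)
qed

lemma gr_to_poly_poly_to_gr:
  assumes p: "p \<in> carrier (UP (gr RR u))"
  shows "gr_to_poly (poly_to_gr p) = p"
proof (rule ext, rule ext)
  fix i mu
  define lam where "lam = mu + real i / 2"
  have ml: "lam - real i / 2 = mu" unfolding lam_def by simp
  have "eq_mod mu (gr_rep (poly_to_gr p lam) i) (poly_series p lam i)"
    unfolding poly_to_gr_def using gr_rep_BRing(2)[OF poly_series_spec(1)[OF p], where lam=lam and i=i] ml by simp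
  then have "gr_to_poly (poly_to_gr p) i mu = gr_cls RR u mu (poly_series p lam i)"
    unfolding gr_to_poly_def lam_def[symmetric] gr_cls_RR_eq_iff .
  also have "\<dots> = p i mu" using poly_series_spec(3)[OF p, of lam i] ml by simp
  finally show "gr_to_poly (poly_to_gr p) i mu = p i mu" .
qed

lemma gr_to_poly_inj: "inj_on gr_to_poly (carrier (gr (BRing u mul) (f_u u)))"
proof (rule inj_onI)
  fix G H
  assume G: "G \<in> carrier (gr (BRing u mul) (f_u u))" and H: "H \<in> carrier (gr (BRing u mul) (f_u u))"
    and e: "gr_to_poly G = gr_to_poly H"
  show "G = H"
  proof
    fix lam
    have "eq_mod (lam - real i / 2) (gr_rep (G lam) i) (gr_rep (H lam) i)" for i
    proof -
      have "gr_to_poly G i (lam - real i / 2) = gr_to_poly H i (lam - real i / 2)" using e by simp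
      then show ?thesis unfolding gr_to_poly_def gr_cls_RR_eq_iff by simp
    qed
    then have "gr_cls (BRing u mul) (f_u u) lam (gr_rep (G lam)) =
        gr_cls (BRing u mul) (f_u u) lam (gr_rep (H lam))"
      using gr_cls_BRing_eq_iff[OF grB_rep(1)[OF G] grB_rep(1)[OF H]] by blast
    then show "G lam = H lam" using grB_rep(3)[OF G] grB_rep(3)[OF H] by simp
  qed
qed

lemma gr_to_poly_iso: "gr_to_poly \<in> ring_iso (gr (BRing u mul) (f_u u)) (UP (gr RR u))"
  unfolding ring_iso_def ring_hom_def bij_betw_def
proof (intro CollectI conjI allI impI Pi_I)
  fix G assume "G \<in> carrier (gr (BRing u mul) (f_u u))"
  then show "gr_to_poly G \<in> carrier (UP (gr RR u))" by (rule gr_to_poly_carrier)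
next
  fix G H assume "G \<in> carrier (gr (BRing u mul) (f_u u)) \<and> H \<in> carrier (gr (BRing u mul) (f_u u))"
  then show "gr_to_poly (G \<otimes>\<^bsub>gr (BRing u mul) (f_u u)\<^esub> H) = gr_to_poly G \<otimes>\<^bsub>UP (gr RR u)\<^esub> gr_to_poly H"
    "gr_to_poly (G \<oplus>\<^bsub>gr (BRing u mul) (f_u u)\<^esub> H) = gr_to_poly G \<oplus>\<^bsub>UP (gr RR u)\<^esub> gr_to_poly H"
    using gr_to_poly_mult gr_to_poly_add by auto
next
  show "gr_to_poly \<one>\<^bsub>gr (BRing u mul) (f_u u)\<^esub> = \<one>\<^bsub>UP (gr RR u)\<^esub>" by (rule gr_to_poly_one)
next
  show "inj_on gr_to_poly (carrier (gr (BRing u mul) (f_u u)))" by (rule gr_to_poly_inj)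
next
  show "gr_to_poly ` carrier (gr (BRing u mul) (f_u u)) = carrier (UP (gr RR u))"
  proof
    show "gr_to_poly ` carrier (gr (BRing u mul) (f_u u)) \<subseteq> carrier (UP (gr RR u))"
      using gr_to_poly_carrier by blast
    show "carrier (UP (gr RR u)) \<subseteq> gr_to_poly ` carrier (gr (BRing u mul) (f_u u))"
    proof
      fix p assume p: "p \<in> carrier (UP (gr RR u))"
      then have "gr_to_poly (poly_to_gr p) = p" "poly_to_gr p \<in> carrier (gr (BRing u mul) (f_u u))"
        using gr_to_poly_poly_to_gr poly_to_gr_carrier by auto
      then show "p \<in> gr_to_poly ` carrier (gr (BRing u mul) (f_u u))" by force
    qed
  qed
qed

lemma gr_to_poly_gr_hom:
  assumes "G \<in> gr_hom (BRing u mul) (f_u u) lam"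
  shows "gr_to_poly G \<in> grpoly_hom RR u lam"
proof -
  have G: "G \<in> carrier (gr (BRing u mul) (f_u u))"
    "\<And>mu. mu \<noteq> lam \<Longrightarrow> G mu = Fil_plus (BRing u mul) (f_u u) mu"
    using assms unfolding gr_hom_def by blast+
  have "gr_to_poly G i \<in> gr_hom RR u (lam - real i / 2)" for i
    unfolding gr_hom_def
  proof (intro CollectI conjI allI impI)
    show "gr_to_poly G i \<in> carrier (gr RR u)" by (rule gr_to_poly_coeff_carrier[OF G(1)])
    fix mu assume "mu \<noteq> lam - real i / 2"
    then have "G (mu + real i / 2) = Fil_plus (BRing u mul) (f_u u) (mu + real i / 2)"
      by (intro G(2)) linarith
    then have "eq_mod mu (gr_rep (G (mu + real i / 2)) i) 0"
      using gr_rep_BRing_Fil_plus[of "mu + real i / 2" i] by simp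
    then show "gr_to_poly G i mu = Fil_plus RR u mu"
      unfolding gr_to_poly_def gr_cls_RR_eq_Fil_plus_iff eq_mod_0_iff by simp
  qed
  then show ?thesis unfolding grpoly_hom_def using gr_to_poly_carrier[OF G(1)] by blast
qed

lemma poly_to_gr_grpoly_hom:
  assumes "p \<in> grpoly_hom RR u lam"
  shows "poly_to_gr p \<in> gr_hom (BRing u mul) (f_u u) lam"
proof -
  have p: "p \<in> carrier (UP (gr RR u))" "\<And>i. p i \<in> gr_hom RR u (lam - real i / 2)"
    using assms unfolding grpoly_hom_def by auto
  show ?thesis
    unfolding gr_hom_def
  proof (intro CollectI conjI allI impI)
    show "poly_to_gr p \<in> carrier (gr (BRing u mul) (f_u u))" by (rule poly_to_gr_carrier[OF p(1)])
    fix lam' assume "lam' \<noteq> lam"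
    then have "p i (lam' - real i / 2) = Fil_plus RR u (lam' - real i / 2)" for i
      using p(2)[of i] unfolding gr_hom_def by simp
    then have "poly_series p lam' = (\<lambda>n. 0)"
      unfolding poly_series_def by simp
    then show "poly_to_gr p lam' = Fil_plus (BRing u mul) (f_u u) lam'"
      unfolding poly_to_gr_def by (simp add: gr_cls_BRing_zero)
  qed
qed

lemma gr_to_poly_homogeneous: "gr_to_poly ` gr_hom (BRing u mul) (f_u u) lam = grpoly_hom RR u lam"
proof
  show "gr_to_poly ` gr_hom (BRing u mul) (f_u u) lam \<subseteq> grpoly_hom RR u lam"
    using gr_to_poly_gr_hom by blast
  show "grpoly_hom RR u lam \<subseteq> gr_to_poly ` gr_hom (BRing u mul) (f_u u) lam"
  proof
    fix p assume p: "p \<in> grpoly_hom RR u lam"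
    then have "gr_to_poly (poly_to_gr p) = p"
      by (intro gr_to_poly_poly_to_gr) (simp add: grpoly_hom_def)
    with poly_to_gr_grpoly_hom[OF p] show "p \<in> gr_to_poly ` gr_hom (BRing u mul) (f_u u) lam"
      by force
  qed
qed

lemma gr_to_poly_gr_incl: assumes g: "g \<in> carrier (gr RR u)"
  shows "gr_to_poly (gr_incl u mul g) = monom (UP (gr RR u)) g 0"
proof (rule ext, rule ext)
  fix i mu
  define lam where "lam = mu + real i / 2"
  have ml: "lam - real i / 2 = mu" unfolding lam_def by simp
  have "eq_mod mu (gr_rep (gr_incl u mul g lam) i) (const_s (gr_rep (g lam)) i)"
    unfolding gr_incl_def using gr_rep_BRing(2)[OF is_bseries_const[of "gr_rep (g lam)"], where lam=lam and i=i] ml by simp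
  then have e: "gr_to_poly (gr_incl u mul g) i mu = gr_cls RR u mu (const_s (gr_rep (g lam)) i)"
    unfolding gr_to_poly_def lam_def[symmetric] gr_cls_RR_eq_iff .
  show "gr_to_poly (gr_incl u mul g) i mu = monom (UP (gr RR u)) g 0 i mu"
  proof (cases "i = 0")
    case True
    then have "lam = mu" unfolding lam_def by simp
    then show ?thesis unfolding e UP_monom_eq[OF g] using True grR_rep(2)[OF g]
      by (simp add: const_s_def)
  next
    case False
    then show ?thesis unfolding e UP_monom_eq[OF g]
      by (simp add: const_s_def gr_zero[OF ring_RR is_filtration_RR] gr_cls_RR_zero)
  qed
qed

lemma gr_to_poly_x:
  "gr_to_poly (gr_sym (BRing u mul) (f_u u) (1/2) (xpow 1)) = monom (UP (gr RR u)) \<one>\<^bsub>gr RR u\<^esub> 1"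
proof (rule ext, rule ext)
  fix i mu
  define lam where "lam = mu + real i / 2"
  have ml: "lam - real i / 2 = mu" unfolding lam_def by simp
  have rhs: "monom (UP (gr RR u)) \<one>\<^bsub>gr RR u\<^esub> 1 i mu =
      (if i = 1 then (if mu = 0 then gr_cls RR u 0 1 else Fil_plus RR u mu) else Fil_plus RR u mu)"
    unfolding UP_monom_eq[OF grR_one_closed]
      by (simp add: gr_one[OF ring_RR is_filtration_RR] gr_zero[OF ring_RR is_filtration_RR])
  show "gr_to_poly (gr_sym (BRing u mul) (f_u u) (1/2) (xpow 1)) i mu = monom (UP (gr RR u)) \<one>\<^bsub>gr RR u\<^esub> 1 i mu"
  proof (cases "lam = 1/2")
    case True
    have "eq_mod mu (gr_rep (gr_cls (BRing u mul) (f_u u) (1/2) (xpow 1)) i) (xpow 1 i)"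
      using gr_rep_BRing(2)[OF is_bseries_xpow[of 1], where lam="1/2" and i=i] ml True by simp
    then have e: "gr_to_poly (gr_sym (BRing u mul) (f_u u) (1/2) (xpow 1)) i mu = gr_cls RR u mu (xpow 1 i)"
      unfolding gr_to_poly_def lam_def[symmetric] gr_sym_def using True gr_cls_RR_eq_iff by simp
    show ?thesis
    proof (cases "i = 1")
      case True
      then have "mu = 0" using \<open>lam = 1/2\<close> lam_def by simp
      then show ?thesis unfolding e rhs using True by (simp add: xpow_def)
    next
      case False
      then show ?thesis unfolding e rhs using gr_cls_RR_zero by (simp add: xpow_def)
    qed
  next
    case False
    have "eq_mod mu (gr_rep (Fil_plus (BRing u mul) (f_u u) lam) i) 0"
      using gr_rep_BRing_Fil_plus[of lam i] ml by simp
    then have e: "gr_to_poly (gr_sym (BRing u mul) (f_u u) (1/2) (xpow 1)) i mu = Fil_plus RR u mu"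
      unfolding gr_to_poly_def lam_def[symmetric] gr_sym_def
        using False gr_cls_RR_eq_Fil_plus_iff eq_mod_0_iff by simp
    have "i = 1 \<Longrightarrow> mu \<noteq> 0" using False lam_def by auto
    then show ?thesis unfolding e rhs by auto
  qed
qed

lemma gr_iso_UP:
  "\<exists>\<phi>. \<phi> \<in> ring_iso (gr (BRing u mul) (f_u u)) (UP (gr RR u)) \<and>
     (\<forall>lam. \<phi> ` gr_hom (BRing u mul) (f_u u) lam = grpoly_hom RR u lam) \<and>
     (\<forall>g\<in>carrier (gr RR u). \<phi> (gr_incl u mul g) = monom (UP (gr RR u)) g 0) \<and>
     \<phi> (gr_sym (BRing u mul) (f_u u) (1/2) (xpow 1)) = monom (UP (gr RR u)) \<one>\<^bsub>gr RR u\<^esub> 1"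
  using gr_to_poly_iso gr_to_poly_homogeneous gr_to_poly_gr_incl gr_to_poly_x by blast

end

lemma compatible_deg_ge_1:
  fixes u :: "'a::ring_1 \<Rightarrow> ereal" and d :: "'a \<Rightarrow> 'a"
  assumes dpos: "0 < deg_u u d" and d_zero: "d 0 = 0" and u_zero: "u 0 = \<infinity>"
    and u_int_valued: "\<forall>x. u x = \<infinity> \<or> (\<exists>k::int. u x = ereal (of_int k))"
    and u_separated: "\<And>x. u x = \<infinity> \<Longrightarrow> x = 0"
    and r: "ereal r \<le> u x"
  shows "ereal (r + 1) \<le> u (d x)"
proof (cases "x = 0")
  case True then show ?thesis using d_zero u_zero by simp
next
  case False
  then obtain k :: int where k: "u x = ereal (of_int k)" using u_int_valued u_separated by blast
  have "deg_u u d \<le> u (d x) - u x" unfolding deg_u_def by (rule INF_lower) (simp add: False)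
  then have gt: "0 < u (d x) - ereal (of_int k)" using dpos k by simp
  show ?thesis
  proof (cases "u (d x) = \<infinity>")
    case True then show ?thesis by simp
  next
    case False
    then obtain m :: int where m: "u (d x) = ereal (of_int m)" using u_int_valued by blast
    have "k < m" using gt m by simp
    then have "real_of_int k + 1 \<le> real_of_int m" by linarith
    moreover have "r \<le> real_of_int k" using r k by simp
    ultimately show ?thesis using m by simp
  qed
qed

lemma complete_skew_filtrationI:
  fixes u :: "'a::ring_1 \<Rightarrow> ereal" and \<sigma> \<delta> :: "'a \<Rightarrow> 'a"
  assumes filt: "is_filtration RR u"
    and int_valued: "\<forall>x. u x = \<infinity> \<or> (\<exists>k::int. u x = ereal (of_int k))"
    and unit: "u 1 = 0"
    and sep: "separated RR u"
    and compl: "filt_complete RR u"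
    and skew: "skew_derivation \<sigma> \<delta>"
    and compat: "compatible u \<sigma> \<delta>"
  shows "complete_skew_filtration u \<sigma> \<delta>"
proof
  show "u 0 = \<infinity>" "min (u x) (u y) \<le> u (x + y)" "u x + u y \<le> u (x * y)" "u (- x) = u x" for x y
    using filt unfolding is_filtration_def by simp_all
  show "u x = \<infinity> \<or> (\<exists>k::int. u x = ereal (of_int k))" for x
    using int_valued by blast
  show "u 1 = 0" by (rule unit)
  show sep': "u x = \<infinity> \<Longrightarrow> x = 0" for x
    using sep unfolding separated_def by simp
  show "\<sigma> (x + y) = \<sigma> x + \<sigma> y" "\<sigma> (x * y) = \<sigma> x * \<sigma> y" "\<sigma> 1 = 1"
    "\<delta> (x + y) = \<delta> x + \<delta> y" "\<delta> (x * y) = \<delta> x * y + \<sigma> x * \<delta> y" for x y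
    using skew unfolding skew_derivation_def by auto
  show "\<exists>l. \<forall>r::real. \<exists>N. \<forall>n\<ge>N. ereal r \<le> u (s n - l)"
    if "\<forall>r::real. \<exists>N. \<forall>m\<ge>N. \<forall>n\<ge>N. ereal r \<le> u (s m - s n)" for s :: "nat \<Rightarrow> 'a"
  proof -
    have "filt_cauchy RR u s" unfolding filt_cauchy_def using that by simp
    then obtain l where "filt_converges RR u s l" using compl unfolding filt_complete_def by auto
    then have "\<forall>r. \<exists>N. \<forall>n\<ge>N. ereal r < u (s n - l)"
      unfolding filt_converges_def tendsto_PInfty eventually_sequentially by simp
    then show ?thesis by (meson less_imp_le)
  qed
  have "\<sigma> 0 = 0" "\<delta> 0 = 0"
    using skew unfolding skew_derivation_def by (metis add_cancel_right_right)+
  moreover have "u 0 = \<infinity>" using filt unfolding is_filtration_def by simp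
  ultimately show "ereal r \<le> u x \<Longrightarrow> ereal (r + 1) \<le> u (\<sigma> x - x)"
    "ereal r \<le> u x \<Longrightarrow> ereal (r + 1) \<le> u (\<delta> x)" for r x
    using compat int_valued sep' unfolding compatible_def
    by (auto intro: compatible_deg_ge_1)
qed

theorem proposition1p4p1:
  fixes u :: "'a::ring_1 \<Rightarrow> ereal" and \<sigma> \<delta> :: "'a \<Rightarrow> 'a"
  assumes filt: "is_filtration RR u"
    and int_valued: "\<forall>x. u x = \<infinity> \<or> (\<exists>k::int. u x = ereal (of_int k))"
    and unit: "u 1 = 0"
    and sep: "separated RR u"
    and compl: "filt_complete RR u"
    and skew: "skew_derivation \<sigma> \<delta>"
    and compat: "compatible u \<sigma> \<delta>"
  shows
    \<comment> \<open>(i) existence and uniqueness of the multiplication\<close>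
    "(\<exists>mul. skew_mult_ok u \<sigma> \<delta> mul) \<and>
     (\<forall>mul1 mul2. skew_mult_ok u \<sigma> \<delta> mul1 \<longrightarrow> skew_mult_ok u \<sigma> \<delta> mul2 \<longrightarrow>
        (\<forall>F\<in>bseries u. \<forall>G\<in>bseries u. mul1 F G = mul2 F G)) \<and>
     \<comment> \<open>(ii)\<close>
     (\<forall>mul. skew_mult_ok u \<sigma> \<delta> mul \<longrightarrow>
        (\<forall>F\<in>bseries u. f_u u F = \<infinity> \<or> (\<exists>k::int. f_u u F = ereal (of_int k / 2))) \<and>
        is_filtration (BRing u mul) (f_u u) \<and>
        (\<forall>a. f_u u (const_s a) = u a) \<and>
        filt_complete (BRing u mul) (f_u u) \<and>
        (\<exists>\<phi>. \<phi> \<in> ring_iso (gr (BRing u mul) (f_u u)) (UP (gr RR u)) \<and>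
             (\<forall>lam. \<phi> ` gr_hom (BRing u mul) (f_u u) lam = grpoly_hom RR u lam) \<and>
             (\<forall>g\<in>carrier (gr RR u). \<phi> (gr_incl u mul g) = monom (UP (gr RR u)) g 0) \<and>
             \<phi> (gr_sym (BRing u mul) (f_u u) (1/2) (xpow 1)) = monom (UP (gr RR u)) \<one>\<^bsub>gr RR u\<^esub> 1))"
proof -
  interpret complete_skew_filtration u \<sigma> \<delta>
    by (rule complete_skew_filtrationI[OF assms])
  have ring_mul: "skew_bseries_ring u \<sigma> \<delta> mul" if "skew_mult_ok u \<sigma> \<delta> mul" for mul
    by (intro skew_bseries_ring.intro skew_bseries_ring_axioms.intro complete_skew_filtration_axioms that)
  have uniqueness: "\<forall>F\<in>bseries u. \<forall>G\<in>bseries u. mul1 F G = mul2 F G"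
    if "skew_mult_ok u \<sigma> \<delta> mul1" "skew_mult_ok u \<sigma> \<delta> mul2" for mul1 mul2
    using skew_bseries_ring.mul_eq_skew_mult[OF ring_mul[OF that(1)]]
      skew_bseries_ring.mul_eq_skew_mult[OF ring_mul[OF that(2)]]
    by (simp add: bseries_iff)
  show ?thesis (is "?existence \<and> ?uniqueness \<and> ?properties")
  proof (intro conjI)
    show ?existence
      using skew_mult_ok_skew_mult by blast
    show ?uniqueness
      using uniqueness by blast
    show ?properties
      by (simp add: bseries_iff f_u_values f_u_const skew_bseries_ring.is_filtration_f_u[OF ring_mul]
          skew_bseries_ring.filt_complete_BRing[OF ring_mul] skew_bseries_ring.gr_iso_UP[OF ring_mul]
          del: One_nat_def)
  qed
qed

end
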